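(* $\mathtt{RealTime_{IA}} = \mathtt{pred}$-$\mathtt{dio}$-$\mathtt{ESO}$-$\mathtt{HORN}$. That is, a language $L\subseteq\Sigma^+$ is accepted in real time by an iterative array (sequential input, neighborhood $\{-1,0,1\}$, first cell as output cell) if and only if $L=\{w\in\Sigma^+:\langle w\rangle\models\Phi\}$ for some predecessor Horn formula with diagonal input-output $\Phi$.
   Context: Fix a finite alphabet $\Sigma$. A nonempty word $w=w_1\cdots w_n\in\Sigma^n$ is represented by the structure $\langle w\rangle=([1,n];(Q_s)_{s\in\Sigma},\mathtt{min},\mathtt{max},\mathtt{suc},\mathtt{pred})$ with domain $[1,n]$, where $Q_s(i)\iff w_i=s$, $\mathtt{min}(i)\iff i=1$, $\mathtt{max}(i)\iff i=n$, $\mathtt{suc}(i)=i+1$ for $i<n$, $\mathtt{suc}(n)=n$, $\mathtt{pred}(i)=i-1$ for $i>1$, $\mathtt{pred}(1)=1$. Write $x-k$ for $\mathtt{pred}^k(x)$. A predecessor Horn formula with diagonal input-output is a formula $\Phi=\exists\mathbf{R}\forall x\forall y\,\psi(x,y)$, $\mathbf{R}$ a finite set of binary relation symbols (computation predicates), $\psi$ a conjunction of Horn clauses in $x,y$ over the signature $\{(Q_s)_{s\in\Sigma},\mathtt{min},\mathtt{max},\mathtt{suc},\mathtt{pred},=\}\cup\mathbf{R}$, each of the form $\delta_1\wedge\cdots\wedge\delta_r\to\delta_0$ with $\delta_0$ an atom $R(x,y)$ ($R\in\mathbf{R}$) or $\bot$, and each hypothesis $\delta_i$ one of: a conjunction $Q_s(x-a)\wedge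 x=y$ ($s\in\Sigma$, integer $a\ge0$); $U(x-a)$, $\neg U(x-a)$, $U(y-a)$, $\neg U(y-a)$ ($U\in\{\mathtt{min},\mathtt{max}\}$, $a\ge0$); $S(x-a,y-b)$ or $S(y-b,x-a)$ ($S\in\mathbf{R}$, $a,b\ge0$). The formula defines $\{w\in\Sigma^+:\langle w\rangle\models\Phi\}$; $\mathtt{pred}$-$\mathtt{dio}$-$\mathtt{ESO}$-$\mathtt{HORN}$ denotes the class of languages so defined. An iterative array is a cellular automaton $(Q,\Sigma,Q_{accept},\mathcal N,\delta)$ (finite $Q\supseteq\Sigma$, $Q_{accept}\subseteq Q$, neighborhood $\mathcal N=\{-1,0,1\}$, $\delta:Q^{3}\to Q$) together with an input transition function $\delta_{input}$, working on cells $1,\dots,n$ for an input $w=w_1\cdots w_n$; cells outside $[1,n]$ are permanently in a state $\sharp$, cells not yet reached by information from the input are in a quiescent state $\lambda$. The input is sequential: the letter $w_i$ is given to cell $1$ at time $i$, i.e. for $t\le n$ the state of cell 1 at time $t$ is computed by $\delta_{input}$ from $w_t$ and the neighbourhood states at time $t-1$, while all other updates are $\langle c,t\rangle=\delta(\langle c+v,t-1\rangle:v\in\mathcal N)$. $\mathtt{RealTime_{IA}}$ is the class of languages $L\subseteq\Sigma^+$ for which such an array exists with $w\in L\iff\langle 1,n\rangle\in Q_{accept}$ for every $w$ of length $n$. *)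

theory Defs
  imports Main
begin

text \<open>A word w = w_1 ... w_n over a finite alphabet 'a is a list with w_i = w ! (i - 1).
  Positions are the naturals 1..n.\<close>

definition pred_pos :: "nat \<Rightarrow> nat" where
  "pred_pos i = (if 1 < i then i - 1 else i)"

text \<open>x - k abbreviates pred^k(x).\<close>
definition minus_pred :: "nat \<Rightarrow> nat \<Rightarrow> nat" where
  "minus_pred x k = (pred_pos ^^ k) x"

datatype var = VarX | VarY

datatype unary_pred = UMin | UMax

text \<open>Computation predicates are named by natural numbers; a formula only uses finitely many.\<close>
datatype 'a hyp =
    HInput 'a nat
  | HUnary unary_pred var nat bool
  | HRel nat nat nat
  | HRelRev nat nat nat            (* S(y - b, x - a), arguments: S, b, a *)

datatype concl = CRel nat | CBot

type_synonym 'a horn_clause = "'a hyp list \<times> concl"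

type_synonym 'a horn_formula = "'a horn_clause list"

definition var_val :: "var \<Rightarrow> nat \<Rightarrow> nat \<Rightarrow> nat" where
  "var_val v x y = (case v of VarX \<Rightarrow> x | VarY \<Rightarrow> y)"

definition unary_sem :: "unary_pred \<Rightarrow> nat \<Rightarrow> nat \<Rightarrow> bool" where
  "unary_sem U n i = (case U of UMin \<Rightarrow> i = 1 | UMax \<Rightarrow> i = n)"

fun hyp_sem :: "'a list \<Rightarrow> (nat \<Rightarrow> nat \<Rightarrow> nat \<Rightarrow> bool) \<Rightarrow> nat \<Rightarrow> nat \<Rightarrow> 'a hyp \<Rightarrow> bool" where
  "hyp_sem w \<rho> x y (HInput s a) = (w ! (minus_pred x a - 1) = s \<and> x = y)"
| "hyp_sem w \<rho> x y (HUnary U v a pos) =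
     (if pos then unary_sem U (length w) (minus_pred (var_val v x y) a)
      else \<not> unary_sem U (length w) (minus_pred (var_val v x y) a))"
| "hyp_sem w \<rho> x y (HRel S a b) = \<rho> S (minus_pred x a) (minus_pred y b)"
| "hyp_sem w \<rho> x y (HRelRev S b a) = \<rho> S (minus_pred y b) (minus_pred x a)"

fun concl_sem :: "(nat \<Rightarrow> nat \<Rightarrow> nat \<Rightarrow> bool) \<Rightarrow> nat \<Rightarrow> nat \<Rightarrow> concl \<Rightarrow> bool" where
  "concl_sem \<rho> x y (CRel R) = \<rho> R x y"
| "concl_sem \<rho> x y CBot = False"

definition clause_sem :: "'a list \<Rightarrow> (nat \<Rightarrow> nat \<Rightarrow> nat \<Rightarrow> bool) \<Rightarrow> nat \<Rightarrow> nat \<Rightarrow> 'a horn_clause \<Rightarrow> bool" where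
  "clause_sem w \<rho> x y C =
     ((\<forall>h\<in>set (fst C). hyp_sem w \<rho> x y h) \<longrightarrow> concl_sem \<rho> x y (snd C))"

text \<open>Values of \<rho> outside [1,n] are never consulted since pred keeps [1,n] invariant.\<close>
definition horn_models :: "'a list \<Rightarrow> 'a horn_formula \<Rightarrow> bool" where
  "horn_models w \<Phi> =
     (\<exists>\<rho> :: nat \<Rightarrow> nat \<Rightarrow> nat \<Rightarrow> bool.
        \<forall>x \<in> {1..length w}. \<forall>y \<in> {1..length w}. \<forall>C \<in> set \<Phi>. clause_sem w \<rho> x y C)"

definition pred_dio_ESO_HORN :: "'a list set set" where
  "pred_dio_ESO_HORN = {L. \<exists>\<Phi> :: 'a horn_formula. L = {w. w \<noteq> [] \<and> horn_models w \<Phi>}}"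

text \<open>States are coded as natural numbers; Qs is the finite state set, qsharp the permanent
  border state of cells outside [1,n], qlam the quiescent state.\<close>
record 'a iarray =
  Qs :: "nat set"
  Qacc :: "nat set"
  qlam :: nat
  qsharp :: nat
  dlt :: "nat \<Rightarrow> nat \<Rightarrow> nat \<Rightarrow> nat"
  dlt_in :: "'a \<Rightarrow> nat \<Rightarrow> nat \<Rightarrow> nat \<Rightarrow> nat"

definition ia_wf :: "'a iarray \<Rightarrow> bool" where
  "ia_wf A \<longleftrightarrow>
     finite (Qs A) \<and> Qacc A \<subseteq> Qs A \<and> qlam A \<in> Qs A \<and> qsharp A \<notin> Qs A \<and>
     (\<forall>p q r. p \<in> insert (qsharp A) (Qs A) \<longrightarrow> q \<in> Qs A \<longrightarrow> r \<in> insert (qsharp A) (Qs A)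
        \<longrightarrow> dlt A p q r \<in> Qs A) \<and>
     (\<forall>s p q r. p \<in> insert (qsharp A) (Qs A) \<longrightarrow> q \<in> Qs A \<longrightarrow> r \<in> insert (qsharp A) (Qs A)
        \<longrightarrow> dlt_in A s p q r \<in> Qs A) \<and>
     dlt A (qlam A) (qlam A) (qlam A) = qlam A \<and>
     dlt A (qlam A) (qlam A) (qsharp A) = qlam A"

text \<open>For t+1 \<le> n cell 1 reads letter w_(t+1) = w ! t via dlt_in.\<close>
fun cfg :: "'a iarray \<Rightarrow> 'a list \<Rightarrow> nat \<Rightarrow> nat \<Rightarrow> nat" where
  "cfg A w 0 c = (if 1 \<le> c \<and> c \<le> length w then qlam A else qsharp A)"
| "cfg A w (Suc t) c =
     (if c < 1 \<or> length w < c then qsharp A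
      else if c = 1 \<and> Suc t \<le> length w
        then dlt_in A (w ! t) (cfg A w t 0) (cfg A w t 1) (cfg A w t 2)
      else dlt A (cfg A w t (c - 1)) (cfg A w t c) (cfg A w t (c + 1)))"

definition ia_accepts_rt :: "'a iarray \<Rightarrow> 'a list \<Rightarrow> bool" where
  "ia_accepts_rt A w \<longleftrightarrow> cfg A w (length w) 1 \<in> Qacc A"

definition RealTime_IA :: "'a list set set" where
  "RealTime_IA = {L. [] \<notin> L \<and>
     (\<exists>A :: 'a iarray. ia_wf A \<and> (\<forall>w. w \<noteq> [] \<longrightarrow> (w \<in> L \<longleftrightarrow> ia_accepts_rt A w)))}"

end

theory Submission
  imports Defs "HOL-Library.Countable_Set"
begin

(* An iterative array is simulated by a Horn formula whose computation predicate R_q(x, y)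
   says that cell c is in state q at time t, read in the diagonal coordinates x = t - c + 1,
   y = t + c - 1: the three cells c - 1, c, c + 1 at time t - 1 sit at (x, y - 2),
   (x - 1, y - 1), (x - 2, y), the letter read at time t sits on the diagonal at (t, t), and
   the output cell at time n sits at (n, n).  Any model of the formula contains this trace.

   Conversely, the least model of a Horn formula over the (infinite) grid of positions can
   be computed by an iterative array along the same diagonals.  The only information not
   available in real time is the length n of the word, which enters through max; this is
   handled by deriving every fact in two versions, one assuming that the larger coordinate is
   n and one assuming that both coordinates are smaller than n.  Cell c at time t computes the
   facts at the points (x, y), (x, y + 1), (x - 1, y + 1) and their mirror images from the
   facts near these points, which the three cells c - 1, c, c + 1 held at time t - 1; a cell
   stores these facts in coordinates relative to its own point, and it computes the new facts
   after translating everything to bounded coordinates, which the clauses cannot distinguish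
   from the true ones.  So finitely many states suffice; flags accumulated along the
   computation record whether a contradiction has been derived in [1, n] x [1, n]. *)

lemma minus_pred_eq: "minus_pred x k = (if x = 0 then 0 else max 1 (x - k))"
proof (induction k)
  case 0
  then show ?case by (simp add: minus_pred_def)
next
  case (Suc k)
  then show ?case by (simp add: minus_pred_def pred_pos_def)
qed

lemma minus_pred_0: "minus_pred x 0 = x"
  by (simp add: minus_pred_def)

lemma minus_pred_le: "minus_pred x a \<le> x"
  by (simp add: minus_pred_eq)

lemma minus_pred_ge: "x - a \<le> minus_pred x a"
  by (simp add: minus_pred_eq)

lemma minus_pred_pos: "1 \<le> x \<Longrightarrow> 1 \<le> minus_pred x a"
  by (simp add: minus_pred_eq)

lemma minus_pred_id_below:
  assumes f: "\<forall>k. k \<le> hi \<longrightarrow> f k = k" and u: "u \<le> hi"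
  shows "f (minus_pred u a) = minus_pred (f u) a \<and> (minus_pred u a = 1) = (minus_pred (f u) a = 1)"
proof -
  have "minus_pred u a \<le> u" by (rule minus_pred_le)
  then show ?thesis using f u by simp
qed

lemma minus_pred_translate:
  assumes f: "\<forall>k. R k \<longrightarrow> f k + s = k \<and> K + 2 \<le> f k"
    and u: "R u" "R (u - a)" and a: "a \<le> K"
  shows "f (minus_pred u a) = minus_pred (f u) a \<and> (minus_pred u a = 1) = (minus_pred (f u) a = 1)"
proof -
  have fu: "f u + s = u" "K + 2 \<le> f u" using f u by auto
  have fua: "f (u - a) + s = u - a" using f u by blast
  have m1: "minus_pred u a = u - a" using fu a by (simp add: minus_pred_eq)
  have m2: "minus_pred (f u) a = f u - a" using fu a by (simp add: minus_pred_eq)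
  show ?thesis unfolding m1 m2 using fu fua a by arith
qed

section \<open>From iterative arrays to Horn formulas\<close>

lemma length_ge_1: "w \<noteq> [] \<Longrightarrow> 1 \<le> length w"
  by (cases w) auto

lemma cfg_quiescent:
  assumes wf: "ia_wf A" and c: "1 \<le> c" "c \<le> length w" and t: "t < c"
  shows "cfg A w t c = qlam A"
  using c t
proof (induction t arbitrary: c)
  case 0 then show ?case by simp
next
  case (Suc t)
  have c2: "c \<noteq> 1" using Suc.prems by simp
  have l: "cfg A w t (c - 1) = qlam A" using Suc.IH[of "c - 1"] Suc.prems by simp
  have m: "cfg A w t c = qlam A" using Suc.IH[of c] Suc.prems by simp
  have r: "cfg A w t (c + 1) = qlam A \<or> cfg A w t (c + 1) = qsharp A"
  proof (cases "c + 1 \<le> length w")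
    case True then show ?thesis using Suc.IH[of "c + 1"] Suc.prems by simp
  next
    case False then show ?thesis by (cases t) auto
  qed
  have "cfg A w (Suc t) c = dlt A (cfg A w t (c - 1)) (cfg A w t c) (cfg A w t (c + 1))"
    using Suc.prems c2 by simp
  then show ?case using l m r wf unfolding ia_wf_def by auto
qed

lemma cfg_state_cases:
  assumes wf: "ia_wf A"
  shows "(1 \<le> c \<and> c \<le> length w \<longrightarrow> cfg A w t c \<in> Qs A) \<and> (\<not> (1 \<le> c \<and> c \<le> length w) \<longrightarrow> cfg A w t c = qsharp A)"
proof (induction t arbitrary: c)
  case 0 then show ?case using wf unfolding ia_wf_def by simp
next
  case (Suc t)
  have nb: "\<And>c'. cfg A w t c' \<in> insert (qsharp A) (Qs A)" using Suc.IH by blast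
  have q: "cfg A w t c \<in> Qs A" if "1 \<le> c" "c \<le> length w" for c
    using Suc.IH that by blast
  have dl: "\<And>p q r. p \<in> insert (qsharp A) (Qs A) \<Longrightarrow> q \<in> Qs A \<Longrightarrow> r \<in> insert (qsharp A) (Qs A) \<Longrightarrow> dlt A p q r \<in> Qs A"
    using wf unfolding ia_wf_def by blast
  have di: "\<And>s p q r. p \<in> insert (qsharp A) (Qs A) \<Longrightarrow> q \<in> Qs A \<Longrightarrow> r \<in> insert (qsharp A) (Qs A) \<Longrightarrow> dlt_in A s p q r \<in> Qs A"
    using wf unfolding ia_wf_def by blast
  show ?case
  proof (cases "c < 1 \<or> length w < c")
    case True then show ?thesis by auto
  next
    case False
    then have c: "1 \<le> c" "c \<le> length w" by auto
    show ?thesis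
    proof (cases "c = 1 \<and> Suc t \<le> length w")
      case True
      then have "cfg A w (Suc t) c = dlt_in A (w ! t) (cfg A w t 0) (cfg A w t 1) (cfg A w t 2)" using False by simp
      moreover have "cfg A w t 1 \<in> Qs A" using q[of 1] c by simp
      ultimately show ?thesis using di nb c by simp
    next
      case F2: False
      then have "cfg A w (Suc t) c = dlt A (cfg A w t (c - 1)) (cfg A w t c) (cfg A w t (c + 1))" using False by auto
      then show ?thesis using dl nb q[OF c] c by simp
    qed
  qed
qed

lemma cfg_in_Qs: "ia_wf A \<Longrightarrow> 1 \<le> c \<Longrightarrow> c \<le> length w \<Longrightarrow> cfg A w t c \<in> Qs A"
  using cfg_state_cases by blast

definition all_letters :: "('a::finite) list" where
  "all_letters = (SOME xs. set xs = UNIV)"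

lemma set_all_letters: "set (all_letters :: ('a::finite) list) = UNIV"
  unfolding all_letters_def by (rule someI_ex) (rule finite_list[OF finite_UNIV])

definition state_list :: "'a iarray \<Rightarrow> nat list" where
  "state_list A = sorted_list_of_set (Qs A)"

lemma set_state_list: "ia_wf A \<Longrightarrow> set (state_list A) = Qs A"
  unfolding state_list_def ia_wf_def by simp

definition clause_input_only :: "'a iarray \<Rightarrow> 'a \<Rightarrow> 'a horn_clause" where
  "clause_input_only A s =
     ([HInput s 0, HUnary UMin VarX 0 True, HUnary UMax VarX 0 True],
      CRel (dlt_in A s (qsharp A) (qlam A) (qsharp A)))"

definition clause_input_first :: "'a iarray \<Rightarrow> 'a \<Rightarrow> 'a horn_clause" where
  "clause_input_first A s =
     ([HInput s 0, HUnary UMin VarX 0 True, HUnary UMax VarX 0 False],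
      CRel (dlt_in A s (qsharp A) (qlam A) (qlam A)))"

definition clause_input_second :: "'a iarray \<Rightarrow> 'a \<Rightarrow> nat \<Rightarrow> 'a horn_clause" where
  "clause_input_second A s p =
     ([HInput s 0, HUnary UMin VarX 0 False, HUnary UMin VarX 1 True, HRel p 1 1],
      CRel (dlt_in A s (qsharp A) p (qlam A)))"

definition clause_input :: "'a iarray \<Rightarrow> 'a \<Rightarrow> nat \<Rightarrow> nat \<Rightarrow> 'a horn_clause" where
  "clause_input A s p r =
     ([HInput s 0, HUnary UMin VarX 1 False, HRel p 1 1, HRel r 2 0],
      CRel (dlt_in A s (qsharp A) p r))"

definition clause_front :: "'a iarray \<Rightarrow> nat \<Rightarrow> 'a horn_clause" where
  "clause_front A p =
     ([HUnary UMin VarY 1 False, HUnary UMin VarX 0 True, HRel p 0 2],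
      CRel (dlt A p (qlam A) (qlam A)))"

definition clause_front_second :: "'a iarray \<Rightarrow> nat \<Rightarrow> nat \<Rightarrow> 'a horn_clause" where
  "clause_front_second A p q =
     ([HUnary UMin VarY 1 False, HUnary UMin VarX 0 False, HUnary UMin VarX 1 True, HRel p 0 2, HRel q 1 1],
      CRel (dlt A p q (qlam A)))"

definition clause_inner :: "'a iarray \<Rightarrow> nat \<Rightarrow> nat \<Rightarrow> nat \<Rightarrow> 'a horn_clause" where
  "clause_inner A p q r =
     ([HUnary UMin VarY 1 False, HUnary UMin VarX 1 False, HRel p 0 2, HRel q 1 1, HRel r 2 0],
      CRel (dlt A p q r))"

definition clause_reject :: "nat \<Rightarrow> 'a horn_clause" where
  "clause_reject q = ([HRel q 0 0, HUnary UMax VarX 0 True, HUnary UMax VarY 0 True], CBot)"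

definition ia_formula :: "('a::finite) iarray \<Rightarrow> 'a horn_formula" where
  "ia_formula A =
     [clause_input_only A s. s \<leftarrow> all_letters] @
     [clause_input_first A s. s \<leftarrow> all_letters] @
     [clause_input_second A s p. s \<leftarrow> all_letters, p \<leftarrow> state_list A] @
     [clause_input A s p r. s \<leftarrow> all_letters, p \<leftarrow> state_list A, r \<leftarrow> state_list A] @
     [clause_front A p. p \<leftarrow> state_list A] @
     [clause_front_second A p q. p \<leftarrow> state_list A, q \<leftarrow> state_list A] @
     [clause_inner A p q r. p \<leftarrow> state_list A, q \<leftarrow> state_list A, r \<leftarrow> state_list A] @
     [clause_reject q. q \<leftarrow> state_list A, q \<notin> Qacc A]"

lemma set_ia_formula:
  fixes A :: "('a::finite) iarray"
  assumes wf: "ia_wf A"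
  shows "set (ia_formula A) =
     range (clause_input_only A) \<union> range (clause_input_first A) \<union>
     {clause_input_second A s p | s p. p \<in> Qs A} \<union>
     {clause_input A s p r | s p r. p \<in> Qs A \<and> r \<in> Qs A} \<union>
     clause_front A ` Qs A \<union>
     {clause_front_second A p q | p q. p \<in> Qs A \<and> q \<in> Qs A} \<union>
     {clause_inner A p q r | p q r. p \<in> Qs A \<and> q \<in> Qs A \<and> r \<in> Qs A} \<union>
     clause_reject ` (Qs A - Qacc A)"
proof -
  have q: "set (state_list A) = Qs A" using set_state_list[OF wf] .
  have l: "set (all_letters :: 'a list) = UNIV" by (rule set_all_letters)
  have e3: "set [clause_input_second A s p. s \<leftarrow> all_letters, p \<leftarrow> state_list A] = {clause_input_second A s p | s p. p \<in> Qs A}"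
    unfolding q l by (auto simp: q l)
  have e4: "set [clause_input A s p r. s \<leftarrow> all_letters, p \<leftarrow> state_list A, r \<leftarrow> state_list A] = {clause_input A s p r | s p r. p \<in> Qs A \<and> r \<in> Qs A}"
    by (auto simp: q l)
  have e6: "set [clause_front_second A p q. p \<leftarrow> state_list A, q \<leftarrow> state_list A] = {clause_front_second A p q | p q. p \<in> Qs A \<and> q \<in> Qs A}"
    by (auto simp: q l)
  have e7: "set [clause_inner A p q r. p \<leftarrow> state_list A, q \<leftarrow> state_list A, r \<leftarrow> state_list A] = {clause_inner A p q r | p q r. p \<in> Qs A \<and> q \<in> Qs A \<and> r \<in> Qs A}"
    by (auto simp: q l)
  have e8: "set [clause_reject q. q \<leftarrow> state_list A, q \<notin> Qacc A] = clause_reject ` (Qs A - Qacc A)"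
    by (auto simp: q)
  have e1: "set [clause_input_only A s. s \<leftarrow> all_letters] = range (clause_input_only A)" by (simp add: l)
  have e2: "set [clause_input_first A s. s \<leftarrow> all_letters] = range (clause_input_first A)" by (simp add: l)
  have e5: "set [clause_front A p. p \<leftarrow> state_list A] = clause_front A ` Qs A" by (simp add: q)
  show ?thesis unfolding ia_formula_def set_append e1 e2 e3 e4 e5 e6 e7 e8 by (simp add: Un_assoc)
qed

lemma ia_formula_cases:
  fixes A :: "('a::finite) iarray"
  assumes wf: "ia_wf A" and "C \<in> set (ia_formula A)"
  shows "(\<exists>s. C = clause_input_only A s) \<or> (\<exists>s. C = clause_input_first A s) \<or>
         (\<exists>s p. C = clause_input_second A s p) \<or> (\<exists>s p r. C = clause_input A s p r) \<or>
         (\<exists>p. C = clause_front A p) \<or> (\<exists>p q. C = clause_front_second A p q) \<or> (\<exists>p q r. C = clause_inner A p q r) \<or>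
         (\<exists>q. q \<notin> Qacc A \<and> C = clause_reject q)"
  using assms(2) unfolding set_ia_formula[OF wf] by blast

lemma ia_formula_mem:
  fixes A :: "('a::finite) iarray"
  assumes wf: "ia_wf A"
  shows "clause_input_only A s \<in> set (ia_formula A)" "clause_input_first A s \<in> set (ia_formula A)"
    "p \<in> Qs A \<Longrightarrow> clause_input_second A s p \<in> set (ia_formula A)"
    "p \<in> Qs A \<Longrightarrow> r \<in> Qs A \<Longrightarrow> clause_input A s p r \<in> set (ia_formula A)"
    "p \<in> Qs A \<Longrightarrow> clause_front A p \<in> set (ia_formula A)"
    "p \<in> Qs A \<Longrightarrow> q \<in> Qs A \<Longrightarrow> clause_front_second A p q \<in> set (ia_formula A)"
    "p \<in> Qs A \<Longrightarrow> q \<in> Qs A \<Longrightarrow> r \<in> Qs A \<Longrightarrow> clause_inner A p q r \<in> set (ia_formula A)"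
    "q \<in> Qs A \<Longrightarrow> q \<notin> Qacc A \<Longrightarrow> clause_reject q \<in> set (ia_formula A)"
  unfolding set_ia_formula[OF wf] by blast+

definition site :: "nat \<Rightarrow> nat \<Rightarrow> nat \<Rightarrow> nat \<Rightarrow> nat \<Rightarrow> bool" where
  "site n X Y c t \<longleftrightarrow> 1 \<le> c \<and> c \<le> t \<and> c + t \<le> n + 1 \<and> X = t - c + 1 \<and> Y = t + c - 1"

lemma site_unique: "site n X Y c t \<Longrightarrow> site n X Y c' t' \<Longrightarrow> c = c' \<and> t = t'"
  unfolding site_def by auto

definition trace_rel :: "'a iarray \<Rightarrow> 'a list \<Rightarrow> nat \<Rightarrow> nat \<Rightarrow> nat \<Rightarrow> bool" where
  "trace_rel A w q X Y \<longleftrightarrow> (\<exists>c t. site (length w) X Y c t \<and> cfg A w t c = q)"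

lemma trace_rel_site: "trace_rel A w q X Y \<Longrightarrow> site (length w) X Y c t \<Longrightarrow> cfg A w t c = q"
  unfolding trace_rel_def using site_unique by blast

lemma trace_relI: "site (length w) X Y c t \<Longrightarrow> cfg A w t c = q \<Longrightarrow> trace_rel A w q X Y"
  unfolding trace_rel_def by blast

lemma trace_relE: "trace_rel A w q X Y \<Longrightarrow> (\<And>c t. site (length w) X Y c t \<Longrightarrow> cfg A w t c = q \<Longrightarrow> P) \<Longrightarrow> P"
  unfolding trace_rel_def by blast

lemma cfg_0: "cfg A w t 0 = qsharp A"
  by (cases t) auto

lemma cfg_input_cell: "w \<noteq> [] \<Longrightarrow> 1 \<le> t \<Longrightarrow> t \<le> length w \<Longrightarrow>
   cfg A w t 1 = dlt_in A (w ! (t - 1)) (qsharp A) (cfg A w (t - 1) 1) (cfg A w (t - 1) 2)"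
  by (cases t) (auto simp: cfg_0)

lemma cfg_inner_cell: "2 \<le> c \<Longrightarrow> c \<le> length w \<Longrightarrow> 1 \<le> t \<Longrightarrow>
   cfg A w t c = dlt A (cfg A w (t - 1) (c - 1)) (cfg A w (t - 1) c) (cfg A w (t - 1) (c + 1))"
  by (cases t) auto

lemma cfg_outside: "length w < c \<Longrightarrow> cfg A w t c = qsharp A"
  by (cases t) auto

context
  fixes A :: "('a::finite) iarray" and w :: "'a list"
  assumes wf: "ia_wf A" and wne: "w \<noteq> []"
begin

lemma trace_rel_clause_input_only:
  shows "clause_sem w (trace_rel A w) X Y (clause_input_only A s)"
  unfolding clause_sem_def
proof
  assume H: "\<forall>h\<in>set (fst (clause_input_only A s)). hyp_sem w (trace_rel A w) X Y h"
  have h1: "hyp_sem w (trace_rel A w) X Y (HInput s 0)" by (rule H[rule_format]) (simp add: clause_input_only_def)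
  have h2: "hyp_sem w (trace_rel A w) X Y (HUnary UMin VarX 0 True)" by (rule H[rule_format]) (simp add: clause_input_only_def)
  have h3: "hyp_sem w (trace_rel A w) X Y (HUnary UMax VarX 0 True)" by (rule H[rule_format]) (simp add: clause_input_only_def)
  have h: "X = Y" "X = 1" "X = length w" "w ! (X - 1) = s"
    using h1 h2 h3 by (auto simp: minus_pred_0 unary_sem_def var_val_def)
  have c: "cfg A w 1 1 = dlt_in A s (qsharp A) (qlam A) (qsharp A)"
    using h wne cfg_input_cell[OF wne, of 1 A] cfg_outside[of w 2 A 0] by (simp add: cfg_0)
  have "trace_rel A w (dlt_in A s (qsharp A) (qlam A) (qsharp A)) X Y"
    by (rule trace_relI[where c = 1 and t = 1]) (use h c in \<open>auto simp: site_def\<close>)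
  then show "concl_sem (trace_rel A w) X Y (snd (clause_input_only A s))" by (simp add: clause_input_only_def)
qed

lemma trace_rel_clause_input_first:
  shows "clause_sem w (trace_rel A w) X Y (clause_input_first A s)"
  unfolding clause_sem_def
proof
  assume H: "\<forall>h\<in>set (fst (clause_input_first A s)). hyp_sem w (trace_rel A w) X Y h"
  have h1: "hyp_sem w (trace_rel A w) X Y (HInput s 0)" by (rule H[rule_format]) (simp add: clause_input_first_def)
  have h2: "hyp_sem w (trace_rel A w) X Y (HUnary UMin VarX 0 True)" by (rule H[rule_format]) (simp add: clause_input_first_def)
  have h3: "hyp_sem w (trace_rel A w) X Y (HUnary UMax VarX 0 False)" by (rule H[rule_format]) (simp add: clause_input_first_def)
  have h: "X = Y" "X = 1" "X \<noteq> length w" "w ! (X - 1) = s"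
    using h1 h2 h3 by (auto simp: minus_pred_0 unary_sem_def var_val_def)
  have n2: "2 \<le> length w" using h length_ge_1[OF wne] by linarith
  have q2: "cfg A w 0 2 = qlam A" using n2 by simp
  have c: "cfg A w 1 1 = dlt_in A s (qsharp A) (qlam A) (qlam A)"
    using h wne cfg_input_cell[OF wne, of 1 A] q2 n2 by (simp add: cfg_0)
  have "trace_rel A w (dlt_in A s (qsharp A) (qlam A) (qlam A)) X Y"
    by (rule trace_relI[where c = 1 and t = 1]) (use h c n2 in \<open>auto simp: site_def\<close>)
  then show "concl_sem (trace_rel A w) X Y (snd (clause_input_first A s))" by (simp add: clause_input_first_def)
qed

lemma trace_rel_clause_input_second:
  assumes XY: "X \<in> {1..length w}" "Y \<in> {1..length w}"
  shows "clause_sem w (trace_rel A w) X Y (clause_input_second A s p)"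
  unfolding clause_sem_def
proof
  assume H: "\<forall>h\<in>set (fst (clause_input_second A s p)). hyp_sem w (trace_rel A w) X Y h"
  have h1: "hyp_sem w (trace_rel A w) X Y (HInput s 0)" by (rule H[rule_format]) (simp add: clause_input_second_def)
  have h2: "hyp_sem w (trace_rel A w) X Y (HUnary UMin VarX 0 False)" by (rule H[rule_format]) (simp add: clause_input_second_def)
  have h3: "hyp_sem w (trace_rel A w) X Y (HUnary UMin VarX 1 True)" by (rule H[rule_format]) (simp add: clause_input_second_def)
  have h4: "hyp_sem w (trace_rel A w) X Y (HRel p 1 1)" by (rule H[rule_format]) (simp add: clause_input_second_def)
  have h: "X = Y" "X \<noteq> 1" "minus_pred X 1 = 1" "w ! (X - 1) = s" "trace_rel A w p (minus_pred X 1) (minus_pred Y 1)"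
    using h1 h2 h3 h4 by (auto simp: minus_pred_0 unary_sem_def var_val_def)
  have X2: "X = 2" using h XY by (auto simp: minus_pred_eq)
  then have p: "trace_rel A w p 1 1" using h(5) h(1) by (simp add: minus_pred_eq)
  have c11: "cfg A w 1 1 = p" by (rule trace_rel_site[OF p]) (use length_ge_1[OF wne] in \<open>auto simp: site_def\<close>)
  have n2: "2 \<le> length w" using X2 XY by simp
  have q: "cfg A w 1 2 = qlam A" by (rule cfg_quiescent[OF wf]) (use n2 in auto)
  have c: "cfg A w 2 1 = dlt_in A s (qsharp A) p (qlam A)"
    using cfg_input_cell[OF wne, of 2 A] n2 h X2 c11 q by simp
  have "trace_rel A w (dlt_in A s (qsharp A) p (qlam A)) X Y"
    by (rule trace_relI[where c = 1 and t = 2]) (use h c n2 X2 in \<open>auto simp: site_def\<close>)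
  then show "concl_sem (trace_rel A w) X Y (snd (clause_input_second A s p))" by (simp add: clause_input_second_def)
qed

lemma trace_rel_clause_input:
  assumes XY: "X \<in> {1..length w}" "Y \<in> {1..length w}"
  shows "clause_sem w (trace_rel A w) X Y (clause_input A s p r)"
  unfolding clause_sem_def
proof
  assume H: "\<forall>h\<in>set (fst (clause_input A s p r)). hyp_sem w (trace_rel A w) X Y h"
  have h1: "hyp_sem w (trace_rel A w) X Y (HInput s 0)" by (rule H[rule_format]) (simp add: clause_input_def)
  have h2: "hyp_sem w (trace_rel A w) X Y (HUnary UMin VarX 1 False)" by (rule H[rule_format]) (simp add: clause_input_def)
  have h3: "hyp_sem w (trace_rel A w) X Y (HRel p 1 1)" by (rule H[rule_format]) (simp add: clause_input_def)
  have h4: "hyp_sem w (trace_rel A w) X Y (HRel r 2 0)" by (rule H[rule_format]) (simp add: clause_input_def)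
  have h: "X = Y" "minus_pred X 1 \<noteq> 1" "w ! (X - 1) = s" "trace_rel A w p (minus_pred X 1) (minus_pred Y 1)"
     "trace_rel A w r (minus_pred X 2) Y"
    using h1 h2 h3 h4 by (auto simp: minus_pred_0 unary_sem_def var_val_def)
  have X3: "3 \<le> X" using h XY by (auto simp: minus_pred_eq)
  have m1: "minus_pred X 1 = X - 1" "minus_pred X 2 = X - 2" using X3 by (simp_all add: minus_pred_eq)
  have p: "trace_rel A w p (X - 1) (X - 1)" using h(4) m1 h(1) by simp
  have r: "trace_rel A w r (X - 2) X" using h(5) m1 h(1) by simp
  have cp: "cfg A w (X - 1) 1 = p" by (rule trace_rel_site[OF p]) (use X3 XY in \<open>auto simp: site_def\<close>)
  have cr: "cfg A w (X - 1) 2 = r" by (rule trace_rel_site[OF r]) (use X3 XY in \<open>auto simp: site_def\<close>)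
  have c: "cfg A w X 1 = dlt_in A s (qsharp A) p r"
    using cfg_input_cell[OF wne, of X A] XY h X3 cp cr by simp
  have "trace_rel A w (dlt_in A s (qsharp A) p r) X Y"
    by (rule trace_relI[where c = 1 and t = X]) (use h c XY X3 in \<open>auto simp: site_def\<close>)
  then show "concl_sem (trace_rel A w) X Y (snd (clause_input A s p r))" by (simp add: clause_input_def)
qed

lemma trace_rel_clause_front:
  assumes XY: "X \<in> {1..length w}" "Y \<in> {1..length w}"
  shows "clause_sem w (trace_rel A w) X Y (clause_front A p)"
  unfolding clause_sem_def
proof
  assume H: "\<forall>h\<in>set (fst (clause_front A p)). hyp_sem w (trace_rel A w) X Y h"
  have h1: "hyp_sem w (trace_rel A w) X Y (HUnary UMin VarY 1 False)" by (rule H[rule_format]) (simp add: clause_front_def)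
  have h2: "hyp_sem w (trace_rel A w) X Y (HUnary UMin VarX 0 True)" by (rule H[rule_format]) (simp add: clause_front_def)
  have h3: "hyp_sem w (trace_rel A w) X Y (HRel p 0 2)" by (rule H[rule_format]) (simp add: clause_front_def)
  have Y3: "3 \<le> Y" using h1 XY by (auto simp: minus_pred_eq unary_sem_def var_val_def)
  have X1: "X = 1" using h2 by (auto simp: minus_pred_0 unary_sem_def var_val_def)
  have mY: "minus_pred Y 2 = Y - 2" using Y3 by (simp add: minus_pred_eq)
  have hp: "trace_rel A w p X (Y - 2)" using h3 by (simp add: minus_pred_0 mY)
  obtain c' t' where s': "site (length w) X (Y - 2) c' t'" and cp: "cfg A w t' c' = p" using trace_relE[OF hp] by blast
  define c where "c = c' + 1"
  define t where "t = t' + 1"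
  have st: "site (length w) X Y c t" using s' XY Y3 unfolding site_def c_def t_def by auto
  have tc: "t = c" "2 \<le> c" "c + 1 \<le> length w" using s' X1 XY Y3 unfolding site_def c_def t_def by auto
  have q1: "cfg A w t' c = qlam A" by (rule cfg_quiescent[OF wf]) (use tc in \<open>auto simp: t_def c_def\<close>)
  have q2: "cfg A w t' (c + 1) = qlam A" by (rule cfg_quiescent[OF wf]) (use tc in \<open>auto simp: t_def c_def\<close>)
  have cn: "2 \<le> c" "c \<le> length w" "1 \<le> t" using st tc unfolding site_def by auto
  have "cfg A w t c = dlt A (cfg A w (t - 1) (c - 1)) (cfg A w (t - 1) c) (cfg A w (t - 1) (c + 1))"
    by (rule cfg_inner_cell[OF cn])
  moreover have "t - 1 = t'" unfolding t_def by simp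
  ultimately have "cfg A w t c = dlt A (cfg A w t' (c - 1)) (cfg A w t' c) (cfg A w t' (c + 1))" by simp
  then have "cfg A w t c = dlt A p (qlam A) (qlam A)" using cp q1 q2 unfolding c_def by simp
  then have "trace_rel A w (dlt A p (qlam A) (qlam A)) X Y" using trace_relI[OF st] by blast
  then show "concl_sem (trace_rel A w) X Y (snd (clause_front A p))" by (simp add: clause_front_def)
qed

lemma trace_rel_clause_front_second:
  assumes XY: "X \<in> {1..length w}" "Y \<in> {1..length w}"
  shows "clause_sem w (trace_rel A w) X Y (clause_front_second A p q)"
  unfolding clause_sem_def
proof
  assume H: "\<forall>h\<in>set (fst (clause_front_second A p q)). hyp_sem w (trace_rel A w) X Y h"
  have h1: "hyp_sem w (trace_rel A w) X Y (HUnary UMin VarY 1 False)" by (rule H[rule_format]) (simp add: clause_front_second_def)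
  have h2: "hyp_sem w (trace_rel A w) X Y (HUnary UMin VarX 0 False)" by (rule H[rule_format]) (simp add: clause_front_second_def)
  have h3: "hyp_sem w (trace_rel A w) X Y (HUnary UMin VarX 1 True)" by (rule H[rule_format]) (simp add: clause_front_second_def)
  have h4: "hyp_sem w (trace_rel A w) X Y (HRel p 0 2)" by (rule H[rule_format]) (simp add: clause_front_second_def)
  have h5: "hyp_sem w (trace_rel A w) X Y (HRel q 1 1)" by (rule H[rule_format]) (simp add: clause_front_second_def)
  have Y3: "3 \<le> Y" using h1 XY by (auto simp: minus_pred_eq unary_sem_def var_val_def)
  have X2: "X = 2" using h2 h3 XY by (auto simp: minus_pred_eq unary_sem_def var_val_def)
  have mY: "minus_pred Y 2 = Y - 2" using Y3 by (simp add: minus_pred_eq)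
  have hp: "trace_rel A w p X (Y - 2)" using h4 by (simp add: minus_pred_0 mY)
  have hq: "trace_rel A w q 1 (Y - 1)" using h5 Y3 X2 by (simp add: minus_pred_eq)
  obtain c' t' where s': "site (length w) X (Y - 2) c' t'" and cp: "cfg A w t' c' = p" using trace_relE[OF hp] by blast
  define c where "c = c' + 1"
  define t where "t = t' + 1"
  have st: "site (length w) X Y c t" using s' XY Y3 unfolding site_def c_def t_def by auto
  have tc: "t' = c" "2 \<le> c" "c + 1 \<le> length w" using s' X2 XY Y3 unfolding site_def c_def t_def by auto
  have sq: "site (length w) 1 (Y - 1) c t'" using s' X2 XY Y3 tc unfolding site_def c_def by auto
  have cq: "cfg A w t' c = q" by (rule trace_rel_site[OF hq sq])
  have q2: "cfg A w t' (c + 1) = qlam A" by (rule cfg_quiescent[OF wf]) (use tc in auto)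
  have cn: "2 \<le> c" "c \<le> length w" "1 \<le> t" using st tc unfolding site_def by auto
  have "cfg A w t c = dlt A (cfg A w (t - 1) (c - 1)) (cfg A w (t - 1) c) (cfg A w (t - 1) (c + 1))"
    by (rule cfg_inner_cell[OF cn])
  moreover have "t - 1 = t'" unfolding t_def by simp
  ultimately have "cfg A w t c = dlt A (cfg A w t' (c - 1)) (cfg A w t' c) (cfg A w t' (c + 1))" by simp
  then have "cfg A w t c = dlt A p q (qlam A)" using cp cq q2 unfolding c_def by simp
  then have "trace_rel A w (dlt A p q (qlam A)) X Y" using trace_relI[OF st] by blast
  then show "concl_sem (trace_rel A w) X Y (snd (clause_front_second A p q))" by (simp add: clause_front_second_def)
qed

lemma trace_rel_clause_inner:
  assumes XY: "X \<in> {1..length w}" "Y \<in> {1..length w}"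
  shows "clause_sem w (trace_rel A w) X Y (clause_inner A p q r)"
  unfolding clause_sem_def
proof
  assume H: "\<forall>h\<in>set (fst (clause_inner A p q r)). hyp_sem w (trace_rel A w) X Y h"
  have h1: "hyp_sem w (trace_rel A w) X Y (HUnary UMin VarY 1 False)" by (rule H[rule_format]) (simp add: clause_inner_def)
  have h2: "hyp_sem w (trace_rel A w) X Y (HUnary UMin VarX 1 False)" by (rule H[rule_format]) (simp add: clause_inner_def)
  have h4: "hyp_sem w (trace_rel A w) X Y (HRel p 0 2)" by (rule H[rule_format]) (simp add: clause_inner_def)
  have h5: "hyp_sem w (trace_rel A w) X Y (HRel q 1 1)" by (rule H[rule_format]) (simp add: clause_inner_def)
  have h6: "hyp_sem w (trace_rel A w) X Y (HRel r 2 0)" by (rule H[rule_format]) (simp add: clause_inner_def)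
  have Y3: "3 \<le> Y" using h1 XY by (auto simp: minus_pred_eq unary_sem_def var_val_def)
  have X3: "3 \<le> X" using h2 XY by (auto simp: minus_pred_eq unary_sem_def var_val_def)
  have mY: "minus_pred Y 2 = Y - 2" using Y3 by (simp add: minus_pred_eq)
  have hp: "trace_rel A w p X (Y - 2)" using h4 by (simp add: minus_pred_0 mY)
  have hq: "trace_rel A w q (X - 1) (Y - 1)" using h5 Y3 X3 by (simp add: minus_pred_eq)
  have mX: "minus_pred X 2 = X - 2" using X3 by (simp add: minus_pred_eq)
  have hr: "trace_rel A w r (X - 2) Y" using h6 by (simp add: minus_pred_0 mX)
  obtain c' t' where s': "site (length w) X (Y - 2) c' t'" and cp: "cfg A w t' c' = p" using trace_relE[OF hp] by blast
  define c where "c = c' + 1"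
  define t where "t = t' + 1"
  have st: "site (length w) X Y c t" using s' XY Y3 unfolding site_def c_def t_def by auto
  have tc: "2 \<le> c" "c \<le> length w" using s' XY Y3 unfolding site_def c_def by auto
  have sq: "site (length w) (X - 1) (Y - 1) c t'" using s' X3 XY Y3 unfolding site_def c_def by auto
  have sr: "site (length w) (X - 2) Y (c + 1) t'" using s' X3 XY Y3 unfolding site_def c_def by auto
  have cq: "cfg A w t' c = q" by (rule trace_rel_site[OF hq sq])
  have cr: "cfg A w t' (c + 1) = r" by (rule trace_rel_site[OF hr sr])
  have cn: "2 \<le> c" "c \<le> length w" "1 \<le> t" using st tc unfolding site_def by auto
  have "cfg A w t c = dlt A (cfg A w (t - 1) (c - 1)) (cfg A w (t - 1) c) (cfg A w (t - 1) (c + 1))"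
    by (rule cfg_inner_cell[OF cn])
  moreover have "t - 1 = t'" unfolding t_def by simp
  ultimately have "cfg A w t c = dlt A (cfg A w t' (c - 1)) (cfg A w t' c) (cfg A w t' (c + 1))" by simp
  then have "cfg A w t c = dlt A p q r" using cp cq cr unfolding c_def by simp
  then have "trace_rel A w (dlt A p q r) X Y" using trace_relI[OF st] by blast
  then show "concl_sem (trace_rel A w) X Y (snd (clause_inner A p q r))" by (simp add: clause_inner_def)
qed

lemma trace_rel_clause_reject:
  assumes acc: "cfg A w (length w) 1 \<in> Qacc A" and nq: "q \<notin> Qacc A"
  shows "clause_sem w (trace_rel A w) X Y (clause_reject q)"
  unfolding clause_sem_def
proof
  assume H: "\<forall>h\<in>set (fst (clause_reject q)). hyp_sem w (trace_rel A w) X Y h"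
  have h1: "hyp_sem w (trace_rel A w) X Y (HRel q 0 0)" by (rule H[rule_format]) (simp add: clause_reject_def)
  have h2: "hyp_sem w (trace_rel A w) X Y (HUnary UMax VarX 0 True)" by (rule H[rule_format]) (simp add: clause_reject_def)
  have h3: "hyp_sem w (trace_rel A w) X Y (HUnary UMax VarY 0 True)" by (rule H[rule_format]) (simp add: clause_reject_def)
  have e: "X = length w" "Y = length w" using h2 h3 by (auto simp: minus_pred_0 unary_sem_def var_val_def)
  have hq: "trace_rel A w q (length w) (length w)" using h1 e by (simp add: minus_pred_0)
  have "site (length w) (length w) (length w) 1 (length w)" using length_ge_1[OF wne] unfolding site_def by auto
  then have "cfg A w (length w) 1 = q" by (rule trace_rel_site[OF hq])
  then show "concl_sem (trace_rel A w) X Y (snd (clause_reject q))" using acc nq by simp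
qed

lemma horn_models_trace_rel:
  assumes acc: "cfg A w (length w) 1 \<in> Qacc A"
  shows "horn_models w (ia_formula A)"
  unfolding horn_models_def
proof (intro exI ballI)
  fix X Y C assume X: "X \<in> {1..length w}" and Y: "Y \<in> {1..length w}" and C: "C \<in> set (ia_formula A)"
  from ia_formula_cases[OF wf C] show "clause_sem w (trace_rel A w) X Y C"
    using trace_rel_clause_input_only trace_rel_clause_input_first trace_rel_clause_input_second[OF X Y] trace_rel_clause_input[OF X Y]
      trace_rel_clause_front[OF X Y] trace_rel_clause_front_second[OF X Y] trace_rel_clause_inner[OF X Y] trace_rel_clause_reject[OF acc] by blast
qed

end

context
  fixes A :: "('a::finite) iarray" and w :: "'a list" and \<rho> :: "nat \<Rightarrow> nat \<Rightarrow> nat \<Rightarrow> bool"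
  assumes wf: "ia_wf A" and wne: "w \<noteq> []"
    and M: "\<forall>X\<in>{1..length w}. \<forall>Y\<in>{1..length w}. \<forall>C\<in>set (ia_formula A). clause_sem w \<rho> X Y C"
begin

declare cfg.simps(2) [simp del]

lemma clause_holds:
  "C \<in> set (ia_formula A) \<Longrightarrow> 1 \<le> X \<Longrightarrow> X \<le> length w \<Longrightarrow> 1 \<le> Y \<Longrightarrow> Y \<le> length w \<Longrightarrow>
   (\<forall>h\<in>set (fst C). hyp_sem w \<rho> X Y h) \<Longrightarrow> concl_sem \<rho> X Y (snd C)"
  using M unfolding clause_sem_def by auto

lemma cfg_Qs: "1 \<le> c \<Longrightarrow> c \<le> length w \<Longrightarrow> cfg A w t c \<in> Qs A"
  using cfg_in_Qs[OF wf] by blast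

lemma cfg_Qs_1: "cfg A w t 1 \<in> Qs A" using cfg_Qs length_ge_1[OF wne] by blast

lemma model_input_first: "\<rho> (cfg A w 1 1) 1 1"
proof (cases "length w = 1")
  case True
  have "concl_sem \<rho> 1 1 (snd (clause_input_only A (w ! 0)))"
    by (rule clause_holds[OF ia_formula_mem(1)[OF wf]])
      (use True in \<open>auto simp: clause_input_only_def minus_pred_0 unary_sem_def var_val_def\<close>)
  moreover have "cfg A w 1 1 = dlt_in A (w ! 0) (qsharp A) (qlam A) (qsharp A)"
    using cfg_input_cell[OF wne, of 1 A] True by simp
  ultimately show ?thesis by (simp add: clause_input_only_def)
next
  case False
  then have n2: "2 \<le> length w" using length_ge_1[OF wne] by simp
  have "concl_sem \<rho> 1 1 (snd (clause_input_first A (w ! 0)))"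
    by (rule clause_holds[OF ia_formula_mem(2)[OF wf]])
      (use False length_ge_1[OF wne] in \<open>auto simp: clause_input_first_def minus_pred_0 unary_sem_def var_val_def\<close>)
  moreover have "cfg A w 1 1 = dlt_in A (w ! 0) (qsharp A) (qlam A) (qlam A)"
    using cfg_input_cell[OF wne, of 1 A] n2 by simp
  ultimately show ?thesis by (simp add: clause_input_first_def)
qed

lemma model_input_second:
  assumes n: "2 \<le> length w" and p: "\<rho> (cfg A w 1 1) 1 1"
  shows "\<rho> (cfg A w 2 1) 2 2"
proof -
  have "concl_sem \<rho> 2 2 (snd (clause_input_second A (w ! 1) (cfg A w 1 1)))"
    by (rule clause_holds[OF ia_formula_mem(3)[OF wf cfg_Qs_1]])
      (use n p in \<open>auto simp: clause_input_second_def minus_pred_eq unary_sem_def var_val_def\<close>)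
  moreover have "cfg A w 2 1 = dlt_in A (w ! 1) (qsharp A) (cfg A w 1 1) (qlam A)"
    using cfg_input_cell[OF wne, of 2 A] n cfg_quiescent[OF wf, of 2 w 1] by simp
  ultimately show ?thesis by (simp add: clause_input_second_def)
qed

lemma model_input:
  assumes t: "3 \<le> t" "t \<le> length w"
    and p: "\<rho> (cfg A w (t - 1) 1) (t - 1) (t - 1)" and r: "\<rho> (cfg A w (t - 1) 2) (t - 2) t"
  shows "\<rho> (cfg A w t 1) t t"
proof -
  have Q: "cfg A w (t - 1) 1 \<in> Qs A" "cfg A w (t - 1) 2 \<in> Qs A" using cfg_Qs_1 cfg_Qs[of 2 "t - 1"] t by auto
  have "minus_pred t 1 = t - 1" "minus_pred t 2 = t - 2" using t by (simp_all add: minus_pred_eq)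
  then have "concl_sem \<rho> t t (snd (clause_input A (w ! (t - 1)) (cfg A w (t - 1) 1) (cfg A w (t - 1) 2)))"
    by (intro clause_holds[OF ia_formula_mem(4)[OF wf Q]])
      (use t p r in \<open>auto simp: clause_input_def unary_sem_def var_val_def minus_pred_0\<close>)
  moreover have "cfg A w t 1 = dlt_in A (w ! (t - 1)) (qsharp A) (cfg A w (t - 1) 1) (cfg A w (t - 1) 2)"
    using cfg_input_cell[OF wne, of t A] t by simp
  ultimately show ?thesis by (simp add: clause_input_def)
qed

lemma model_front:
  assumes c: "2 \<le> c" "c + c \<le> length w + 1" and p: "\<rho> (cfg A w (c - 1) (c - 1)) 1 (2 * c - 3)"
  shows "\<rho> (cfg A w c c) 1 (2 * c - 1)"
proof -
  have Q: "cfg A w (c - 1) (c - 1) \<in> Qs A" using cfg_Qs c by simp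
  have "minus_pred (2 * c - 1) 1 = 2 * c - 2" "minus_pred (2 * c - 1) 2 = 2 * c - 3"
    using c by (simp_all add: minus_pred_eq)
  then have "concl_sem \<rho> 1 (2 * c - 1) (snd (clause_front A (cfg A w (c - 1) (c - 1))))"
    by (intro clause_holds[OF ia_formula_mem(5)[OF wf Q]])
      (use c p in \<open>auto simp: clause_front_def unary_sem_def var_val_def minus_pred_0\<close>)
  moreover have "cfg A w c c = dlt A (cfg A w (c - 1) (c - 1)) (qlam A) (qlam A)"
    using cfg_inner_cell[of c w c A] cfg_quiescent[OF wf, of c w "c - 1"]
      cfg_quiescent[OF wf, of "c + 1" w "c - 1"] c by simp
  ultimately show ?thesis by (simp add: clause_front_def)
qed

lemma model_front_second:
  assumes c: "2 \<le> c" "c + c + 1 \<le> length w + 1"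
    and p: "\<rho> (cfg A w c (c - 1)) 2 (2 * c - 2)" and q: "\<rho> (cfg A w c c) 1 (2 * c - 1)"
  shows "\<rho> (cfg A w (c + 1) c) 2 (2 * c)"
proof -
  have Q: "cfg A w c (c - 1) \<in> Qs A" "cfg A w c c \<in> Qs A" using cfg_Qs c by simp_all
  have "minus_pred (2 * c) 1 = 2 * c - 1" "minus_pred (2 * c) 2 = 2 * c - 2" "minus_pred 2 1 = 1"
    using c by (simp_all add: minus_pred_eq)
  then have "concl_sem \<rho> 2 (2 * c) (snd (clause_front_second A (cfg A w c (c - 1)) (cfg A w c c)))"
    by (intro clause_holds[OF ia_formula_mem(6)[OF wf Q]])
      (use c p q in \<open>auto simp: clause_front_second_def unary_sem_def var_val_def minus_pred_0\<close>)
  moreover have "cfg A w (c + 1) c = dlt A (cfg A w c (c - 1)) (cfg A w c c) (qlam A)"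
    using cfg_inner_cell[of c w "c + 1" A] cfg_quiescent[OF wf, of "c + 1" w c] c by simp
  ultimately show ?thesis by (simp add: clause_front_second_def)
qed

lemma model_inner:
  assumes c: "2 \<le> c" "c + 2 \<le> t" "c + t \<le> length w + 1"
    and p: "\<rho> (cfg A w (t - 1) (c - 1)) (t - c + 1) (t + c - 3)"
    and q: "\<rho> (cfg A w (t - 1) c) (t - c) (t + c - 2)"
    and r: "\<rho> (cfg A w (t - 1) (c + 1)) (t - c - 1) (t + c - 1)"
  shows "\<rho> (cfg A w t c) (t - c + 1) (t + c - 1)"
proof -
  let ?p = "cfg A w (t - 1) (c - 1)" and ?q = "cfg A w (t - 1) c" and ?r = "cfg A w (t - 1) (c + 1)"
  have Q: "?p \<in> Qs A" "?q \<in> Qs A" "?r \<in> Qs A" using cfg_Qs c by simp_all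
  have "minus_pred (t - c + 1) 1 = t - c" "minus_pred (t - c + 1) 2 = t - c - 1"
    "minus_pred (t + c - 1) 1 = t + c - 2" "minus_pred (t + c - 1) 2 = t + c - 3"
    using c by (simp_all add: minus_pred_eq)
  then have "concl_sem \<rho> (t - c + 1) (t + c - 1) (snd (clause_inner A ?p ?q ?r))"
    by (intro clause_holds[OF ia_formula_mem(7)[OF wf Q]])
      (use c p q r in \<open>auto simp: clause_inner_def unary_sem_def var_val_def minus_pred_0\<close>)
  moreover have "cfg A w t c = dlt A ?p ?q ?r"
    using cfg_inner_cell[of c w t A] c by simp
  ultimately show ?thesis by (simp add: clause_inner_def)
qed

lemma model_contains_trace:
  "1 \<le> c \<Longrightarrow> c \<le> t \<Longrightarrow> c + t \<le> length w + 1 \<Longrightarrow> \<rho> (cfg A w t c) (t - c + 1) (t + c - 1)"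
proof (induction t arbitrary: c rule: less_induct)
  case (less t)
  have IH: "\<rho> (cfg A w t' c') (t' - c' + 1) (t' + c' - 1)"
    if "t' < t" "1 \<le> c'" "c' \<le> t'" "c' + t' \<le> length w + 1" for t' c'
    using less.IH that by blast
  consider "c = 1" "t = 1" | "c = 1" "t = 2" | "c = 1" "3 \<le> t"
    | "2 \<le> c" "t = c" | "2 \<le> c" "t = c + 1" | "2 \<le> c" "c + 2 \<le> t"
    using less.prems by linarith
  then show ?case
  proof cases
    case 1
    then show ?thesis using model_input_first by simp
  next
    case 2
    then show ?thesis using model_input_second IH[of 1 1] less.prems by (simp add: numeral_2_eq_2)
  next
    case 3
    have "t - 1 - 1 + 1 = t - 1" "t - 1 + 1 - 1 = t - 1" "t - 1 - 2 + 1 = t - 2" "t - 1 + 2 - 1 = t"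
      using 3 by auto
    note e = this
    show ?thesis
      using model_input[of t] IH[of "t - 1" 1, unfolded e] IH[of "t - 1" 2, unfolded e] 3 less.prems by simp
  next
    case 4
    have "c - 1 - (c - 1) + 1 = 1" "c - 1 + (c - 1) - 1 = 2 * c - 3" "t - c + 1 = 1" "t + c - 1 = 2 * c - 1"
      using 4 by auto
    note e = this
    show ?thesis
      using model_front[of c] IH[of "c - 1" "c - 1", unfolded e] 4 less.prems unfolding e by simp
  next
    case 5
    have "c - (c - 1) + 1 = 2" "c + (c - 1) - 1 = 2 * c - 2" "c - c + 1 = 1" "c + c - 1 = 2 * c - 1"
      "t - c + 1 = 2" "t + c - 1 = 2 * c"
      using 5 by auto
    note e = this
    show ?thesis
      using model_front_second[of c] IH[of c "c - 1", unfolded e] IH[of c c, unfolded e] 5 less.prems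
      unfolding e by simp
  next
    case 6
    have "t - 1 - (c - 1) + 1 = t - c + 1" "t - 1 + (c - 1) - 1 = t + c - 3"
      "t - 1 - c + 1 = t - c" "t - 1 + c - 1 = t + c - 2"
      "t - 1 - (c + 1) + 1 = t - c - 1" "t - 1 + (c + 1) - 1 = t + c - 1"
      using 6 by auto
    note e = this
    show ?thesis
      using model_inner[of c t] IH[of "t - 1" "c - 1", unfolded e] IH[of "t - 1" c, unfolded e]
        IH[of "t - 1" "c + 1", unfolded e] 6 less.prems by simp
  qed
qed

lemma model_accepts: "cfg A w (length w) 1 \<in> Qacc A"
proof (rule ccontr)
  assume na: "cfg A w (length w) 1 \<notin> Qacc A"
  have "\<rho> (cfg A w (length w) 1) (length w - 1 + 1) (length w + 1 - 1)" using model_contains_trace[of 1 "length w"] length_ge_1[OF wne] by simp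
  moreover have "length w - 1 + 1 = length w" "length w + 1 - 1 = length w" using length_ge_1[OF wne] by auto
  ultimately have r: "\<rho> (cfg A w (length w) 1) (length w) (length w)" by simp
  have q: "cfg A w (length w) 1 \<in> Qs A" by (rule cfg_Qs_1)
  have "concl_sem \<rho> (length w) (length w) (snd (clause_reject (cfg A w (length w) 1) :: 'a horn_clause))"
    by (rule clause_holds[OF ia_formula_mem(8)[OF wf q na]]) (use r length_ge_1[OF wne] in \<open>auto simp: clause_reject_def unary_sem_def var_val_def minus_pred_0\<close>)
  then show False by (simp add: clause_reject_def)
qed

end

lemma horn_models_ia_formula_iff:
  fixes A :: "('a::finite) iarray"
  assumes wf: "ia_wf A" and wne: "w \<noteq> []"
  shows "horn_models w (ia_formula A) \<longleftrightarrow> ia_accepts_rt A w"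
proof
  assume "horn_models w (ia_formula A)"
  then obtain \<rho> where "\<forall>X\<in>{1..length w}. \<forall>Y\<in>{1..length w}. \<forall>C\<in>set (ia_formula A). clause_sem w \<rho> X Y C"
    unfolding horn_models_def by blast
  then show "ia_accepts_rt A w" using model_accepts[OF wf wne] unfolding ia_accepts_rt_def by blast
next
  assume "ia_accepts_rt A w"
  then show "horn_models w (ia_formula A)" using horn_models_trace_rel[OF wf wne] unfolding ia_accepts_rt_def by blast
qed

theorem RealTime_IA_subset_pred_dio_ESO_HORN: "(RealTime_IA :: ('a::finite) list set set) \<subseteq> pred_dio_ESO_HORN"
proof
  fix L :: "'a list set" assume "L \<in> RealTime_IA"
  then obtain A :: "'a iarray" where e: "[] \<notin> L" "ia_wf A" "\<forall>w. w \<noteq> [] \<longrightarrow> (w \<in> L \<longleftrightarrow> ia_accepts_rt A w)"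
    unfolding RealTime_IA_def by blast
  have "L = {w. w \<noteq> [] \<and> horn_models w (ia_formula A)}"
  proof (rule set_eqI)
    fix w :: "'a list"
    show "w \<in> L \<longleftrightarrow> w \<in> {w. w \<noteq> [] \<and> horn_models w (ia_formula A)}"
    proof (cases "w = []")
      case True then show ?thesis using e(1) by simp
    next
      case False
      then have "w \<in> L \<longleftrightarrow> ia_accepts_rt A w" using e(3) by blast
      also have "\<dots> \<longleftrightarrow> horn_models w (ia_formula A)" using horn_models_ia_formula_iff[OF e(2) False] by simp
      finally show ?thesis using False by simp
    qed
  qed
  then show "L \<in> pred_dio_ESO_HORN" unfolding pred_dio_ESO_HORN_def by blast
qed

section \<open>Least models on the grid, in two views\<close>

text \<open>The letters of a word are given as a function \<open>lt\<close> on positions, and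
  models live on the infinite grid of positions.  A fact of view \<open>Last\<close> is derived under the
  assumption that the larger of its two coordinates is the last position n, a fact of view
  \<open>Inner\<close> under the assumption that both are smaller than n.  A hypothesis at a point below the
  conclusion is read in view \<open>Last\<close> exactly when the maximum coordinate did not change.\<close>

datatype view = Inner | Last

datatype fact = Atom nat nat nat | Bot nat nat

type_synonym vfact = "view \<times> fact"

fun fact_pt :: "fact \<Rightarrow> nat \<times> nat" where
  "fact_pt (Atom S p q) = (p, q)"
| "fact_pt (Bot p q) = (p, q)"

definition hyp_view :: "view \<Rightarrow> nat \<Rightarrow> nat \<Rightarrow> nat \<Rightarrow> nat \<Rightarrow> view" where
  "hyp_view v X Y X' Y' = (if v = Last \<and> max X' Y' = max X Y then Last else Inner)"

definition unary_holds :: "view \<Rightarrow> unary_pred \<Rightarrow> nat \<Rightarrow> nat \<Rightarrow> nat \<Rightarrow> bool" where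
  "unary_holds v U X Y k = (case U of UMin \<Rightarrow> k = 1 | UMax \<Rightarrow> v = Last \<and> k = max X Y)"

fun hyp_holds :: "(nat \<Rightarrow> 'a) \<Rightarrow> view \<Rightarrow> nat \<Rightarrow> nat \<Rightarrow> vfact set \<Rightarrow> 'a hyp \<Rightarrow> bool" where
  "hyp_holds lt v X Y M (HInput s a) = (lt (minus_pred X a) = s \<and> X = Y)"
| "hyp_holds lt v X Y M (HUnary U var a pos) = (pos = unary_holds v U X Y (minus_pred (var_val var X Y) a))"
| "hyp_holds lt v X Y M (HRel S a b) =
     ((hyp_view v X Y (minus_pred X a) (minus_pred Y b), Atom S (minus_pred X a) (minus_pred Y b)) \<in> M)"
| "hyp_holds lt v X Y M (HRelRev S b a) =
     ((hyp_view v X Y (minus_pred Y b) (minus_pred X a), Atom S (minus_pred Y b) (minus_pred X a)) \<in> M)"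

fun hyp_fact :: "view \<Rightarrow> nat \<Rightarrow> nat \<Rightarrow> 'a hyp \<Rightarrow> vfact option" where
  "hyp_fact v X Y (HRel S a b) =
     Some (hyp_view v X Y (minus_pred X a) (minus_pred Y b), Atom S (minus_pred X a) (minus_pred Y b))"
| "hyp_fact v X Y (HRelRev S b a) =
     Some (hyp_view v X Y (minus_pred Y b) (minus_pred X a), Atom S (minus_pred Y b) (minus_pred X a))"
| "hyp_fact v X Y _ = None"

fun hyp_offsets :: "'a hyp \<Rightarrow> nat set" where
  "hyp_offsets (HInput s a) = {a}"
| "hyp_offsets (HUnary U var a pos) = {a}"
| "hyp_offsets (HRel S a b) = {a, b}"
| "hyp_offsets (HRelRev S b a) = {a, b}"

lemma hyp_holds_mono: "hyp_holds lt v X Y M h \<Longrightarrow> M \<subseteq> M' \<Longrightarrow> hyp_holds lt v X Y M' h"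
  by (cases h) auto

lemma hyp_holds_restrict:
  assumes "\<And>f. hyp_fact v X Y h = Some f \<Longrightarrow> f \<in> S"
  shows "hyp_holds lt v X Y (M \<inter> S) h = hyp_holds lt v X Y M h"
  using assms by (cases h) auto

fun concl_fact :: "concl \<Rightarrow> nat \<Rightarrow> nat \<Rightarrow> fact" where
  "concl_fact (CRel R) X Y = Atom R X Y"
| "concl_fact CBot X Y = Bot X Y"

lemma fact_pt_concl_fact [simp]: "fact_pt (concl_fact c X Y) = (X, Y)"
  by (cases c) auto

definition model_closed :: "'a horn_formula \<Rightarrow> (nat \<Rightarrow> 'a) \<Rightarrow> vfact set \<Rightarrow> bool" where
  "model_closed F lt M = (\<forall>C\<in>set F. \<forall>v X Y. 1 \<le> X \<longrightarrow> 1 \<le> Y \<longrightarrow>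
      (\<forall>h\<in>set (fst C). hyp_holds lt v X Y M h) \<longrightarrow> (v, concl_fact (snd C) X Y) \<in> M)"

definition least_model :: "'a horn_formula \<Rightarrow> (nat \<Rightarrow> 'a) \<Rightarrow> vfact set" where
  "least_model F lt = \<Inter>{M. model_closed F lt M}"

lemma least_model_minimal: "model_closed F lt M \<Longrightarrow> least_model F lt \<subseteq> M"
  unfolding least_model_def by blast

lemma least_model_closed: "model_closed F lt (least_model F lt)"
  unfolding model_closed_def
proof (intro ballI allI impI)
  fix C v X Y
  assume C: "C \<in> set F" and XY: "1 \<le> X" "1 \<le> Y"
    and H: "\<forall>h\<in>set (fst C). hyp_holds lt v X Y (least_model F lt) h"
  show "(v, concl_fact (snd C) X Y) \<in> least_model F lt"
    unfolding least_model_def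
  proof
    fix M assume "M \<in> {M. model_closed F lt M}"
    then have closed: "model_closed F lt M" by simp
    then have "\<forall>h\<in>set (fst C). hyp_holds lt v X Y M h"
      using H hyp_holds_mono least_model_minimal by blast
    then show "(v, concl_fact (snd C) X Y) \<in> M" using closed C XY unfolding model_closed_def by blast
  qed
qed

lemma least_model_rule:
  "C \<in> set F \<Longrightarrow> 1 \<le> X \<Longrightarrow> 1 \<le> Y \<Longrightarrow> (\<forall>h\<in>set (fst C). hyp_holds lt v X Y (least_model F lt) h)
   \<Longrightarrow> (v, concl_fact (snd C) X Y) \<in> least_model F lt"
  using least_model_closed unfolding model_closed_def by blast

definition pos_fact :: "vfact \<Rightarrow> bool" where
  "pos_fact f = (1 \<le> fst (fact_pt (snd f)) \<and> 1 \<le> snd (fact_pt (snd f)))"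

lemma least_model_pos: "f \<in> least_model F lt \<Longrightarrow> pos_fact f"
proof -
  have "model_closed F lt {f. pos_fact f}"
    unfolding model_closed_def pos_fact_def by auto
  then show "f \<in> least_model F lt \<Longrightarrow> pos_fact f" using least_model_minimal by blast
qed

definition view_at :: "nat \<Rightarrow> nat \<Rightarrow> nat \<Rightarrow> view" where
  "view_at n p q = (if max p q = n then Last else Inner)"

definition letter_at :: "'a list \<Rightarrow> nat \<Rightarrow> 'a" where
  "letter_at w k = w ! (k - 1)"

lemma hyp_view_view_at:
  "X' \<le> X \<Longrightarrow> Y' \<le> Y \<Longrightarrow> max X Y \<le> n \<Longrightarrow> hyp_view (view_at n X Y) X Y X' Y' = view_at n X' Y'"
  unfolding hyp_view_def view_at_def by auto

lemma hyp_holds_view_at: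
  fixes w :: "'a list"
  defines "n \<equiv> length w"
  assumes X: "1 \<le> X" "X \<le> n" and Y: "1 \<le> Y" "Y \<le> n"
    and M: "\<And>S p q. 1 \<le> p \<Longrightarrow> p \<le> n \<Longrightarrow> 1 \<le> q \<Longrightarrow> q \<le> n \<Longrightarrow>
              (view_at n p q, Atom S p q) \<in> M \<longleftrightarrow> \<rho> S p q"
  shows "hyp_holds (letter_at w) (view_at n X Y) X Y M h \<longleftrightarrow> hyp_sem w \<rho> X Y h"
proof (cases h)
  case (HInput s a)
  then show ?thesis by (auto simp: letter_at_def)
next
  case (HUnary U var a pos)
  have "minus_pred (var_val var X Y) a \<le> max X Y"
    using minus_pred_le[of "var_val var X Y" a] by (cases var) (auto simp: var_val_def)
  then have "unary_holds (view_at n X Y) U X Y (minus_pred (var_val var X Y) a) =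
      unary_sem U n (minus_pred (var_val var X Y) a)"
    using X Y unfolding unary_holds_def unary_sem_def view_at_def by (cases U) auto
  then show ?thesis using HUnary n_def by (cases pos) auto
next
  case (HRel S a b)
  have "1 \<le> minus_pred X a" "minus_pred X a \<le> n" "1 \<le> minus_pred Y b" "minus_pred Y b \<le> n"
    using X Y minus_pred_pos minus_pred_le le_trans by blast+
  then show ?thesis
    using HRel X Y M hyp_view_view_at[OF minus_pred_le minus_pred_le, of X Y n] by simp
next
  case (HRelRev S b a)
  have "1 \<le> minus_pred X a" "minus_pred X a \<le> n" "1 \<le> minus_pred Y b" "minus_pred Y b \<le> n"
    using X Y minus_pred_pos minus_pred_le le_trans by blast+
  moreover have "hyp_view (view_at n X Y) X Y (minus_pred Y b) (minus_pred X a) =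
      view_at n (minus_pred Y b) (minus_pred X a)"
    using X Y minus_pred_le[of X a] minus_pred_le[of Y b]
    unfolding hyp_view_def view_at_def by (auto simp: max_def)
  ultimately show ?thesis using HRelRev M by simp
qed

definition derives_bot :: "nat \<Rightarrow> vfact set \<Rightarrow> bool" where
  "derives_bot n M \<longleftrightarrow> (\<exists>p q. 1 \<le> p \<and> p \<le> n \<and> 1 \<le> q \<and> q \<le> n \<and> (view_at n p q, Bot p q) \<in> M)"

lemma horn_models_imp_no_bot:
  fixes w :: "'a list"
  defines "n \<equiv> length w"
  assumes "horn_models w F"
  shows "\<not> derives_bot n (least_model F (letter_at w))"
proof -
  obtain \<rho> where \<rho>: "\<forall>x\<in>{1..n}. \<forall>y\<in>{1..n}. \<forall>C\<in>set F. clause_sem w \<rho> x y C"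
    using assms unfolding horn_models_def n_def by blast
  define true_view where "true_view v p q \<longleftrightarrow> 1 \<le> p \<and> p \<le> n \<and> 1 \<le> q \<and> q \<le> n \<and> v = view_at n p q"
    for v p q
  define M where "M = {(v, Atom S p q) | v S p q. true_view v p q \<longrightarrow> \<rho> S p q}
     \<union> {(v, Bot p q) | v p q. \<not> true_view v p q}"
  have "model_closed F (letter_at w) M"
    unfolding model_closed_def
  proof (intro ballI allI impI)
    fix C v X Y
    assume C: "C \<in> set F" and "1 \<le> X" "1 \<le> Y"
      and H: "\<forall>h\<in>set (fst C). hyp_holds (letter_at w) v X Y M h"
    show "(v, concl_fact (snd C) X Y) \<in> M"
    proof (cases "true_view v X Y")
      case False
      then show ?thesis unfolding M_def by (cases "snd C") auto
    next
      case True
      then have XY: "1 \<le> X" "X \<le> n" "1 \<le> Y" "Y \<le> n" and v: "v = view_at n X Y"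
        unfolding true_view_def by auto
      have "(view_at n p q, Atom S p q) \<in> M \<longleftrightarrow> \<rho> S p q"
        if "1 \<le> p" "p \<le> n" "1 \<le> q" "q \<le> n" for S p q
        using that unfolding M_def true_view_def by auto
      then have "\<forall>h\<in>set (fst C). hyp_sem w \<rho> X Y h"
        using H hyp_holds_view_at[OF XY[unfolded n_def]] unfolding v n_def by blast
      then have "concl_sem \<rho> X Y (snd C)"
        using \<rho> XY C unfolding clause_sem_def by auto
      then show ?thesis using True unfolding M_def by (cases "snd C") auto
    qed
  qed
  then have "least_model F (letter_at w) \<subseteq> M" by (rule least_model_minimal)
  then show ?thesis unfolding derives_bot_def M_def true_view_def by auto
qed

lemma no_bot_imp_horn_models:
  fixes w :: "'a list"
  defines "n \<equiv> length w"
  assumes no_bot: "\<not> derives_bot n (least_model F (letter_at w))"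
  shows "horn_models w F"
proof -
  let ?L = "least_model F (letter_at w)"
  define \<rho> where "\<rho> S p q \<longleftrightarrow> (view_at n p q, Atom S p q) \<in> ?L" for S p q
  have "clause_sem w \<rho> X Y C" if X: "X \<in> {1..n}" and Y: "Y \<in> {1..n}" and C: "C \<in> set F" for X Y C
    unfolding clause_sem_def
  proof
    assume "\<forall>h\<in>set (fst C). hyp_sem w \<rho> X Y h"
    then have "\<forall>h\<in>set (fst C). hyp_holds (letter_at w) (view_at n X Y) X Y ?L h"
      using hyp_holds_view_at[of X w Y ?L \<rho>] X Y unfolding \<rho>_def n_def by auto
    then have "(view_at n X Y, concl_fact (snd C) X Y) \<in> ?L"
      using least_model_rule[OF C] X Y by auto
    then show "concl_sem \<rho> X Y (snd C)"
      using no_bot X Y unfolding \<rho>_def derives_bot_def by (cases "snd C") auto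
  qed
  then show ?thesis unfolding horn_models_def n_def by blast
qed

lemma horn_models_iff: "horn_models w F \<longleftrightarrow> \<not> derives_bot (length w) (least_model F (letter_at w))"
  using horn_models_imp_no_bot no_bot_imp_horn_models by blast

definition facts_at :: "(nat \<times> nat) set \<Rightarrow> vfact set" where
  "facts_at P = {f. fact_pt (snd f) \<in> P}"

definition locally_closed ::
  "'a horn_formula \<Rightarrow> (nat \<Rightarrow> 'a) \<Rightarrow> (nat \<times> nat) set \<Rightarrow> vfact set \<Rightarrow> vfact set \<Rightarrow> bool" where
  "locally_closed F lt P E Z = (\<forall>C\<in>set F. \<forall>v X Y. (X, Y) \<in> P \<longrightarrow> 1 \<le> X \<longrightarrow> 1 \<le> Y \<longrightarrow>
      (\<forall>h\<in>set (fst C). hyp_holds lt v X Y (Z \<union> E) h) \<longrightarrow> (v, concl_fact (snd C) X Y) \<in> Z)"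

definition local_closure ::
  "'a horn_formula \<Rightarrow> (nat \<Rightarrow> 'a) \<Rightarrow> (nat \<times> nat) set \<Rightarrow> vfact set \<Rightarrow> vfact set" where
  "local_closure F lt P E = \<Inter>{Z. Z \<subseteq> facts_at P \<and> locally_closed F lt P E Z}"

lemma local_closure_subset: "local_closure F lt P E \<subseteq> facts_at P"
proof -
  have "locally_closed F lt P E (facts_at P)"
    unfolding locally_closed_def facts_at_def by auto
  then show ?thesis unfolding local_closure_def by blast
qed

lemma local_closure_least:
  "Z \<subseteq> facts_at P \<Longrightarrow> locally_closed F lt P E Z \<Longrightarrow> local_closure F lt P E \<subseteq> Z"
  unfolding local_closure_def by blast

lemma local_closure_closed: "locally_closed F lt P E (local_closure F lt P E)"
  unfolding locally_closed_def
proof (intro ballI allI impI)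
  fix C v X Y
  assume C: "C \<in> set F" and P: "(X, Y) \<in> P" and XY: "1 \<le> X" "1 \<le> Y"
    and H: "\<forall>h\<in>set (fst C). hyp_holds lt v X Y (local_closure F lt P E \<union> E) h"
  show "(v, concl_fact (snd C) X Y) \<in> local_closure F lt P E"
    unfolding local_closure_def
  proof
    fix Z assume "Z \<in> {Z. Z \<subseteq> facts_at P \<and> locally_closed F lt P E Z}"
    then have Z: "Z \<subseteq> facts_at P" "locally_closed F lt P E Z" by auto
    then have "\<forall>h\<in>set (fst C). hyp_holds lt v X Y (Z \<union> E) h"
      using H local_closure_least[OF Z] hyp_holds_mono[of lt v X Y _ _ "Z \<union> E"] by blast
    then show "(v, concl_fact (snd C) X Y) \<in> Z" using Z(2) C P XY unfolding locally_closed_def by blast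
  qed
qed

lemma local_closure_le_least_model:
  "local_closure F lt P (least_model F lt \<inter> U) \<subseteq> least_model F lt \<inter> facts_at P"
proof (rule local_closure_least)
  let ?L = "least_model F lt"
  show "locally_closed F lt P (?L \<inter> U) (?L \<inter> facts_at P)"
    unfolding locally_closed_def
  proof (intro ballI allI impI)
    fix C v X Y
    assume C: "C \<in> set F" and P: "(X, Y) \<in> P" and XY: "1 \<le> X" "1 \<le> Y"
      and H: "\<forall>h\<in>set (fst C). hyp_holds lt v X Y (?L \<inter> facts_at P \<union> ?L \<inter> U) h"
    then have "(v, concl_fact (snd C) X Y) \<in> ?L"
      using least_model_rule[OF C XY] hyp_holds_mono[of lt v X Y _ _ ?L] by blast
    then show "(v, concl_fact (snd C) X Y) \<in> ?L \<inter> facts_at P" using P by (simp add: facts_at_def)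
  qed
qed auto

lemma least_model_at_eq_local_closure:
  assumes local: "\<And>C h v X Y f. C \<in> set F \<Longrightarrow> h \<in> set (fst C) \<Longrightarrow> (X, Y) \<in> P \<Longrightarrow> 1 \<le> X \<Longrightarrow> 1 \<le> Y
      \<Longrightarrow> hyp_fact v X Y h = Some f \<Longrightarrow> f \<in> facts_at P \<union> U"
  shows "least_model F lt \<inter> facts_at P = local_closure F lt P (least_model F lt \<inter> U)"
proof
  let ?L = "least_model F lt" and ?E = "least_model F lt \<inter> U"
  show "local_closure F lt P ?E \<subseteq> ?L \<inter> facts_at P" by (rule local_closure_le_least_model)
  define M' where "M' = (?L - facts_at P) \<union> local_closure F lt P ?E"
  have M'L: "M' \<subseteq> ?L" using local_closure_le_least_model unfolding M'_def by blast
  have "model_closed F lt M'"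
    unfolding model_closed_def
  proof (intro ballI allI impI)
    fix C v X Y
    assume C: "C \<in> set F" and XY: "1 \<le> X" "1 \<le> Y"
      and H: "\<forall>h\<in>set (fst C). hyp_holds lt v X Y M' h"
    show "(v, concl_fact (snd C) X Y) \<in> M'"
    proof (cases "(X, Y) \<in> P")
      case False
      have "(v, concl_fact (snd C) X Y) \<in> ?L"
        using least_model_rule[OF C XY] H hyp_holds_mono[OF _ M'L] by blast
      then show ?thesis using False unfolding M'_def facts_at_def by auto
    next
      case True
      have "hyp_holds lt v X Y (local_closure F lt P ?E \<union> ?E) h" if h: "h \<in> set (fst C)" for h
      proof -
        have "hyp_holds lt v X Y (M' \<inter> (facts_at P \<union> U)) h"
          using hyp_holds_restrict local[OF C h True XY] H h by blast
        moreover have "M' \<inter> (facts_at P \<union> U) \<subseteq> local_closure F lt P ?E \<union> ?E"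
          unfolding M'_def by blast
        ultimately show ?thesis using hyp_holds_mono by blast
      qed
      then have "(v, concl_fact (snd C) X Y) \<in> local_closure F lt P ?E"
        using local_closure_closed[of F lt P ?E] C True XY unfolding locally_closed_def by blast
      then show ?thesis unfolding M'_def by blast
    qed
  qed
  then have "?L \<subseteq> M'" by (rule least_model_minimal)
  then show "?L \<inter> facts_at P \<subseteq> local_closure F lt P ?E" unfolding M'_def by blast
qed

fun map_fact :: "(nat \<Rightarrow> nat) \<Rightarrow> vfact \<Rightarrow> vfact" where
  "map_fact \<phi> (v, Atom S p q) = (v, Atom S (\<phi> p) (\<phi> q))"
| "map_fact \<phi> (v, Bot p q) = (v, Bot (\<phi> p) (\<phi> q))"

lemma map_fact_concl_fact [simp]: "map_fact \<phi> (v, concl_fact c X Y) = (v, concl_fact c (\<phi> X) (\<phi> Y))"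
  by (cases c) auto

lemma fact_pt_map_fact:
  "fact_pt (snd (map_fact \<phi> f)) = (\<phi> (fst (fact_pt (snd f))), \<phi> (snd (fact_pt (snd f))))"
proof -
  obtain v g where "f = (v, g)" by (cases f)
  then show ?thesis by (cases g) auto
qed

definition facts_within :: "nat set \<Rightarrow> vfact set" where
  "facts_within D = {f. fst (fact_pt (snd f)) \<in> D \<and> snd (fact_pt (snd f)) \<in> D}"

lemma inj_on_map_fact:
  assumes "inj_on f D"
  shows "inj_on (map_fact f) (facts_within D)"
proof (rule inj_onI)
  fix g1 g2 assume g: "g1 \<in> facts_within D" "g2 \<in> facts_within D" and eq: "map_fact f g1 = map_fact f g2"
  obtain v1 h1 v2 h2 where "g1 = (v1, h1)" "g2 = (v2, h2)" by (cases g1, cases g2)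
  then show "g1 = g2"
    using g eq assms unfolding facts_within_def by (cases h1; cases h2) (auto dest: inj_onD)
qed

lemma mono_on_eq_iff:
  fixes f :: "'a::order \<Rightarrow> 'b::order"
  assumes "\<And>p q. p \<in> D \<Longrightarrow> q \<in> D \<Longrightarrow> (p \<le> q) = (f p \<le> f q)" "p \<in> D" "q \<in> D"
  shows "(p = q) = (f p = f q)"
proof -
  have "(p \<le> q) = (f p \<le> f q)" "(q \<le> p) = (f q \<le> f p)" using assms by auto
  then show ?thesis by (metis order_antisym order_refl)
qed

lemma hyp_view_map:
  fixes f :: "nat \<Rightarrow> nat"
  assumes mono: "\<And>p q. p \<in> D \<Longrightarrow> q \<in> D \<Longrightarrow> (p \<le> q) = (f p \<le> f q)"
    and D: "X \<in> D" "Y \<in> D" "X' \<in> D" "Y' \<in> D"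
  shows "hyp_view v X Y X' Y' = hyp_view v (f X) (f Y) (f X') (f Y')"
proof -
  have max: "f (max p q) = max (f p) (f q)" if "p \<in> D" "q \<in> D" for p q
    using mono that by (simp add: max_def)
  have "(max X' Y' = max X Y) = (f (max X' Y') = f (max X Y))"
    using mono_on_eq_iff[OF mono] D by (simp add: max_def)
  then show ?thesis unfolding hyp_view_def using max D by simp
qed

lemma hyp_holds_map:
  assumes mono: "\<And>p q. p \<in> D \<Longrightarrow> q \<in> D \<Longrightarrow> (p \<le> q) = (f p \<le> f q)"
    and XD: "X \<in> D" and YD: "Y \<in> D"
    and minus_D: "\<And>a. a \<le> K \<Longrightarrow> minus_pred X a \<in> D \<and> minus_pred Y a \<in> D"
    and minus_f: "\<And>a. a \<le> K \<Longrightarrow> f (minus_pred X a) = minus_pred (f X) a \<and> f (minus_pred Y a) = minus_pred (f Y) a"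
    and minus_1: "\<And>a. a \<le> K \<Longrightarrow> (minus_pred X a = 1) = (minus_pred (f X) a = 1) \<and>
                                 (minus_pred Y a = 1) = (minus_pred (f Y) a = 1)"
    and letters: "\<And>a. X = Y \<Longrightarrow> a \<le> K \<Longrightarrow> lt (minus_pred X a) = lt' (minus_pred (f X) a)"
    and offsets: "\<forall>a\<in>hyp_offsets h. a \<le> K"
    and M: "M \<subseteq> facts_within D"
  shows "hyp_holds lt v X Y M h = hyp_holds lt' v (f X) (f Y) (map_fact f ` M) h"
proof -
  have eq: "(p = q) = (f p = f q)" if "p \<in> D" "q \<in> D" for p q
    using mono_on_eq_iff[OF mono that] .
  have mem: "g \<in> M \<longleftrightarrow> map_fact f g \<in> map_fact f ` M" if "g \<in> facts_within D" for g
    using inj_on_image_mem_iff[OF inj_on_map_fact that M] eq unfolding inj_on_def by blast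
  show ?thesis
  proof (cases h)
    case (HInput s a)
    then show ?thesis using letters offsets eq[OF XD YD] by auto
  next
    case (HUnary U var a pos)
    let ?Z = "var_val var X Y"
    have a: "a \<le> K" using offsets HUnary by simp
    have Zf: "var_val var (f X) (f Y) = f ?Z" by (cases var) (auto simp: var_val_def)
    have Z: "minus_pred ?Z a \<in> D" "f (minus_pred ?Z a) = minus_pred (f ?Z) a"
      "(minus_pred ?Z a = 1) = (minus_pred (f ?Z) a = 1)"
      using minus_D[OF a] minus_f[OF a] minus_1[OF a] by (cases var; simp add: var_val_def)+
    have "max X Y \<in> D" "f (max X Y) = max (f X) (f Y)" using XD YD mono by (auto simp: max_def)
    then have "(minus_pred ?Z a = max X Y) = (minus_pred (f ?Z) a = max (f X) (f Y))"
      using eq[OF Z(1)] Z(2) by simp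
    then have "unary_holds v U X Y (minus_pred ?Z a) = unary_holds v U (f X) (f Y) (minus_pred (f ?Z) a)"
      unfolding unary_holds_def using Z(3) by (cases U) auto
    then show ?thesis using HUnary Zf by simp
  next
    case (HRel S a b)
    then have "minus_pred X a \<in> D" "minus_pred Y b \<in> D"
      "f (minus_pred X a) = minus_pred (f X) a" "f (minus_pred Y b) = minus_pred (f Y) b"
      using offsets minus_D minus_f by auto
    then show ?thesis
      using HRel mem[of "(hyp_view v X Y (minus_pred X a) (minus_pred Y b), Atom S (minus_pred X a) (minus_pred Y b))"]
        hyp_view_map[OF mono XD YD] by (simp add: facts_within_def)
  next
    case (HRelRev S b a)
    then have "minus_pred X a \<in> D" "minus_pred Y b \<in> D"
      "f (minus_pred X a) = minus_pred (f X) a" "f (minus_pred Y b) = minus_pred (f Y) b"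
      using offsets minus_D minus_f by auto
    then show ?thesis
      using HRelRev mem[of "(hyp_view v X Y (minus_pred Y b) (minus_pred X a), Atom S (minus_pred Y b) (minus_pred X a))"]
        hyp_view_map[OF mono XD YD] by (simp add: facts_within_def)
  qed
qed

context
  fixes F :: "'a horn_formula" and lt lt' :: "nat \<Rightarrow> 'a" and \<phi> :: "nat \<Rightarrow> nat"
    and P :: "(nat \<times> nat) set" and D :: "nat set" and E :: "vfact set"
  assumes hyp_holds_\<phi>: "\<And>C h v X Y M. C \<in> set F \<Longrightarrow> h \<in> set (fst C) \<Longrightarrow> (X, Y) \<in> P \<Longrightarrow>
        M \<subseteq> facts_within D \<Longrightarrow> hyp_holds lt v X Y M h = hyp_holds lt' v (\<phi> X) (\<phi> Y) (map_fact \<phi> ` M) h"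
    and pos: "\<And>X Y. (X, Y) \<in> P \<Longrightarrow> 1 \<le> X \<and> 1 \<le> Y \<and> 1 \<le> \<phi> X \<and> 1 \<le> \<phi> Y"
    and P_within: "facts_at P \<subseteq> facts_within D"
    and E_within: "E \<subseteq> facts_within D"
begin

private abbreviation "P' \<equiv> (\<lambda>(X, Y). (\<phi> X, \<phi> Y)) ` P"

lemma local_closure_map_le: "local_closure F lt' P' (map_fact \<phi> ` E) \<subseteq> map_fact \<phi> ` local_closure F lt P E"
proof (rule local_closure_least)
  let ?c = "local_closure F lt P E"
  have c_within: "?c \<subseteq> facts_within D" using local_closure_subset P_within by blast
  show "map_fact \<phi> ` ?c \<subseteq> facts_at P'"
  proof
    fix g assume "g \<in> map_fact \<phi> ` ?c"
    then obtain f where f: "f \<in> ?c" "g = map_fact \<phi> f" by blast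
    obtain a b where ab: "fact_pt (snd f) = (a, b)" by (cases "fact_pt (snd f)")
    have "(a, b) \<in> P" using f(1) local_closure_subset[of F lt P E] ab unfolding facts_at_def by auto
    then show "g \<in> facts_at P'" using f(2) fact_pt_map_fact[of \<phi> f] ab unfolding facts_at_def by force
  qed
  show "locally_closed F lt' P' (map_fact \<phi> ` E) (map_fact \<phi> ` ?c)"
    unfolding locally_closed_def
  proof (intro ballI allI impI)
    fix C v X' Y'
    assume C: "C \<in> set F" and P': "(X', Y') \<in> P'"
      and H: "\<forall>h\<in>set (fst C). hyp_holds lt' v X' Y' (map_fact \<phi> ` ?c \<union> map_fact \<phi> ` E) h"
    obtain X Y where XY: "(X, Y) \<in> P" "X' = \<phi> X" "Y' = \<phi> Y" using P' by auto
    have "\<forall>h\<in>set (fst C). hyp_holds lt v X Y (?c \<union> E) h"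
      using H XY hyp_holds_\<phi>[OF C _ XY(1), of _ "?c \<union> E" v] c_within E_within by (simp add: image_Un)
    then have "(v, concl_fact (snd C) X Y) \<in> ?c"
      using local_closure_closed[of F lt P E] C XY(1) pos[OF XY(1)] unfolding locally_closed_def by blast
    then show "(v, concl_fact (snd C) X' Y') \<in> map_fact \<phi> ` ?c"
      using XY map_fact_concl_fact by (metis image_eqI)
  qed
qed

lemma map_local_closure_le: "map_fact \<phi> ` local_closure F lt P E \<subseteq> local_closure F lt' P' (map_fact \<phi> ` E)"
proof -
  let ?c' = "local_closure F lt' P' (map_fact \<phi> ` E)"
  define Z where "Z = {f \<in> facts_at P. map_fact \<phi> f \<in> ?c'}"
  have "locally_closed F lt P E Z"
    unfolding locally_closed_def
  proof (intro ballI allI impI)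
    fix C v X Y
    assume C: "C \<in> set F" and P: "(X, Y) \<in> P" and XY: "1 \<le> X" "1 \<le> Y"
      and H: "\<forall>h\<in>set (fst C). hyp_holds lt v X Y (Z \<union> E) h"
    have ZE: "Z \<union> E \<subseteq> facts_within D" using P_within E_within unfolding Z_def by blast
    have "hyp_holds lt' v (\<phi> X) (\<phi> Y) (?c' \<union> map_fact \<phi> ` E) h" if h: "h \<in> set (fst C)" for h
    proof -
      have "hyp_holds lt' v (\<phi> X) (\<phi> Y) (map_fact \<phi> ` (Z \<union> E)) h"
        using hyp_holds_\<phi>[OF C h P ZE] H h by blast
      moreover have "map_fact \<phi> ` (Z \<union> E) \<subseteq> ?c' \<union> map_fact \<phi> ` E"
        unfolding Z_def by blast
      ultimately show ?thesis by (rule hyp_holds_mono)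
    qed
    moreover have "(\<phi> X, \<phi> Y) \<in> P'" using P by (auto intro: rev_image_eqI)
    ultimately have "(v, concl_fact (snd C) (\<phi> X) (\<phi> Y)) \<in> ?c'"
      using local_closure_closed[of F lt' P' "map_fact \<phi> ` E"] C pos[OF P]
      unfolding locally_closed_def by blast
    then show "(v, concl_fact (snd C) X Y) \<in> Z" unfolding Z_def facts_at_def using P by simp
  qed
  then have "local_closure F lt P E \<subseteq> Z" by (rule local_closure_least[rotated]) (simp add: Z_def)
  then show ?thesis unfolding Z_def by blast
qed

lemma local_closure_map:
  "local_closure F lt' P' (map_fact \<phi> ` E) = map_fact \<phi> ` local_closure F lt P E"
  using local_closure_map_le map_local_closure_le by (rule antisym)

end

text \<open>Cell c at time t works at the site (x, y) = (t - c + 1, t + c - 1), where it computes the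
  facts at the points (x, y), (x, y + 1), (x - 1, y + 1) and their mirror images; these points
  cover the grid.  The window of radius D of a site consists of the points (p, q), and their
  mirror images, with x - D \<le> p \<le> x and y + 1 - D \<le> q \<le> y + 1.  A clause concluding at a site
  only needs facts at the site or in the windows of radius K + 2 of the three sites
  (x, y - 2), (x - 1, y - 1), (x - 2, y) of the previous time step (\<open>hyp_fact_local\<close>).\<close>

definition in_box :: "nat \<Rightarrow> nat \<Rightarrow> nat \<Rightarrow> nat \<Rightarrow> nat \<Rightarrow> bool" where
  "in_box D x0 y0 p q \<longleftrightarrow> p \<le> x0 \<and> x0 \<le> p + D \<and> q \<le> y0 + 1 \<and> y0 + 1 \<le> q + D"

definition in_window :: "nat \<Rightarrow> nat \<Rightarrow> nat \<Rightarrow> nat \<Rightarrow> nat \<Rightarrow> bool" where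
  "in_window D x0 y0 p q \<longleftrightarrow> in_box D x0 y0 p q \<or> in_box D x0 y0 q p"

definition site_pt :: "nat \<Rightarrow> nat \<Rightarrow> nat \<Rightarrow> nat \<Rightarrow> bool" where
  "site_pt x y p q \<longleftrightarrow> (p = x \<and> q = y) \<or> (p = x \<and> q = y + 1) \<or> (p = x - 1 \<and> q = y + 1)"

definition site_pts :: "nat \<Rightarrow> nat \<Rightarrow> (nat \<times> nat) set" where
  "site_pts x y = {(p, q). 1 \<le> p \<and> 1 \<le> q \<and> (site_pt x y p q \<or> site_pt x y q p)}"

definition in_nb_window :: "nat \<Rightarrow> nat \<Rightarrow> nat \<Rightarrow> nat \<Rightarrow> nat \<Rightarrow> nat \<Rightarrow> bool" where
  "in_nb_window D c x y p q \<longleftrightarrow> (c \<noteq> 1 \<and> in_window D x (y - 2) p q) \<or> in_window D (x - 1) (y - 1) p q \<or> in_window D (x - 2) y p q"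

lemma in_box_cases:
  assumes x: "1 \<le> x" and c: "1 \<le> c" and y: "y = x + 2 * c - 2" and p: "1 \<le> p" and q: "1 \<le> q"
    and b: "in_box (K + 2) x y p q"
  shows "(p, q) \<in> site_pts x y \<or> in_nb_window (K + 2) c x y p q"
proof -
  have b': "p \<le> x" "x \<le> p + (K + 2)" "q \<le> y + 1" "y + 1 \<le> q + (K + 2)" using b unfolding in_box_def by auto
  consider "q + 1 \<le> y" | "q = y" | "q = y + 1" using b' by linarith
  then show ?thesis
  proof cases
    case 1
    show ?thesis
    proof (cases "c = 1")
      case True
      then have "in_box (K + 2) (x - 1) (y - 1) q p" using b' 1 y x unfolding in_box_def by auto
      then show ?thesis unfolding in_nb_window_def in_window_def by blast
    next
      case False
      then have "in_box (K + 2) x (y - 2) p q" using b' 1 y x c unfolding in_box_def by auto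
      then show ?thesis using False unfolding in_nb_window_def in_window_def by blast
    qed
  next
    case 2
    show ?thesis
    proof (cases "p = x")
      case True then show ?thesis using 2 p q unfolding site_pts_def site_pt_def by auto
    next
      case False
      then have "in_box (K + 2) (x - 1) (y - 1) p q" using b' 2 y x c unfolding in_box_def by auto
      then show ?thesis unfolding in_nb_window_def in_window_def by blast
    qed
  next
    case 3
    show ?thesis
    proof (cases "p + 2 \<le> x")
      case False
      then have "p = x \<or> p = x - 1" using b' by linarith
      then show ?thesis using 3 p q unfolding site_pts_def site_pt_def by auto
    next
      case True
      then have "in_box (K + 2) (x - 2) y p q" using b' 3 unfolding in_box_def by auto
      then show ?thesis unfolding in_nb_window_def in_window_def by blast
    qed
  qed
qed

lemma site_pts_swap: "((p, q) \<in> site_pts x y) = ((q, p) \<in> site_pts x y)"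
  unfolding site_pts_def by auto

lemma in_nb_window_swap: "in_nb_window D c x y p q = in_nb_window D c x y q p"
  unfolding in_nb_window_def in_window_def by auto

lemma minus_pred_site_pts:
  assumes x: "1 \<le> x" and c: "1 \<le> c" and y: "y = x + 2 * c - 2"
    and P: "(X, Y) \<in> site_pts x y" and a: "a \<le> K" and b: "b \<le> K"
  shows "(minus_pred X a, minus_pred Y b) \<in> site_pts x y \<or> in_nb_window (K + 2) c x y (minus_pred X a) (minus_pred Y b)"
proof -
  have XY: "1 \<le> X" "1 \<le> Y" using P unfolding site_pts_def by auto
  have m: "1 \<le> minus_pred X a" "1 \<le> minus_pred Y b" using XY minus_pred_pos by auto
  have l: "minus_pred X a \<le> X" "minus_pred Y b \<le> Y" by (rule minus_pred_le)+
  have g: "X - a \<le> minus_pred X a" "Y - b \<le> minus_pred Y b" by (rule minus_pred_ge)+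
  from P have "site_pt x y X Y \<or> site_pt x y Y X" unfolding site_pts_def by auto
  then show ?thesis
  proof
    assume pp: "site_pt x y X Y"
    then have "in_box (K + 2) x y (minus_pred X a) (minus_pred Y b)"
      using l g a b unfolding site_pt_def in_box_def by auto
    then show ?thesis using in_box_cases[OF x c y m] by blast
  next
    assume pp: "site_pt x y Y X"
    then have "in_box (K + 2) x y (minus_pred Y b) (minus_pred X a)"
      using l g a b unfolding site_pt_def in_box_def by auto
    then show ?thesis using in_box_cases[OF x c y m(2) m(1)] site_pts_swap in_nb_window_swap by blast
  qed
qed

fun hyp_names :: "'a hyp \<Rightarrow> nat set" where
  "hyp_names (HRel S a b) = {S}"
| "hyp_names (HRelRev S b a) = {S}"
| "hyp_names _ = {}"

fun concl_names :: "concl \<Rightarrow> nat set" where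
  "concl_names (CRel R) = {R}"
| "concl_names CBot = {}"

definition rel_names :: "'a horn_formula \<Rightarrow> nat set" where
  "rel_names F = (\<Union>C\<in>set F. (\<Union>h\<in>set (fst C). hyp_names h) \<union> concl_names (snd C))"

definition max_offset :: "'a horn_formula \<Rightarrow> nat" where
  "max_offset F = Max ({0} \<union> (\<Union>C\<in>set F. \<Union>h\<in>set (fst C). hyp_offsets h))"

lemma finite_hyp_offsets: "finite (hyp_offsets h)"
  by (cases h) auto

lemma hyp_offsets_le: "C \<in> set F \<Longrightarrow> h \<in> set (fst C) \<Longrightarrow> a \<in> hyp_offsets h \<Longrightarrow> a \<le> max_offset F"
  unfolding max_offset_def by (rule Max_ge) (auto simp: finite_hyp_offsets)

lemma finite_rel_names: "finite (rel_names F)"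
proof -
  have "\<And>h. finite (hyp_names h)" by (case_tac h) auto
  moreover have "\<And>c. finite (concl_names c)" by (case_tac c) auto
  ultimately show ?thesis unfolding rel_names_def by auto
qed

fun name_ok :: "nat set \<Rightarrow> fact \<Rightarrow> bool" where
  "name_ok RN (Atom S p q) = (S \<in> RN)"
| "name_ok RN (Bot p q) = True"

lemma name_ok_hyp_fact:
  "C \<in> set F \<Longrightarrow> h \<in> set (fst C) \<Longrightarrow> hyp_fact v X Y h = Some g \<Longrightarrow> name_ok (rel_names F) (snd g)"
  unfolding rel_names_def by (cases h) force+

lemma fact_pt_hyp_fact:
  assumes "hyp_fact v X Y h = Some g"
  shows "\<exists>a b. a \<in> hyp_offsets h \<and> b \<in> hyp_offsets h \<and>
    (fact_pt (snd g) = (minus_pred X a, minus_pred Y b) \<or> fact_pt (snd g) = (minus_pred Y b, minus_pred X a))"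
proof (cases h)
  case (HRel S a b)
  then show ?thesis using assms by (intro exI[of _ a] exI[of _ b]) auto
next
  case (HRelRev S b a)
  then show ?thesis using assms by (intro exI[of _ a] exI[of _ b]) auto
qed (use assms in auto)

definition window_facts :: "nat set \<Rightarrow> nat \<Rightarrow> nat \<Rightarrow> nat \<Rightarrow> vfact set" where
  "window_facts RN D x0 y0 =
     {g. pos_fact g \<and> in_window D x0 y0 (fst (fact_pt (snd g))) (snd (fact_pt (snd g))) \<and> name_ok RN (snd g)}"

definition nb_facts :: "nat set \<Rightarrow> nat \<Rightarrow> nat \<Rightarrow> nat \<Rightarrow> nat \<Rightarrow> vfact set" where
  "nb_facts RN D c x y = (if c = 1 then {} else window_facts RN D x (y - 2)) \<union>
     window_facts RN D (x - 1) (y - 1) \<union> window_facts RN D (x - 2) y"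

lemma hyp_fact_local:
  assumes x: "1 \<le> x" and c: "1 \<le> c" and y: "y = x + 2 * c - 2"
    and C: "C \<in> set F" and h: "h \<in> set (fst C)" and P: "(X, Y) \<in> site_pts x y"
    and g: "hyp_fact v X Y h = Some g"
  shows "g \<in> facts_at (site_pts x y) \<union> nb_facts (rel_names F) (max_offset F + 2) c x y"
proof -
  let ?K = "max_offset F"
  obtain a b where ab: "a \<in> hyp_offsets h" "b \<in> hyp_offsets h"
    and pt: "fact_pt (snd g) = (minus_pred X a, minus_pred Y b) \<or> fact_pt (snd g) = (minus_pred Y b, minus_pred X a)"
    using fact_pt_hyp_fact[OF g] by blast
  have ak: "a \<le> ?K" "b \<le> ?K" using hyp_offsets_le[OF C h] ab by auto
  have XY: "1 \<le> X" "1 \<le> Y" using P unfolding site_pts_def by auto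
  have L: "(minus_pred X a, minus_pred Y b) \<in> site_pts x y \<or> in_nb_window (?K + 2) c x y (minus_pred X a) (minus_pred Y b)"
    using minus_pred_site_pts[OF x c y P ak] .
  have L2: "fact_pt (snd g) \<in> site_pts x y \<or> in_nb_window (?K + 2) c x y (fst (fact_pt (snd g))) (snd (fact_pt (snd g)))"
    using L pt site_pts_swap in_nb_window_swap by auto
  have pos: "pos_fact g" using pt XY minus_pred_pos unfolding pos_fact_def by auto
  have ok: "name_ok (rel_names F) (snd g)" using name_ok_hyp_fact[OF C h g] .
  from L2 show ?thesis
  proof
    assume "fact_pt (snd g) \<in> site_pts x y" then show ?thesis unfolding facts_at_def by blast
  next
    assume "in_nb_window (?K + 2) c x y (fst (fact_pt (snd g))) (snd (fact_pt (snd g)))"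
    then show ?thesis using pos ok unfolding in_nb_window_def nb_facts_def window_facts_def by auto
  qed
qed

lemma window_facts_cover:
  assumes x: "1 \<le> x" and c: "1 \<le> c" and y: "y = x + 2 * c - 2"
    and g: "g \<in> window_facts RN (K + 2) x y"
  shows "g \<in> facts_at (site_pts x y) \<union> nb_facts RN (K + 2) c x y"
proof -
  obtain p q where pq: "fact_pt (snd g) = (p, q)" by (cases "fact_pt (snd g)")
  have pos: "1 \<le> p" "1 \<le> q" using g pq unfolding window_facts_def pos_fact_def by auto
  have w: "in_box (K + 2) x y p q \<or> in_box (K + 2) x y q p" using g pq unfolding window_facts_def in_window_def by auto
  have "(p, q) \<in> site_pts x y \<or> in_nb_window (K + 2) c x y p q"
    using w in_box_cases[OF x c y pos] in_box_cases[OF x c y pos(2) pos(1)] site_pts_swap in_nb_window_swap by blast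
  then show ?thesis
  proof
    assume "(p, q) \<in> site_pts x y" then show ?thesis using pq unfolding facts_at_def by auto
  next
    assume "in_nb_window (K + 2) c x y p q"
    then show ?thesis using g pq unfolding in_nb_window_def nb_facts_def window_facts_def by auto
  qed
qed

section \<open>Squeezing coordinates\<close>

text \<open>All points relevant at a site (x, y) lie in two lanes, one just below x and one just below
  y + 1 = x + 2 c - 1.  \<open>squeeze\<close> translates the first lane by \<open>shift_x\<close> and the second by
  \<open>shift_y\<close>, so that x and y land on the bounded values \<open>squeezed_x\<close> and \<open>squeezed_y\<close>.  Since
  the bound \<open>cap K\<close> = 4 K + 12 exceeds the widths of the lanes, squeezing preserves the order
  of the points, predecessors up to K, and position 1, hence the truth of every hypothesis.\<close>

definition cap :: "nat \<Rightarrow> nat" where "cap K = 4 * K + 12"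

definition shift_x :: "nat \<Rightarrow> nat \<Rightarrow> nat" where "shift_x K x = x - min x (cap K)"

definition shift_y :: "nat \<Rightarrow> nat \<Rightarrow> nat \<Rightarrow> nat" where
  "shift_y K x c = (x + 2 * c - 2) - (min x (cap K) + 2 * min c (cap K) - 2)"

definition squeeze :: "nat \<Rightarrow> nat \<Rightarrow> nat \<Rightarrow> nat \<Rightarrow> nat" where
  "squeeze K x c k = (if k \<le> x + 1 then k - shift_x K x else k - shift_y K x c)"

definition squeeze_dom :: "nat \<Rightarrow> nat \<Rightarrow> nat \<Rightarrow> nat set" where
  "squeeze_dom K x c = {k. 1 \<le> k \<and> ((x \<le> k + (K + 4) \<and> k \<le> x) \<or> (x + 2 * c \<le> k + (K + 6) \<and> k + 1 \<le> x + 2 * c))}"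

lemma shift_x_small: "x \<le> cap K \<Longrightarrow> shift_x K x = 0"
  unfolding shift_x_def by simp

lemma shift_x_big: "x \<ge> cap K \<Longrightarrow> shift_x K x + cap K = x"
  unfolding shift_x_def by simp

lemma shift_y_small: "1 \<le> c \<Longrightarrow> c \<le> cap K \<Longrightarrow> shift_y K x c = shift_x K x"
  unfolding shift_y_def shift_x_def by (simp add: min_def)

lemma shift_y_big: "1 \<le> c \<Longrightarrow> c \<ge> cap K \<Longrightarrow> shift_y K x c + 2 * cap K = shift_x K x + 2 * c"
  unfolding shift_y_def shift_x_def cap_def by (cases "x \<le> 4 * K + 12") (simp_all add: min_def)

lemma cap_ge: "cap K \<ge> 4 * K + 12"
  unfolding cap_def by simp

lemma squeeze_low: "k \<le> x + 1 \<Longrightarrow> squeeze K x c k = k - shift_x K x"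
  unfolding squeeze_def by simp

lemma squeeze_high: "\<not> k \<le> x + 1 \<Longrightarrow> squeeze K x c k = k - shift_y K x c"
  unfolding squeeze_def by simp

lemma squeeze_dom_cases:
  assumes "1 \<le> c" "k \<in> squeeze_dom K x c"
  shows "(1 \<le> k \<and> k \<le> x \<and> x \<le> k + (K + 4)) \<or>
         (1 \<le> k \<and> x + 2 * c \<le> k + (K + 6) \<and> k + 1 \<le> x + 2 * c)"
  using assms unfolding squeeze_dom_def by auto

lemma squeeze_lanes:
  assumes x: "1 \<le> x" and c: "1 \<le> c" and k: "k \<in> squeeze_dom K x c"
  shows "(k \<le> x \<and> x \<le> k + (K + 4) \<and> squeeze K x c k + shift_x K x = k) \<or>
         (x + 2 * c \<le> k + (K + 6) \<and> k + 1 \<le> x + 2 * c \<and> squeeze K x c k + shift_y K x c = k \<and>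
           (c \<le> cap K \<or> x + 1 < k))"
proof -
  have B: "cap K \<ge> 4 * K + 12" by (rule cap_ge)
  have sxle: "shift_x K x \<le> x" unfolding shift_x_def by simp
  have sxb: "x \<le> cap K \<Longrightarrow> shift_x K x = 0" by (rule shift_x_small)
  have sxb2: "x \<ge> cap K \<Longrightarrow> shift_x K x + cap K = x" by (rule shift_x_big)
  from squeeze_dom_cases[OF c k] show ?thesis
  proof
    assume a: "1 \<le> k \<and> k \<le> x \<and> x \<le> k + (K + 4)"
    then have "squeeze K x c k = k - shift_x K x" by (simp add: squeeze_low)
    moreover have "shift_x K x \<le> k" using a sxb sxb2 B by (cases "x \<le> cap K") auto
    ultimately show ?thesis using a by simp
  next
    assume a: "1 \<le> k \<and> x + 2 * c \<le> k + (K + 6) \<and> k + 1 \<le> x + 2 * c"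
    show ?thesis
    proof (cases "c \<le> cap K")
      case True
      then have shift_y: "shift_y K x c = shift_x K x" using shift_y_small c by blast
      have "shift_x K x \<le> k" using a sxb sxb2 B c by (cases "x \<le> cap K") auto
      then have "squeeze K x c k + shift_y K x c = k" using shift_y by (cases "k \<le> x + 1") (auto simp: squeeze_low squeeze_high)
      then show ?thesis using a True by simp
    next
      case False
      then have shift_y: "shift_y K x c + 2 * cap K = shift_x K x + 2 * c" using shift_y_big c by simp
      have xk: "x + 1 < k" using a False B by linarith
      have "shift_y K x c \<le> k" using a shift_y sxle B False by linarith
      then have "squeeze K x c k + shift_y K x c = k" using xk by (simp add: squeeze_high)
      then show ?thesis using a xk by simp
    qed
  qed
qed

lemma squeeze_mono:
  assumes x: "1 \<le> x" and c: "1 \<le> c" and p: "p \<in> squeeze_dom K x c" and q: "q \<in> squeeze_dom K x c"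
  shows "(p \<le> q) = (squeeze K x c p \<le> squeeze K x c q)"
proof (cases "c \<le> cap K")
  case True
  then have shift_y: "shift_y K x c = shift_x K x" using shift_y_small c by blast
  have "squeeze K x c p + shift_x K x = p" using squeeze_lanes[OF x c p] shift_y by auto
  moreover have "squeeze K x c q + shift_x K x = q" using squeeze_lanes[OF x c q] shift_y by auto
  ultimately show ?thesis by linarith
next
  case False
  then have shift_y: "shift_y K x c + 2 * cap K = shift_x K x + 2 * c" using shift_y_big c by simp
  have B: "cap K \<ge> 4 * K + 12" by (rule cap_ge)
  from squeeze_lanes[OF x c p] show ?thesis
  proof (elim disjE)
    assume p1: "(p \<le> x) \<and> (x \<le> p + (K + 4)) \<and> (squeeze K x c p + shift_x K x = p)"
    from squeeze_lanes[OF x c q] show ?thesis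
    proof (elim disjE)
      assume "(q \<le> x) \<and> (x \<le> q + (K + 4)) \<and> (squeeze K x c q + shift_x K x = q)"
      then show ?thesis using p1 by linarith
    next
      assume "(x + 2 * c \<le> q + (K + 6)) \<and> (q + 1 \<le> x + 2 * c) \<and> (squeeze K x c q + shift_y K x c = q) \<and> (c \<le> cap K \<or> x + 1 < q)"
      then show ?thesis using p1 shift_y B False by linarith
    qed
  next
    assume p1: "(x + 2 * c \<le> p + (K + 6)) \<and> (p + 1 \<le> x + 2 * c) \<and> (squeeze K x c p + shift_y K x c = p) \<and> (c \<le> cap K \<or> x + 1 < p)"
    from squeeze_lanes[OF x c q] show ?thesis
    proof (elim disjE)
      assume "(q \<le> x) \<and> (x \<le> q + (K + 4)) \<and> (squeeze K x c q + shift_x K x = q)"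
      then show ?thesis using p1 shift_y B False by linarith
    next
      assume "(x + 2 * c \<le> q + (K + 6)) \<and> (q + 1 \<le> x + 2 * c) \<and> (squeeze K x c q + shift_y K x c = q) \<and> (c \<le> cap K \<or> x + 1 < q)"
      then show ?thesis using p1 by linarith
    qed
  qed
qed

lemma squeeze_eq_iff:
  assumes x: "1 \<le> x" and c: "1 \<le> c" and p: "p \<in> squeeze_dom K x c" and q: "q \<in> squeeze_dom K x c"
  shows "(p = q) = (squeeze K x c p = squeeze K x c q)"
  using squeeze_mono[OF x c p q] squeeze_mono[OF x c q p] by auto

lemma squeeze_pos:
  assumes x: "1 \<le> x" and c: "1 \<le> c" and p: "p \<in> squeeze_dom K x c"
  shows "1 \<le> squeeze K x c p"
proof -
  have B: "cap K \<ge> 4 * K + 12" by (rule cap_ge)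
  from squeeze_lanes[OF x c p] show ?thesis
  proof (elim disjE)
    assume p1: "(p \<le> x) \<and> (x \<le> p + (K + 4)) \<and> (squeeze K x c p + shift_x K x = p)"
    show ?thesis
    proof (cases "x \<le> cap K")
      case True then show ?thesis using p1 shift_x_small[OF True] p unfolding squeeze_dom_def by simp
    next
      case False then show ?thesis using p1 shift_x_big[of K x] B by linarith
    qed
  next
    assume p1: "(x + 2 * c \<le> p + (K + 6)) \<and> (p + 1 \<le> x + 2 * c) \<and> (squeeze K x c p + shift_y K x c = p) \<and> (c \<le> cap K \<or> x + 1 < p)"
    show ?thesis
    proof (cases "c \<le> cap K")
      case True
      then have shift_y: "shift_y K x c = shift_x K x" using shift_y_small c by blast
      show ?thesis
      proof (cases "x \<le> cap K")
        case True then show ?thesis using p1 shift_y shift_x_small[OF True] p unfolding squeeze_dom_def by simp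
      next
        case False then show ?thesis using p1 shift_y shift_x_big[of K x] B c by linarith
      qed
    next
      case False
      then have shift_y: "shift_y K x c + 2 * cap K = shift_x K x + 2 * c" using shift_y_big c by simp
      have "shift_x K x \<le> x" unfolding shift_x_def by simp
      then show ?thesis using p1 shift_y B False by linarith
    qed
  qed
qed

lemma inj_on_squeeze: "1 \<le> x \<Longrightarrow> 1 \<le> c \<Longrightarrow> inj_on (squeeze K x c) (squeeze_dom K x c)"
  unfolding inj_on_def using squeeze_eq_iff by blast

definition squeezed_x :: "nat \<Rightarrow> nat \<Rightarrow> nat" where "squeezed_x K x = min x (cap K)"

definition squeezed_y :: "nat \<Rightarrow> nat \<Rightarrow> nat \<Rightarrow> nat" where "squeezed_y K x c = min x (cap K) + 2 * min c (cap K) - 2"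

lemma squeeze_lane_x:
  assumes x: "1 \<le> x" and c: "1 \<le> c"
  shows "((\<forall>k. k \<le> x + 1 \<longrightarrow> squeeze K x c k = k) \<and> squeezed_x K x = x) \<or>
         ((\<forall>k. x \<le> k + (K + 4) \<and> k \<le> x + 1 \<longrightarrow> squeeze K x c k + shift_x K x = k \<and> K + 2 \<le> squeeze K x c k)
           \<and> squeezed_x K x + shift_x K x = x \<and> K + 6 \<le> squeezed_x K x)"
proof (cases "x \<le> cap K")
  case True
  then show ?thesis using shift_x_small[OF True] by (simp add: squeeze_low squeezed_x_def)
next
  case False
  have B: "cap K \<ge> 4 * K + 12" by (rule cap_ge)
  have shift_x: "shift_x K x + cap K = x" using shift_x_big[of K x] False by simp
  have "\<forall>k. x \<le> k + (K + 4) \<and> k \<le> x + 1 \<longrightarrow> squeeze K x c k + shift_x K x = k \<and> K + 2 \<le> squeeze K x c k"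
  proof (intro allI impI)
    fix k assume k: "x \<le> k + (K + 4) \<and> k \<le> x + 1"
    then have "squeeze K x c k = k - shift_x K x" by (simp add: squeeze_low)
    then show "squeeze K x c k + shift_x K x = k \<and> K + 2 \<le> squeeze K x c k" using k shift_x B by linarith
  qed
  moreover have "squeezed_x K x + shift_x K x = x" "K + 6 \<le> squeezed_x K x" using shift_x False B unfolding squeezed_x_def by auto
  ultimately show ?thesis by blast
qed

lemma squeezed_y_shift_y: "1 \<le> c \<Longrightarrow> squeezed_y K x c + shift_y K x c = x + 2 * c - 2"
  unfolding squeezed_y_def shift_y_def cap_def by (cases "x \<le> 4 * K + 12"; cases "c \<le> 4 * K + 12") (simp_all add: min_def)

lemma squeeze_lane_y:
  assumes x: "1 \<le> x" and c: "1 \<le> c"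
  shows "((\<forall>k. squeeze K x c k = k) \<and> squeezed_y K x c = x + 2 * c - 2) \<or>
         (\<exists>s. (\<forall>k. x + 2 * c \<le> k + (K + 6) \<and> k \<le> x + 2 * c - 1 \<longrightarrow> squeeze K x c k + s = k \<and> K + 2 \<le> squeeze K x c k)
           \<and> squeezed_y K x c + s = x + 2 * c - 2 \<and> K + 6 \<le> squeezed_y K x c)"
proof -
  have B: "cap K \<ge> 4 * K + 12" by (rule cap_ge)
  have ys: "squeezed_y K x c + shift_y K x c = x + 2 * c - 2" using squeezed_y_shift_y[OF c] .
  show ?thesis
  proof (cases "c \<le> cap K")
    case True
    then have shift_y: "shift_y K x c = shift_x K x" using shift_y_small c by blast
    show ?thesis
    proof (cases "x \<le> cap K")
      case True
      then have "shift_x K x = 0" by (rule shift_x_small)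
      then have "\<forall>k. squeeze K x c k = k" using shift_y unfolding squeeze_def by simp
      moreover have "squeezed_y K x c = x + 2 * c - 2" using ys shift_y \<open>shift_x K x = 0\<close> by simp
      ultimately show ?thesis by blast
    next
      case False
      have shift_x: "shift_x K x + cap K = x" using shift_x_big[of K x] False by simp
      have "\<forall>k. x + 2 * c \<le> k + (K + 6) \<and> k \<le> x + 2 * c - 1 \<longrightarrow> squeeze K x c k + shift_x K x = k \<and> K + 2 \<le> squeeze K x c k"
      proof (intro allI impI)
        fix k assume k: "x + 2 * c \<le> k + (K + 6) \<and> k \<le> x + 2 * c - 1"
        have "squeeze K x c k = k - shift_x K x" using shift_y unfolding squeeze_def by simp
        then show "squeeze K x c k + shift_x K x = k \<and> K + 2 \<le> squeeze K x c k" using k shift_x B c by linarith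
      qed
      moreover have "squeezed_y K x c + shift_x K x = x + 2 * c - 2" "K + 6 \<le> squeezed_y K x c" using ys shift_y shift_x B c by linarith+
      ultimately show ?thesis by blast
    qed
  next
    case False
    then have shift_y: "shift_y K x c + 2 * cap K = shift_x K x + 2 * c" using shift_y_big c by simp
    have sxl: "shift_x K x \<le> x" unfolding shift_x_def by simp
    have "\<forall>k. x + 2 * c \<le> k + (K + 6) \<and> k \<le> x + 2 * c - 1 \<longrightarrow> squeeze K x c k + shift_y K x c = k \<and> K + 2 \<le> squeeze K x c k"
    proof (intro allI impI)
      fix k assume k: "x + 2 * c \<le> k + (K + 6) \<and> k \<le> x + 2 * c - 1"
      have "\<not> k \<le> x + 1" using k False B by linarith
      then have "squeeze K x c k = k - shift_y K x c" by (simp add: squeeze_high)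
      then show "squeeze K x c k + shift_y K x c = k \<and> K + 2 \<le> squeeze K x c k" using k shift_y sxl B False by linarith
    qed
    moreover have "K + 6 \<le> squeezed_y K x c" using ys shift_y sxl B False by linarith
    ultimately show ?thesis using ys by blast
  qed
qed

lemma squeeze_minus_pred_x_lane:
  assumes x: "1 \<le> x" and c: "1 \<le> c" and u: "1 \<le> u" "u \<le> x" "x \<le> u + 1" and a: "a \<le> K"
  shows "u \<in> squeeze_dom K x c \<and> minus_pred u a \<in> squeeze_dom K x c \<and>
         squeeze K x c (minus_pred u a) = minus_pred (squeeze K x c u) a \<and>
         (minus_pred u a = 1) = (minus_pred (squeeze K x c u) a = 1)"
proof -
  have m: "1 \<le> minus_pred u a" "minus_pred u a \<le> u" "u - a \<le> minus_pred u a"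
    using minus_pred_pos[OF u(1)] minus_pred_le minus_pred_ge by auto
  have D: "u \<in> squeeze_dom K x c" "minus_pred u a \<in> squeeze_dom K x c" using u m a unfolding squeeze_dom_def by auto
  from squeeze_lane_x[OF x c, of K] have "squeeze K x c (minus_pred u a) = minus_pred (squeeze K x c u) a \<and>
         (minus_pred u a = 1) = (minus_pred (squeeze K x c u) a = 1)"
  proof
    assume "(\<forall>k. k \<le> x + 1 \<longrightarrow> squeeze K x c k = k) \<and> squeezed_x K x = x"
    then show ?thesis using minus_pred_id_below[of "x + 1" "squeeze K x c" u a] u by auto
  next
    assume h: "(\<forall>k. x \<le> k + (K + 4) \<and> k \<le> x + 1 \<longrightarrow> squeeze K x c k + shift_x K x = k \<and> K + 2 \<le> squeeze K x c k)
           \<and> squeezed_x K x + shift_x K x = x \<and> K + 6 \<le> squeezed_x K x"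
    have "x \<le> (u - a) + (K + 4) \<and> u - a \<le> x + 1" "x \<le> u + (K + 4) \<and> u \<le> x + 1"
      using h u a by auto
    then show ?thesis using minus_pred_translate[of "\<lambda>k. x \<le> k + (K + 4) \<and> k \<le> x + 1" "squeeze K x c" "shift_x K x" K u a] h a
      by blast
  qed
  then show ?thesis using D by blast
qed

lemma squeeze_minus_pred_y_lane:
  assumes x: "1 \<le> x" and c: "1 \<le> c" and u: "x + 2 * c \<le> u + 2" "u + 1 \<le> x + 2 * c" and a: "a \<le> K"
  shows "u \<in> squeeze_dom K x c \<and> minus_pred u a \<in> squeeze_dom K x c \<and>
         squeeze K x c (minus_pred u a) = minus_pred (squeeze K x c u) a \<and>
         (minus_pred u a = 1) = (minus_pred (squeeze K x c u) a = 1)"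
proof -
  have u1: "1 \<le> u" using u x c by linarith
  have m: "1 \<le> minus_pred u a" "minus_pred u a \<le> u" "u - a \<le> minus_pred u a"
    using minus_pred_pos[OF u1] minus_pred_le minus_pred_ge by auto
  have D: "u \<in> squeeze_dom K x c" "minus_pred u a \<in> squeeze_dom K x c" using u u1 m a unfolding squeeze_dom_def by auto
  from squeeze_lane_y[OF x c, of K] have "squeeze K x c (minus_pred u a) = minus_pred (squeeze K x c u) a \<and>
         (minus_pred u a = 1) = (minus_pred (squeeze K x c u) a = 1)"
  proof
    assume "(\<forall>k. squeeze K x c k = k) \<and> squeezed_y K x c = x + 2 * c - 2"
    then show ?thesis by simp
  next
    assume "\<exists>s. (\<forall>k. x + 2 * c \<le> k + (K + 6) \<and> k \<le> x + 2 * c - 1 \<longrightarrow> squeeze K x c k + s = k \<and> K + 2 \<le> squeeze K x c k)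
           \<and> squeezed_y K x c + s = x + 2 * c - 2 \<and> K + 6 \<le> squeezed_y K x c"
    then obtain s where h: "\<forall>k. x + 2 * c \<le> k + (K + 6) \<and> k \<le> x + 2 * c - 1 \<longrightarrow> squeeze K x c k + s = k \<and> K + 2 \<le> squeeze K x c k"
      "squeezed_y K x c + s = x + 2 * c - 2" "K + 6 \<le> squeezed_y K x c" by blast
    have "x + 2 * c \<le> (u - a) + (K + 6) \<and> u - a \<le> x + 2 * c - 1" "x + 2 * c \<le> u + (K + 6) \<and> u \<le> x + 2 * c - 1"
      using h u a by auto
    then show ?thesis using minus_pred_translate[of "\<lambda>k. x + 2 * c \<le> k + (K + 6) \<and> k \<le> x + 2 * c - 1" "squeeze K x c" s K u a] h a
      by blast
  qed
  then show ?thesis using D by blast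
qed

lemma squeeze_x_offset:
  assumes x: "1 \<le> x" and c: "1 \<le> c" and d: "d \<le> K + 4"
  shows "squeeze K x c (x - d) = squeezed_x K x - d \<and> (1 \<le> x - d) = (1 \<le> squeezed_x K x - d)"
  using squeeze_lane_x[OF x c, of K]
proof
  assume "(\<forall>k. k \<le> x + 1 \<longrightarrow> squeeze K x c k = k) \<and> squeezed_x K x = x"
  then show ?thesis by simp
next
  assume h: "(\<forall>k. x \<le> k + (K + 4) \<and> k \<le> x + 1 \<longrightarrow> squeeze K x c k + shift_x K x = k \<and> K + 2 \<le> squeeze K x c k)
           \<and> squeezed_x K x + shift_x K x = x \<and> K + 6 \<le> squeezed_x K x"
  moreover have "x \<le> (x - d) + (K + 4) \<and> x - d \<le> x + 1" using d by auto
  ultimately have "squeeze K x c (x - d) + shift_x K x = x - d" by blast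
  then show ?thesis using h d by auto
qed

lemma squeeze_y_offset:
  assumes x: "1 \<le> x" and c: "1 \<le> c" and d: "d \<le> K + 4"
  shows "squeeze K x c (x + 2 * c - 1 - d) = squeezed_y K x c + 1 - d \<and> (1 \<le> x + 2 * c - 1 - d) = (1 \<le> squeezed_y K x c + 1 - d)"
  using squeeze_lane_y[OF x c, of K]
proof
  assume "(\<forall>k. squeeze K x c k = k) \<and> squeezed_y K x c = x + 2 * c - 2"
  then show ?thesis using x c by simp
next
  assume "\<exists>s. (\<forall>k. x + 2 * c \<le> k + (K + 6) \<and> k \<le> x + 2 * c - 1 \<longrightarrow> squeeze K x c k + s = k \<and> K + 2 \<le> squeeze K x c k)
           \<and> squeezed_y K x c + s = x + 2 * c - 2 \<and> K + 6 \<le> squeezed_y K x c"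
  then obtain s where h: "\<forall>k. x + 2 * c \<le> k + (K + 6) \<and> k \<le> x + 2 * c - 1 \<longrightarrow> squeeze K x c k + s = k \<and> K + 2 \<le> squeeze K x c k"
      "squeezed_y K x c + s = x + 2 * c - 2" "K + 6 \<le> squeezed_y K x c" by blast
  moreover have "x + 2 * c \<le> (x + 2 * c - 1 - d) + (K + 6) \<and> x + 2 * c - 1 - d \<le> x + 2 * c - 1" using d h by auto
  ultimately have "squeeze K x c (x + 2 * c - 1 - d) + s = x + 2 * c - 1 - d" by blast
  then show ?thesis using h d by auto
qed

definition squeeze_ok :: "nat \<Rightarrow> nat \<Rightarrow> nat \<Rightarrow> nat \<Rightarrow> bool" where
  "squeeze_ok K x c u \<longleftrightarrow> u \<in> squeeze_dom K x c \<and> (\<forall>a \<le> K. minus_pred u a \<in> squeeze_dom K x c \<and>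
         squeeze K x c (minus_pred u a) = minus_pred (squeeze K x c u) a \<and>
         (minus_pred u a = 1) = (minus_pred (squeeze K x c u) a = 1))"

lemma site_pts_squeeze_ok:
  assumes x: "1 \<le> x" and c: "1 \<le> c" and y: "y = x + 2 * c - 2" and P: "(X, Y) \<in> site_pts x y"
  shows "squeeze_ok K x c X \<and> squeeze_ok K x c Y"
proof -
  have ok: "squeeze_ok K x c u" if "1 \<le> u" "u = x \<or> u = x - 1 \<or> u = y \<or> u = y + 1" for u
  proof -
    from that consider "1 \<le> u" "u \<le> x" "x \<le> u + 1" | "x + 2 * c \<le> u + 2" "u + 1 \<le> x + 2 * c"
      using y x c by linarith
    then show ?thesis
    proof cases
      case 1 then show ?thesis using squeeze_minus_pred_x_lane[OF x c 1] unfolding squeeze_ok_def by blast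
    next
      case 2 then show ?thesis using squeeze_minus_pred_y_lane[OF x c 2] unfolding squeeze_ok_def by blast
    qed
  qed
  from P show ?thesis unfolding site_pts_def site_pt_def using ok by auto
qed

lemma site_pts_diag:
  assumes x: "1 \<le> x" and c: "1 \<le> c" and y: "y = x + 2 * c - 2" and P: "(X, X) \<in> site_pts x y"
  shows "c = 1 \<and> X = x"
  using P x c y unfolding site_pts_def site_pt_def by auto

lemma hyp_holds_squeeze:
  assumes x: "1 \<le> x" and c: "1 \<le> c" and y: "y = x + 2 * c - 2" and P: "(X, Y) \<in> site_pts x y"
    and C: "C \<in> set F" and h: "h \<in> set (fst C)" and M: "M \<subseteq> facts_within (squeeze_dom (max_offset F) x c)"
    and LT: "c = 1 \<Longrightarrow> \<forall>a \<le> max_offset F. lt (minus_pred x a) = lt' (minus_pred (squeeze (max_offset F) x c x) a)"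
  shows "hyp_holds lt v X Y M h = hyp_holds lt' v (squeeze (max_offset F) x c X) (squeeze (max_offset F) x c Y) (map_fact (squeeze (max_offset F) x c) ` M) h"
proof -
  let ?K = "max_offset F"
  have co: "squeeze_ok ?K x c X" "squeeze_ok ?K x c Y" using site_pts_squeeze_ok[OF x c y P] by auto
  show ?thesis
  proof (rule hyp_holds_map[where D = "squeeze_dom ?K x c" and K = ?K])
    show "\<And>p q. p \<in> squeeze_dom ?K x c \<Longrightarrow> q \<in> squeeze_dom ?K x c \<Longrightarrow> (p \<le> q) = (squeeze ?K x c p \<le> squeeze ?K x c q)"
      using squeeze_mono[OF x c] by blast
    show "X \<in> squeeze_dom ?K x c" "Y \<in> squeeze_dom ?K x c" using co unfolding squeeze_ok_def by auto
    show "\<And>a. a \<le> ?K \<Longrightarrow> minus_pred X a \<in> squeeze_dom ?K x c \<and> minus_pred Y a \<in> squeeze_dom ?K x c"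
      using co unfolding squeeze_ok_def by auto
    show "\<And>a. a \<le> ?K \<Longrightarrow> squeeze ?K x c (minus_pred X a) = minus_pred (squeeze ?K x c X) a \<and>
        squeeze ?K x c (minus_pred Y a) = minus_pred (squeeze ?K x c Y) a"
      using co unfolding squeeze_ok_def by auto
    show "\<And>a. a \<le> ?K \<Longrightarrow> (minus_pred X a = 1) = (minus_pred (squeeze ?K x c X) a = 1) \<and>
        (minus_pred Y a = 1) = (minus_pred (squeeze ?K x c Y) a = 1)"
      using co unfolding squeeze_ok_def by auto
    show "\<And>a. X = Y \<Longrightarrow> a \<le> ?K \<Longrightarrow> lt (minus_pred X a) = lt' (minus_pred (squeeze ?K x c X) a)"
      using site_pts_diag[OF x c y] P LT by auto
    show "\<forall>a\<in>hyp_offsets h. a \<le> ?K" using hyp_offsets_le[OF C h] by blast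
    show "M \<subseteq> facts_within (squeeze_dom ?K x c)" by (rule M)
  qed
qed

lemma squeeze_site_coords:
  assumes x: "1 \<le> x" and c: "1 \<le> c" and y: "y = x + 2 * c - 2"
  shows "squeeze K x c x = squeezed_x K x" "squeeze K x c (x - 1) = squeezed_x K x - 1"
    "squeeze K x c y = squeezed_y K x c" "squeeze K x c (y + 1) = squeezed_y K x c + 1"
    "(1 \<le> x - 1) = (1 \<le> squeezed_x K x - 1)" "1 \<le> squeezed_x K x" "1 \<le> squeezed_y K x c"
proof -
  have yy: "y = x + 2 * c - 1 - 1" "y + 1 = x + 2 * c - 1 - 0" using y x c by auto
  show "squeeze K x c x = squeezed_x K x" "squeeze K x c (x - 1) = squeezed_x K x - 1"
    "(1 \<le> x - 1) = (1 \<le> squeezed_x K x - 1)" "1 \<le> squeezed_x K x"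
    using squeeze_x_offset[OF x c, of 0 K] squeeze_x_offset[OF x c, of 1 K] x by auto
  show "squeeze K x c y = squeezed_y K x c" "squeeze K x c (y + 1) = squeezed_y K x c + 1"
    using squeeze_y_offset[OF x c, of 1 K] squeeze_y_offset[OF x c, of 0 K] yy by simp_all
  have "1 \<le> x + 2 * c - 1 - 1" using x c by linarith
  then show "1 \<le> squeezed_y K x c" using squeeze_y_offset[OF x c, of 1 K] by auto
qed

lemma image_Collect_preserved: "(\<And>z. z \<in> S \<Longrightarrow> P (g z) = P z) \<Longrightarrow> g ` {z \<in> S. P z} = {z \<in> g ` S. P z}"
  by auto

lemma site_pts_squeeze:
  assumes x: "1 \<le> x" and c: "1 \<le> c" and y: "y = x + 2 * c - 2"
  shows "(\<lambda>(X, Y). (squeeze K x c X, squeeze K x c Y)) ` site_pts x y = site_pts (squeezed_x K x) (squeezed_y K x c)"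
proof -
  note e = squeeze_site_coords[OF x c y, of K]
  let ?g = "\<lambda>(X, Y). (squeeze K x c X, squeeze K x c Y)" and ?P = "\<lambda>z. 1 \<le> fst z \<and> 1 \<le> snd z"
  let ?S = "\<lambda>x y. {(x, y), (x, y + 1), (x - 1, y + 1), (y, x), (y + 1, x), (y + 1, x - 1)}"
  have pts: "site_pts x' y' = {z \<in> ?S x' y'. ?P z}" for x' y'
    by (auto simp: site_pts_def site_pt_def)
  have "?g ` {z \<in> ?S x y. ?P z} = {z \<in> ?g ` ?S x y. ?P z}"
    by (rule image_Collect_preserved) (use e x y c in auto)
  also have "?g ` ?S x y = ?S (squeezed_x K x) (squeezed_y K x c)" using e by simp
  finally show ?thesis unfolding pts .
qed

lemma facts_at_site_pts_within:
  assumes x: "1 \<le> x" and c: "1 \<le> c" and y: "y = x + 2 * c - 2"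
  shows "facts_at (site_pts x y) \<subseteq> facts_within (squeeze_dom K x c)"
proof
  fix g assume g: "g \<in> facts_at (site_pts x y)"
  obtain p q where pq: "fact_pt (snd g) = (p, q)" by (cases "fact_pt (snd g)")
  have "squeeze_ok K x c p \<and> squeeze_ok K x c q" using site_pts_squeeze_ok[OF x c y] g pq unfolding facts_at_def by auto
  then show "g \<in> facts_within (squeeze_dom K x c)" using pq unfolding facts_within_def squeeze_ok_def by auto
qed

lemma nb_facts_within:
  assumes x: "1 \<le> x" and c: "1 \<le> c" and y: "y = x + 2 * c - 2"
  shows "nb_facts RN (K + 2) c x y \<subseteq> facts_within (squeeze_dom K x c)"
proof
  fix g assume g: "g \<in> nb_facts RN (K + 2) c x y"
  obtain p q where pq: "fact_pt (snd g) = (p, q)" by (cases "fact_pt (snd g)")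
  have pos: "1 \<le> p" "1 \<le> q" using g pq unfolding nb_facts_def window_facts_def pos_fact_def by (auto split: if_splits)
  have lanes: "(p \<le> x \<and> x \<le> p + (K + 4) \<and> x + 2 * c \<le> q + (K + 6) \<and> q + 1 \<le> x + 2 * c) \<or>
               (q \<le> x \<and> x \<le> q + (K + 4) \<and> x + 2 * c \<le> p + (K + 6) \<and> p + 1 \<le> x + 2 * c)"
    using g pq pos x c y unfolding nb_facts_def window_facts_def in_window_def in_box_def by (auto split: if_splits)
  then show "g \<in> facts_within (squeeze_dom K x c)" using pq pos unfolding facts_within_def squeeze_dom_def by auto
qed

text \<open>A fact at (p, q) in the window of the site (x0, y0) is stored through the offsets
  d1 = x0 - p and d2 = y0 + 1 - q, with a flag telling whether it lies at (p, q) or at the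
  mirror image (q, p).  Together with the restriction to the predicate names of the formula,
  this makes the set of possible windows finite.\<close>

datatype rfact = RAtom nat bool nat nat | RBot bool nat nat

type_synonym rvfact = "view \<times> rfact"

definition rel_pt :: "nat \<Rightarrow> nat \<Rightarrow> bool \<Rightarrow> nat \<Rightarrow> nat \<Rightarrow> nat \<times> nat" where
  "rel_pt x0 y0 ob d1 d2 = (if ob then (x0 - d1, y0 + 1 - d2) else (y0 + 1 - d2, x0 - d1))"

fun abs_fact :: "nat \<Rightarrow> nat \<Rightarrow> rvfact \<Rightarrow> vfact" where
  "abs_fact x0 y0 (v, RAtom S ob d1 d2) = (v, Atom S (fst (rel_pt x0 y0 ob d1 d2)) (snd (rel_pt x0 y0 ob d1 d2)))"
| "abs_fact x0 y0 (v, RBot ob d1 d2) = (v, Bot (fst (rel_pt x0 y0 ob d1 d2)) (snd (rel_pt x0 y0 ob d1 d2)))"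

fun rel_offsets :: "rvfact \<Rightarrow> bool \<times> nat \<times> nat" where
  "rel_offsets (v, RAtom S ob d1 d2) = (ob, d1, d2)"
| "rel_offsets (v, RBot ob d1 d2) = (ob, d1, d2)"

fun rel_name :: "rvfact \<Rightarrow> nat option" where
  "rel_name (v, RAtom S ob d1 d2) = Some S"
| "rel_name (v, RBot ob d1 d2) = None"

definition rel_window :: "nat set \<Rightarrow> nat \<Rightarrow> rvfact set" where
  "rel_window RN D = {r. (case rel_name r of None \<Rightarrow> True | Some S \<Rightarrow> S \<in> RN) \<and>
      fst (snd (rel_offsets r)) \<le> D \<and> snd (snd (rel_offsets r)) \<le> D}"

lemma fact_pt_abs_fact: "fact_pt (snd (abs_fact x0 y0 r)) = (case rel_offsets r of (ob, d1, d2) \<Rightarrow> rel_pt x0 y0 ob d1 d2)"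
proof -
  obtain v h where r: "r = (v, h)" by (cases r)
  show ?thesis unfolding r by (cases h) auto
qed

lemma name_ok_abs_fact: "r \<in> rel_window RN D \<Longrightarrow> name_ok RN (snd (abs_fact x0 y0 r))"
proof -
  assume a: "r \<in> rel_window RN D"
  obtain v h where r: "r = (v, h)" by (cases r)
  show ?thesis using a unfolding r rel_window_def by (cases h) auto
qed

lemma abs_fact_in_window_facts:
  assumes r: "r \<in> rel_window RN D" and p: "pos_fact (abs_fact x0 y0 r)"
  shows "abs_fact x0 y0 r \<in> window_facts RN D x0 y0"
proof -
  obtain ob d1 d2 where ob: "rel_offsets r = (ob, d1, d2)" by (cases "rel_offsets r") auto
  have d: "d1 \<le> D" "d2 \<le> D" using r ob unfolding rel_window_def by auto
  have fact_pt: "fact_pt (snd (abs_fact x0 y0 r)) = rel_pt x0 y0 ob d1 d2" using fact_pt_abs_fact[of x0 y0 r] ob by simp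
  have pos: "1 \<le> fst (rel_pt x0 y0 ob d1 d2)" "1 \<le> snd (rel_pt x0 y0 ob d1 d2)" using p fact_pt unfolding pos_fact_def by auto
  have "in_window D x0 y0 (fst (rel_pt x0 y0 ob d1 d2)) (snd (rel_pt x0 y0 ob d1 d2))"
    using pos d unfolding in_window_def in_box_def rel_pt_def by (cases ob) auto
  then show ?thesis using p fact_pt name_ok_abs_fact[OF r] unfolding window_facts_def by simp
qed

lemma window_facts_abs_fact:
  assumes g: "g \<in> window_facts RN D x0 y0"
  shows "\<exists>r\<in>rel_window RN D. abs_fact x0 y0 r = g"
proof -
  obtain v h where gv: "g = (v, h)" by (cases g)
  obtain p q where pq: "fact_pt h = (p, q)" by (cases "fact_pt h")
  have pos: "1 \<le> p" "1 \<le> q" using g gv pq unfolding window_facts_def pos_fact_def by auto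
  have w: "in_window D x0 y0 p q" using g gv pq unfolding window_facts_def by auto
  have ok: "name_ok RN h" using g gv unfolding window_facts_def by auto
  obtain ob d1 d2 where od: "d1 \<le> D" "d2 \<le> D" "rel_pt x0 y0 ob d1 d2 = (p, q)"
  proof (cases "in_box D x0 y0 p q")
    case True
    then have "x0 - p \<le> D" "y0 + 1 - q \<le> D" "rel_pt x0 y0 True (x0 - p) (y0 + 1 - q) = (p, q)"
      unfolding in_box_def rel_pt_def by auto
    then show ?thesis using that by blast
  next
    case False
    then have "in_box D x0 y0 q p" using w unfolding in_window_def by auto
    then have "x0 - q \<le> D" "y0 + 1 - p \<le> D" "rel_pt x0 y0 False (x0 - q) (y0 + 1 - p) = (p, q)"
      unfolding in_box_def rel_pt_def by auto
    then show ?thesis using that by blast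
  qed
  show ?thesis
  proof (cases h)
    case (Atom S p' q')
    then have "(v, RAtom S ob d1 d2) \<in> rel_window RN D" "abs_fact x0 y0 (v, RAtom S ob d1 d2) = g"
      using od ok pq gv unfolding rel_window_def by auto
    then show ?thesis by blast
  next
    case (Bot p' q')
    then have "(v, RBot ob d1 d2) \<in> rel_window RN D" "abs_fact x0 y0 (v, RBot ob d1 d2) = g"
      using od ok pq gv unfolding rel_window_def by auto
    then show ?thesis by blast
  qed
qed

definition window_data :: "'a horn_formula \<Rightarrow> nat \<Rightarrow> (nat \<Rightarrow> 'a) \<Rightarrow> nat \<Rightarrow> nat \<Rightarrow> rvfact set" where
  "window_data F D lt x0 y0 = {r \<in> rel_window (rel_names F) D. abs_fact x0 y0 r \<in> least_model F lt}"

lemma abs_fact_window_data: "abs_fact x0 y0 ` window_data F D lt x0 y0 = least_model F lt \<inter> window_facts (rel_names F) D x0 y0"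
proof
  show "abs_fact x0 y0 ` window_data F D lt x0 y0 \<subseteq> least_model F lt \<inter> window_facts (rel_names F) D x0 y0"
    unfolding window_data_def using abs_fact_in_window_facts least_model_pos by blast
  show "least_model F lt \<inter> window_facts (rel_names F) D x0 y0 \<subseteq> abs_fact x0 y0 ` window_data F D lt x0 y0"
  proof
    fix g assume g: "g \<in> least_model F lt \<inter> window_facts (rel_names F) D x0 y0"
    then obtain r where "r \<in> rel_window (rel_names F) D" "abs_fact x0 y0 r = g" using window_facts_abs_fact by blast
    then show "g \<in> abs_fact x0 y0 ` window_data F D lt x0 y0" using g unfolding window_data_def by blast
  qed
qed

lemma window_data_subset: "window_data F D lt x y \<subseteq> rel_window (rel_names F) D"
  unfolding window_data_def by blast

lemma window_data_0: "window_data F D lt 0 b = {}"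
proof -
  have "\<not> abs_fact 0 b r \<in> least_model F lt" for r
  proof
    assume a: "abs_fact 0 b r \<in> least_model F lt"
    obtain v h where r: "r = (v, h)" by (cases r)
    have "pos_fact (abs_fact 0 b r)" using least_model_pos[OF a] .
    then show False unfolding r by (cases h) (auto simp: pos_fact_def rel_pt_def split: if_splits)
  qed
  then show ?thesis unfolding window_data_def by blast
qed

fun shift_down2 :: "rvfact \<Rightarrow> rvfact" where
  "shift_down2 (v, RAtom S ob d1 d2) = (v, RAtom S ob d1 (d2 + 2))"
| "shift_down2 (v, RBot ob d1 d2) = (v, RBot ob d1 (d2 + 2))"

fun shift_diag :: "rvfact \<Rightarrow> rvfact" where
  "shift_diag (v, RAtom S ob d1 d2) = (v, RAtom S ob (d1 + 1) (d2 + 1))"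
| "shift_diag (v, RBot ob d1 d2) = (v, RBot ob (d1 + 1) (d2 + 1))"

fun shift_left2 :: "rvfact \<Rightarrow> rvfact" where
  "shift_left2 (v, RAtom S ob d1 d2) = (v, RAtom S ob (d1 + 2) d2)"
| "shift_left2 (v, RBot ob d1 d2) = (v, RBot ob (d1 + 2) d2)"

lemma abs_fact_shift_down2: "2 \<le> y \<Longrightarrow> abs_fact x y (shift_down2 r) = abs_fact x (y - 2) r"
proof -
  assume y: "2 \<le> y"
  obtain v h where r: "r = (v, h)" by (cases r)
  show ?thesis unfolding r using y by (cases h) (auto simp: rel_pt_def)
qed

lemma abs_fact_shift_diag: "1 \<le> y \<Longrightarrow> abs_fact x y (shift_diag r) = abs_fact (x - 1) (y - 1) r"
proof -
  assume y: "1 \<le> y"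
  obtain v h where r: "r = (v, h)" by (cases r)
  show ?thesis unfolding r using y by (cases h) (auto simp: rel_pt_def)
qed

lemma abs_fact_shift_left2: "abs_fact x y (shift_left2 r) = abs_fact (x - 2) y r"
proof -
  obtain v h where r: "r = (v, h)" by (cases r)
  show ?thesis unfolding r by (cases h) (auto simp: rel_pt_def)
qed

lemma shift_rel_window:
  assumes "r \<in> rel_window RN (K + 2)"
  shows "shift_down2 r \<in> rel_window RN (K + 4)" "shift_diag r \<in> rel_window RN (K + 4)" "shift_left2 r \<in> rel_window RN (K + 4)"
proof -
  obtain v h where r: "r = (v, h)" by (cases r)
  show "shift_down2 r \<in> rel_window RN (K + 4)" "shift_diag r \<in> rel_window RN (K + 4)" "shift_left2 r \<in> rel_window RN (K + 4)"
    using assms unfolding r rel_window_def by (cases h; auto)+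
qed

lemma abs_fact_squeeze:
  assumes x: "1 \<le> x" and c: "1 \<le> c" and y: "y = x + 2 * c - 2"
    and r: "r \<in> rel_window RN (K + 4)"
  shows "pos_fact (abs_fact (squeezed_x K x) (squeezed_y K x c) r) = pos_fact (abs_fact x y r)"
    "pos_fact (abs_fact x y r) \<Longrightarrow> abs_fact (squeezed_x K x) (squeezed_y K x c) r = map_fact (squeeze K x c) (abs_fact x y r)"
proof -
  obtain v h where rv: "r = (v, h)" by (cases r)
  obtain ob d1 d2 where od: "rel_offsets r = (ob, d1, d2)" by (cases "rel_offsets r") auto
  have d: "d1 \<le> K + 4" "d2 \<le> K + 4" using r od unfolding rel_window_def by auto
  have y1: "y + 1 - d2 = x + 2 * c - 1 - d2" using y x c by auto
  have X: "squeeze K x c (x - d1) = squeezed_x K x - d1 \<and> (1 \<le> x - d1) = (1 \<le> squeezed_x K x - d1)" using squeeze_x_offset[OF x c d(1)] .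
  have Y: "squeeze K x c (y + 1 - d2) = squeezed_y K x c + 1 - d2 \<and> (1 \<le> y + 1 - d2) = (1 \<le> squeezed_y K x c + 1 - d2)"
    using squeeze_y_offset[OF x c d(2)] y1 by simp
  have pt1: "fact_pt (snd (abs_fact x y r)) = rel_pt x y ob d1 d2" using fact_pt_abs_fact[of x y r] od by simp
  have pt2: "fact_pt (snd (abs_fact (squeezed_x K x) (squeezed_y K x c) r)) = rel_pt (squeezed_x K x) (squeezed_y K x c) ob d1 d2"
    using fact_pt_abs_fact[of "squeezed_x K x" "squeezed_y K x c" r] od by simp
  show "pos_fact (abs_fact (squeezed_x K x) (squeezed_y K x c) r) = pos_fact (abs_fact x y r)"
    unfolding pos_fact_def pt1 pt2 using X Y by (cases ob) (auto simp: rel_pt_def)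
  show "pos_fact (abs_fact x y r) \<Longrightarrow> abs_fact (squeezed_x K x) (squeezed_y K x c) r = map_fact (squeeze K x c) (abs_fact x y r)"
    using X Y od unfolding rv by (cases h) (auto simp: rel_pt_def)
qed

definition inner_bot :: "'a horn_formula \<Rightarrow> (nat \<Rightarrow> 'a) \<Rightarrow> nat \<Rightarrow> nat \<Rightarrow> bool" where
  "inner_bot F lt x y = (\<exists>p q. p \<le> x \<and> q \<le> y \<and> ((Inner, Bot p q) \<in> least_model F lt \<or> (Inner, Bot q p) \<in> least_model F lt))"

definition last_bot :: "'a horn_formula \<Rightarrow> (nat \<Rightarrow> 'a) \<Rightarrow> nat \<Rightarrow> nat \<Rightarrow> bool" where
  "last_bot F lt x y = (\<exists>p. p \<le> x \<and> ((Last, Bot p y) \<in> least_model F lt \<or> (Last, Bot y p) \<in> least_model F lt))"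

lemma inner_bot_mono: "x' \<le> x \<Longrightarrow> y' \<le> y \<Longrightarrow> inner_bot F lt x' y' \<Longrightarrow> inner_bot F lt x y"
  unfolding inner_bot_def by (meson le_trans)

lemma inner_bot_rec:
  assumes x: "1 \<le> x" and c: "1 \<le> c" and y: "y = x + 2 * c - 2"
  shows "inner_bot F lt x y = ((c \<noteq> 1 \<and> inner_bot F lt x (y - 2)) \<or> inner_bot F lt (x - 1) (y - 1) \<or> inner_bot F lt (x - 2) y \<or>
     (Inner, Bot x (y - 1)) \<in> least_model F lt \<or> (Inner, Bot (y - 1) x) \<in> least_model F lt \<or>
     (Inner, Bot x y) \<in> least_model F lt \<or> (Inner, Bot y x) \<in> least_model F lt \<or>
     (Inner, Bot (x - 1) y) \<in> least_model F lt \<or> (Inner, Bot y (x - 1)) \<in> least_model F lt)" (is "?L = ?R")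
proof
  assume ?R
  moreover have "x - 1 \<le> x" "y - 1 \<le> y" "x - 2 \<le> x" "y - 2 \<le> y" by auto
  ultimately show ?L using inner_bot_mono[of _ x _ y F lt] unfolding inner_bot_def by blast
next
  assume ?L
  then obtain p q where pq: "p \<le> x" "q \<le> y" and B: "(Inner, Bot p q) \<in> least_model F lt \<or> (Inner, Bot q p) \<in> least_model F lt"
    unfolding inner_bot_def by blast
  consider "q + 2 \<le> y" | "q + 1 = y" | "q = y" using pq by linarith
  then show ?R
  proof cases
    case 1
    show ?thesis
    proof (cases "c = 1")
      case True
      then have "q \<le> x - 2" "p \<le> y" using 1 y pq by auto
      then have "inner_bot F lt (x - 2) y" using B unfolding inner_bot_def by blast
      then show ?thesis by blast
    next
      case False
      then have "inner_bot F lt x (y - 2)" using B 1 pq unfolding inner_bot_def by (intro exI[of _ p] exI[of _ q]) auto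
      then show ?thesis using False by blast
    qed
  next
    case 2
    show ?thesis
    proof (cases "p = x")
      case True then show ?thesis using B 2 by auto
    next
      case False
      then have "inner_bot F lt (x - 1) (y - 1)" using B 2 pq unfolding inner_bot_def by (intro exI[of _ p] exI[of _ q]) auto
      then show ?thesis by blast
    qed
  next
    case 3
    consider "p + 2 \<le> x" | "p + 1 = x" | "p = x" using pq by linarith
    then show ?thesis
    proof cases
      case 1
      then have "inner_bot F lt (x - 2) y" using B 3 pq unfolding inner_bot_def by (intro exI[of _ p] exI[of _ q]) auto
      then show ?thesis by blast
    next
      case 2 then have "p = x - 1" by simp
      then show ?thesis using B 3 by auto
    next
      case 3 then show ?thesis using B \<open>q = y\<close> by auto
    qed
  qed
qed

lemma last_bot_rec:
  assumes x: "1 \<le> x"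
  shows "last_bot F lt x y = (last_bot F lt (x - 2) y \<or>
     (Last, Bot (x - 1) y) \<in> least_model F lt \<or> (Last, Bot y (x - 1)) \<in> least_model F lt \<or>
     (Last, Bot x y) \<in> least_model F lt \<or> (Last, Bot y x) \<in> least_model F lt)" (is "?L = ?R")
proof
  assume r: ?R
  have "x - 1 \<le> x" "x - 2 \<le> x" by auto
  then show ?L using r unfolding last_bot_def by (meson le_trans order_refl)
next
  assume ?L
  then obtain p where p: "p \<le> x" and B: "(Last, Bot p y) \<in> least_model F lt \<or> (Last, Bot y p) \<in> least_model F lt"
    unfolding last_bot_def by blast
  consider "p + 2 \<le> x" | "p + 1 = x" | "p = x" using p by linarith
  then show ?R
  proof cases
    case 1 then have "last_bot F lt (x - 2) y" using B unfolding last_bot_def by (intro exI[of _ p]) auto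
    then show ?thesis by blast
  next
    case 2 then have "p = x - 1" by simp
    then show ?thesis using B by auto
  next
    case 3 then show ?thesis using B by auto
  qed
qed

lemma inner_bot_0: "\<not> inner_bot F lt 0 y"
  unfolding inner_bot_def using least_model_pos by (fastforce simp: pos_fact_def)

lemma last_bot_0: "\<not> last_bot F lt 0 y"
  unfolding last_bot_def using least_model_pos by (fastforce simp: pos_fact_def)

lemma inner_bot_iff:
  "inner_bot F lt (n - 1) (n - 1) \<longleftrightarrow> (\<exists>p q. 1 \<le> p \<and> p < n \<and> 1 \<le> q \<and> q < n \<and> (Inner, Bot p q) \<in> least_model F lt)"
  (is "_ \<longleftrightarrow> (\<exists>p q. ?bot p q)")
proof
  assume "inner_bot F lt (n - 1) (n - 1)"
  then obtain p q where pq: "p \<le> n - 1" "q \<le> n - 1"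
    and B: "(Inner, Bot p q) \<in> least_model F lt \<or> (Inner, Bot q p) \<in> least_model F lt"
    unfolding inner_bot_def by blast
  from B have "?bot p q \<or> ?bot q p"
  proof
    assume a: "(Inner, Bot p q) \<in> least_model F lt"
    then show ?thesis using least_model_pos[OF a] pq by (auto simp: pos_fact_def)
  next
    assume a: "(Inner, Bot q p) \<in> least_model F lt"
    then show ?thesis using least_model_pos[OF a] pq by (auto simp: pos_fact_def)
  qed
  then show "\<exists>p q. ?bot p q" by blast
next
  assume "\<exists>p q. ?bot p q"
  then obtain p q where "?bot p q" by blast
  then show "inner_bot F lt (n - 1) (n - 1)" unfolding inner_bot_def by (intro exI[of _ p] exI[of _ q]) auto
qed

lemma last_bot_iff:
  "last_bot F lt n n \<longleftrightarrow>
     (\<exists>p q. 1 \<le> p \<and> p \<le> n \<and> 1 \<le> q \<and> q \<le> n \<and> max p q = n \<and> (Last, Bot p q) \<in> least_model F lt)"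
  (is "_ \<longleftrightarrow> (\<exists>p q. ?bot p q)")
proof
  assume "last_bot F lt n n"
  then obtain p where p: "p \<le> n"
    and B: "(Last, Bot p n) \<in> least_model F lt \<or> (Last, Bot n p) \<in> least_model F lt"
    unfolding last_bot_def by blast
  from B have "?bot p n \<or> ?bot n p"
  proof
    assume a: "(Last, Bot p n) \<in> least_model F lt"
    then show ?thesis using least_model_pos[OF a] p by (auto simp: pos_fact_def)
  next
    assume a: "(Last, Bot n p) \<in> least_model F lt"
    then show ?thesis using least_model_pos[OF a] p by (auto simp: pos_fact_def)
  qed
  then show "\<exists>p q. ?bot p q" by blast
next
  assume "\<exists>p q. ?bot p q"
  then obtain p q where pq: "?bot p q" by blast
  then have "p = n \<or> q = n" by (auto simp: max_def split: if_splits)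
  then show "last_bot F lt n n"
  proof
    assume "p = n"
    then show ?thesis unfolding last_bot_def using pq by (intro exI[of _ q]) auto
  next
    assume "q = n"
    then show ?thesis unfolding last_bot_def using pq by (intro exI[of _ p]) auto
  qed
qed

lemma flags_iff_derives_bot:
  "inner_bot F lt (n - 1) (n - 1) \<or> last_bot F lt n n \<longleftrightarrow> derives_bot n (least_model F lt)"
proof
  assume "inner_bot F lt (n - 1) (n - 1) \<or> last_bot F lt n n"
  then show "derives_bot n (least_model F lt)"
  proof
    assume "inner_bot F lt (n - 1) (n - 1)"
    then obtain p q where "1 \<le> p" "p < n" "1 \<le> q" "q < n" "(Inner, Bot p q) \<in> least_model F lt"
      unfolding inner_bot_iff by blast
    then show ?thesis unfolding derives_bot_def view_at_def by (intro exI[of _ p] exI[of _ q]) auto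
  next
    assume "last_bot F lt n n"
    then obtain p q where "1 \<le> p" "p \<le> n" "1 \<le> q" "q \<le> n" "max p q = n" "(Last, Bot p q) \<in> least_model F lt"
      unfolding last_bot_iff by blast
    then show ?thesis unfolding derives_bot_def view_at_def by (intro exI[of _ p] exI[of _ q]) auto
  qed
next
  assume "derives_bot n (least_model F lt)"
  then obtain p q where pq: "1 \<le> p" "p \<le> n" "1 \<le> q" "q \<le> n" "(view_at n p q, Bot p q) \<in> least_model F lt"
    unfolding derives_bot_def by blast
  show "inner_bot F lt (n - 1) (n - 1) \<or> last_bot F lt n n"
  proof (cases "max p q = n")
    case True
    then have "last_bot F lt n n"
      unfolding last_bot_iff using pq by (intro exI[of _ p] exI[of _ q]) (auto simp: view_at_def)
    then show ?thesis ..
  next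
    case False
    then have "inner_bot F lt (n - 1) (n - 1)"
      unfolding inner_bot_iff using pq by (intro exI[of _ p] exI[of _ q]) (auto simp: view_at_def)
    then show ?thesis ..
  qed
qed

section \<open>The simulating iterative array\<close>

text \<open>A cell at site (x, x + 2 c - 2) is in state \<open>Active cx cc ls d a r z\<close>, where cx and cc are
  the squeezed coordinates min x (cap K) and min c (cap K), ls lists the letters at the positions
  x, x - 1, ..., x - K (clipped at 1), d holds the facts of the least model in the window of the
  site in relative coordinates, a and r are the flags \<open>inner_bot\<close> and \<open>last_bot\<close> at the site,
  and z, read at the output cell, tells whether a word of length x is accepted.\<close>

datatype 'a cell_state = Quiet | Active nat nat "'a list" "rvfact set" bool bool bool

fun cs_data :: "'a cell_state \<Rightarrow> rvfact set" where
  "cs_data Quiet = {}"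
| "cs_data (Active _ _ _ d _ _ _) = d"

fun cs_inner_bot :: "'a cell_state \<Rightarrow> bool" where
  "cs_inner_bot Quiet = False"
| "cs_inner_bot (Active _ _ _ _ a _ _) = a"

fun cs_last_bot :: "'a cell_state \<Rightarrow> bool" where
  "cs_last_bot Quiet = False"
| "cs_last_bot (Active _ _ _ _ _ r _) = r"

fun cs_accept :: "'a cell_state \<Rightarrow> bool" where
  "cs_accept Quiet = False"
| "cs_accept (Active _ _ _ _ _ _ z) = z"

definition recent_letters :: "(nat \<Rightarrow> 'a) \<Rightarrow> nat \<Rightarrow> nat \<Rightarrow> 'a list" where
  "recent_letters lt K x = map (\<lambda>e. lt (max 1 (x - e))) [0..<K + 1]"

definition site_state :: "'a horn_formula \<Rightarrow> (nat \<Rightarrow> 'a) \<Rightarrow> nat \<Rightarrow> nat \<Rightarrow> 'a cell_state" where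
  "site_state F lt x c = (let K = max_offset F; y = x + 2 * c - 2 in
     Active (min x (cap K)) (min c (cap K)) (recent_letters lt K x) (window_data F (K + 2) lt x y)
       (inner_bot F lt x y) (last_bot F lt x y) (\<not> inner_bot F lt (x - 1) (y - 1) \<and> \<not> last_bot F lt x y))"

text \<open>\<open>Old\<close> holds the windows of the three sites of the previous time step that
  neighbour the site (x0, y0), re-expressed relative to (x0, y0).\<close>

definition new_window :: "'a horn_formula \<Rightarrow> nat \<Rightarrow> nat \<Rightarrow> 'a list \<Rightarrow> rvfact set \<Rightarrow> rvfact set" where
  "new_window F x0 y0 ls Old = (let E = abs_fact x0 y0 ` Old;
     New = local_closure F (\<lambda>k. ls ! (x0 - k)) (site_pts x0 y0) E
   in {r \<in> rel_window (rel_names F) (max_offset F + 2). abs_fact x0 y0 r \<in> E \<union> New})"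

definition has_bot :: "rvfact set \<Rightarrow> view \<Rightarrow> nat \<Rightarrow> nat \<Rightarrow> bool" where
  "has_bot d v d1 d2 \<longleftrightarrow> (v, RBot True d1 d2) \<in> d \<or> (v, RBot False d1 d2) \<in> d"

text \<open>The arguments are the squeezed column cc, the recent letters, the window Ld and flag La
  of the left neighbour, and the previous states M of the cell itself and R of its right
  neighbour.\<close>

definition site_step ::
  "'a horn_formula \<Rightarrow> nat \<Rightarrow> 'a list \<Rightarrow> rvfact set \<Rightarrow> bool \<Rightarrow> 'a cell_state \<Rightarrow> 'a cell_state \<Rightarrow> 'a cell_state" where
  "site_step F cc ls Ld La M R = (let
     cx = (case M of Quiet \<Rightarrow> 1 | Active cx _ _ _ _ _ _ \<Rightarrow> min (cx + 1) (cap (max_offset F)));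
     d = new_window F cx (cx + 2 * cc - 2) ls
           (shift_down2 ` Ld \<union> shift_diag ` cs_data M \<union> shift_left2 ` cs_data R);
     r = (cs_last_bot R \<or> has_bot d Last 1 1 \<or> has_bot d Last 0 1)
   in Active cx cc ls d
       (La \<or> cs_inner_bot M \<or> cs_inner_bot R \<or> has_bot d Inner 0 2 \<or> has_bot d Inner 0 1 \<or> has_bot d Inner 1 1)
       r (\<not> cs_inner_bot M \<and> \<not> r))"

lemma cs_guarded_site_state:
  fixes F :: "'a horn_formula"
  assumes "k < x \<Longrightarrow> y = x - k + 2 * c - 2"
  shows "cs_data (if x \<le> k then Quiet else site_state F lt (x - k) c) = window_data F (max_offset F + 2) lt (x - k) y"
    and "cs_inner_bot (if x \<le> k then Quiet else site_state F lt (x - k) c) = inner_bot F lt (x - k) y"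
    and "cs_last_bot (if x \<le> k then Quiet else site_state F lt (x - k) c) = last_bot F lt (x - k) y"
  using assms by (auto simp: site_state_def Let_def window_data_0 inner_bot_0 last_bot_0)

lemma old_window_data:
  fixes F :: "'a horn_formula" and lt :: "nat \<Rightarrow> 'a" and x y c :: nat
  defines "K \<equiv> max_offset F" and "L \<equiv> least_model F lt"
  defines "Old \<equiv> shift_down2 ` (if c = 1 then {} else window_data F (K + 2) lt x (y - 2))
     \<union> shift_diag ` window_data F (K + 2) lt (x - 1) (y - 1) \<union> shift_left2 ` window_data F (K + 2) lt (x - 2) y"
  assumes x: "1 \<le> x" and c: "1 \<le> c" and y: "y = x + 2 * c - 2"
  shows "abs_fact x y ` Old = L \<inter> nb_facts (rel_names F) (K + 2) c x y"
    and "Old \<subseteq> rel_window (rel_names F) (K + 4)"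
proof -
  have y1: "1 \<le> y" using y x c by auto
  have "abs_fact x y ` shift_down2 ` (if c = 1 then {} else window_data F (K + 2) lt x (y - 2)) =
      (if c = 1 then {} else L \<inter> window_facts (rel_names F) (K + 2) x (y - 2))"
  proof (cases "c = 1")
    case False
    then have "2 \<le> y" using y x c by auto
    then show ?thesis
      using False abs_fact_shift_down2 abs_fact_window_data unfolding L_def by (simp add: image_image)
  qed simp
  moreover have "abs_fact x y ` shift_diag ` window_data F (K + 2) lt (x - 1) (y - 1) =
      L \<inter> window_facts (rel_names F) (K + 2) (x - 1) (y - 1)"
    using abs_fact_shift_diag[OF y1] abs_fact_window_data unfolding L_def by (simp add: image_image)
  moreover have "abs_fact x y ` shift_left2 ` window_data F (K + 2) lt (x - 2) y =
      L \<inter> window_facts (rel_names F) (K + 2) (x - 2) y"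
    using abs_fact_shift_left2 abs_fact_window_data unfolding L_def by (simp add: image_image)
  ultimately show "abs_fact x y ` Old = L \<inter> nb_facts (rel_names F) (K + 2) c x y"
    unfolding Old_def image_Un nb_facts_def by auto
  have "(if c = 1 then {} else window_data F (K + 2) lt x (y - 2)) \<subseteq> rel_window (rel_names F) (K + 2)"
    by (simp add: window_data_subset)
  then show "Old \<subseteq> rel_window (rel_names F) (K + 4)"
    unfolding Old_def using window_data_subset shift_rel_window by blast
qed

lemma recent_letters_squeezed:
  assumes x: "1 \<le> x" and c: "1 \<le> c" and a: "a \<le> K"
  shows "lt (minus_pred x a) = recent_letters lt K x ! (squeezed_x K x - minus_pred (squeeze K x c x) a)"
proof -
  let ?xh = "squeezed_x K x"
  have xh1: "1 \<le> ?xh" using x cap_ge[of K] unfolding squeezed_x_def by simp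
  have fx: "squeeze K x c x = ?xh" using squeeze_x_offset[OF x c, of 0 K] by simp
  define e where "e = ?xh - max 1 (?xh - a)"
  have e: "e \<le> K" "e = min a (?xh - 1)" unfolding e_def using a xh1 by auto
  have "recent_letters lt K x ! (?xh - minus_pred (squeeze K x c x) a) = recent_letters lt K x ! e"
    unfolding fx e_def using xh1 by (simp add: minus_pred_eq)
  also have "\<dots> = lt (max 1 (x - e))" unfolding recent_letters_def using e(1) by (simp del: upt_Suc)
  also have "max 1 (x - e) = minus_pred x a"
    using e(2) x a cap_ge[of K] unfolding squeezed_x_def by (simp add: minus_pred_eq min_def max_def)
  finally show ?thesis by simp
qed

lemma local_closure_squeezed:
  fixes F :: "'a horn_formula" and lt :: "nat \<Rightarrow> 'a" and x y c :: nat
  defines "K \<equiv> max_offset F" and "L \<equiv> least_model F lt"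
  defines "U \<equiv> nb_facts (rel_names F) (K + 2) c x y" and "f \<equiv> squeeze K x c"
  assumes x: "1 \<le> x" and c: "1 \<le> c" and y: "y = x + 2 * c - 2"
    and letters: "\<forall>a \<le> K. lt (minus_pred x a) = lt' (minus_pred (f x) a)"
  shows "local_closure F lt' (site_pts (squeezed_x K x) (squeezed_y K x c)) (map_fact f ` (L \<inter> U))
     = map_fact f ` (L \<inter> facts_at (site_pts x y))"
proof -
  let ?P = "site_pts x y"
  have "local_closure F lt' (site_pts (squeezed_x K x) (squeezed_y K x c)) (map_fact f ` (L \<inter> U))
      = map_fact f ` local_closure F lt ?P (L \<inter> U)"
    unfolding site_pts_squeeze[OF x c y, symmetric] f_def
  proof (rule local_closure_map[where D = "squeeze_dom K x c"])
    show "hyp_holds lt v X Y M h = hyp_holds lt' v (squeeze K x c X) (squeeze K x c Y) (map_fact (squeeze K x c) ` M) h"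
      if C: "C \<in> set F" and h: "h \<in> set (fst C)" and P: "(X, Y) \<in> ?P"
        and M: "M \<subseteq> facts_within (squeeze_dom K x c)" for C h v X Y M
      using hyp_holds_squeeze[OF x c y P C h M[unfolded K_def]] letters unfolding K_def f_def by blast
    show "1 \<le> X \<and> 1 \<le> Y \<and> 1 \<le> squeeze K x c X \<and> 1 \<le> squeeze K x c Y" if P: "(X, Y) \<in> ?P" for X Y
      using site_pts_squeeze_ok[OF x c y P] squeeze_pos[OF x c] P unfolding squeeze_ok_def site_pts_def by auto
    show "facts_at ?P \<subseteq> facts_within (squeeze_dom K x c)" by (rule facts_at_site_pts_within[OF x c y])
    show "L \<inter> U \<subseteq> facts_within (squeeze_dom K x c)" using nb_facts_within[OF x c y] unfolding U_def by blast
  qed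
  also have "local_closure F lt ?P (L \<inter> U) = L \<inter> facts_at ?P"
    unfolding L_def U_def K_def
    by (rule least_model_at_eq_local_closure[symmetric]) (rule hyp_fact_local[OF x c y])
  finally show ?thesis .
qed

lemma abs_fact_squeezed_iff:
  fixes F :: "'a horn_formula" and lt :: "nat \<Rightarrow> 'a" and x y c :: nat
  defines "K \<equiv> max_offset F" and "L \<equiv> least_model F lt"
  defines "U \<equiv> nb_facts (rel_names F) (K + 2) c x y" and "f \<equiv> squeeze K x c"
  assumes x: "1 \<le> x" and c: "1 \<le> c" and y: "y = x + 2 * c - 2"
    and r: "r \<in> rel_window (rel_names F) (K + 2)"
  shows "abs_fact (squeezed_x K x) (squeezed_y K x c) r \<in> map_fact f ` (L \<inter> (U \<union> facts_at (site_pts x y)))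
    \<longleftrightarrow> abs_fact x y r \<in> L"
proof -
  let ?P = "site_pts x y" and ?D = "facts_within (squeeze_dom K x c)"
  have within: "L \<inter> (U \<union> facts_at ?P) \<subseteq> ?D"
    using nb_facts_within[OF x c y] facts_at_site_pts_within[OF x c y] unfolding U_def by blast
  have r4: "r \<in> rel_window (rel_names F) (K + 4)" using r unfolding rel_window_def by auto
  show ?thesis
  proof (cases "pos_fact (abs_fact x y r)")
    case True
    let ?g = "abs_fact x y r"
    have cover: "?g \<in> facts_at ?P \<union> U"
      using window_facts_cover[OF x c y abs_fact_in_window_facts[OF r True]] unfolding U_def K_def .
    then have "?g \<in> ?D"
      using nb_facts_within[OF x c y] facts_at_site_pts_within[OF x c y] unfolding U_def by blast
    then have "map_fact f ?g \<in> map_fact f ` (L \<inter> (U \<union> facts_at ?P)) \<longleftrightarrow> ?g \<in> L \<inter> (U \<union> facts_at ?P)"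
      using inj_on_image_mem_iff[OF inj_on_map_fact[OF inj_on_squeeze[OF x c]] _ within] unfolding f_def
      by blast
    moreover have "abs_fact (squeezed_x K x) (squeezed_y K x c) r = map_fact f ?g"
      using abs_fact_squeeze(2)[OF x c y r4 True] unfolding f_def .
    ultimately show ?thesis using cover by auto
  next
    case False
    have "pos_fact g" if g: "g \<in> map_fact f ` (L \<inter> (U \<union> facts_at ?P))" for g
    proof -
      obtain v h where g0: "(v, h) \<in> ?D" "g = map_fact f (v, h)" using g within by auto
      then have "1 \<le> f (fst (fact_pt h))" "1 \<le> f (snd (fact_pt h))"
        using squeeze_pos[OF x c] unfolding facts_within_def f_def by auto
      then show "pos_fact g" using g0(2) fact_pt_map_fact[of f "(v, h)"] unfolding pos_fact_def by simp
    qed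
    moreover have "\<not> pos_fact (abs_fact (squeezed_x K x) (squeezed_y K x c) r)"
      using abs_fact_squeeze(1)[OF x c y r4] False by simp
    ultimately show ?thesis using False least_model_pos unfolding L_def by blast
  qed
qed

lemma new_window_correct:
  fixes F :: "'a horn_formula" and lt :: "nat \<Rightarrow> 'a" and x y c :: nat
  defines "K \<equiv> max_offset F" and "L \<equiv> least_model F lt"
  defines "U \<equiv> nb_facts (rel_names F) (K + 2) c x y" and "f \<equiv> squeeze K x c"
  assumes x: "1 \<le> x" and c: "1 \<le> c" and y: "y = x + 2 * c - 2"
    and Old: "abs_fact x y ` Old = L \<inter> U" "Old \<subseteq> rel_window (rel_names F) (K + 4)"
  shows "new_window F (squeezed_x K x) (squeezed_y K x c) (recent_letters lt K x) Old = window_data F (K + 2) lt x y"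
proof -
  let ?xh = "squeezed_x K x" and ?yh = "squeezed_y K x c" and ?P = "site_pts x y"
  have E: "abs_fact ?xh ?yh ` Old = map_fact f ` (L \<inter> U)"
  proof -
    have "pos_fact (abs_fact x y r)" if "r \<in> Old" for r
      using that Old(1) least_model_pos unfolding L_def by blast
    then have "abs_fact ?xh ?yh ` Old = (\<lambda>r. map_fact f (abs_fact x y r)) ` Old"
      using abs_fact_squeeze(2)[OF x c y] Old(2) unfolding f_def K_def by (intro image_cong) auto
    then show ?thesis using Old(1) by (simp add: image_image[symmetric])
  qed
  have New: "local_closure F (\<lambda>k. recent_letters lt K x ! (?xh - k)) (site_pts ?xh ?yh) (map_fact f ` (L \<inter> U))
      = map_fact f ` (L \<inter> facts_at ?P)"
    unfolding K_def L_def U_def f_def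
    by (rule local_closure_squeezed[OF x c y]) (use recent_letters_squeezed[OF x c] in blast)
  have EN: "map_fact f ` (L \<inter> U) \<union> map_fact f ` (L \<inter> facts_at ?P) = map_fact f ` (L \<inter> (U \<union> facts_at ?P))"
    by blast
  have "abs_fact ?xh ?yh r \<in> map_fact f ` (L \<inter> (U \<union> facts_at ?P)) \<longleftrightarrow> abs_fact x y r \<in> L"
    if "r \<in> rel_window (rel_names F) (K + 2)" for r
    using abs_fact_squeezed_iff[OF x c y, where F = F and lt = lt] that unfolding K_def L_def U_def f_def by blast
  then show ?thesis
    unfolding new_window_def Let_def K_def[symmetric] E New EN window_data_def L_def[symmetric] by blast
qed

lemma has_bot_window_data:
  "d1 \<le> D \<Longrightarrow> d2 \<le> D \<Longrightarrow> has_bot (window_data F D lt x y) v d1 d2 \<longleftrightarrow>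
     (v, Bot (x - d1) (y + 1 - d2)) \<in> least_model F lt \<or> (v, Bot (y + 1 - d2) (x - d1)) \<in> least_model F lt"
  unfolding has_bot_def window_data_def rel_window_def by (simp add: rel_pt_def)

lemma site_step_correct:
  fixes F :: "'a horn_formula"
  defines "K \<equiv> max_offset F"
  assumes x: "1 \<le> x" and c: "1 \<le> c" and y: "y = x + 2 * c - 2"
    and Ld: "Ld = (if c = 1 then {} else window_data F (K + 2) lt x (y - 2))"
    and La: "La = (c \<noteq> 1 \<and> inner_bot F lt x (y - 2))"
    and M: "M = (if x \<le> 1 then Quiet else site_state F lt (x - 1) c)"
    and R: "R = (if x \<le> 2 then Quiet else site_state F lt (x - 2) (c + 1))"
  shows "site_step F (min c (cap K)) (recent_letters lt K x) Ld La M R = site_state F lt x c"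
proof -
  let ?L = "least_model F lt"
  have M_fields: "cs_data M = window_data F (K + 2) lt (x - 1) (y - 1)"
      "cs_inner_bot M = inner_bot F lt (x - 1) (y - 1)"
    using cs_guarded_site_state[of 1 x "y - 1" c F lt] x c y unfolding M K_def by auto
  have R_fields: "cs_data R = window_data F (K + 2) lt (x - 2) y"
      "cs_inner_bot R = inner_bot F lt (x - 2) y" "cs_last_bot R = last_bot F lt (x - 2) y"
    using cs_guarded_site_state[of 2 x y "c + 1" F lt] x c y unfolding R K_def by auto
  have cx: "(case M of Quiet \<Rightarrow> 1 | Active cx _ _ _ _ _ _ \<Rightarrow> min (cx + 1) (cap K)) = squeezed_x K x"
    using x cap_ge[of K] unfolding M site_state_def squeezed_x_def K_def by (auto simp: Let_def min_def)
  have cy: "squeezed_x K x + 2 * min c (cap K) - 2 = squeezed_y K x c"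
    unfolding squeezed_x_def squeezed_y_def by simp
  define d where "d = window_data F (K + 2) lt x y"
  have new_d: "new_window F (squeezed_x K x) (squeezed_y K x c) (recent_letters lt K x)
      (shift_down2 ` Ld \<union> shift_diag ` cs_data M \<union> shift_left2 ` cs_data R) = d"
    unfolding d_def Ld M_fields(1) R_fields(1) K_def
    by (rule new_window_correct[OF x c y old_window_data[OF x c y]])
  have bot: "has_bot d v d1 d2 \<longleftrightarrow> (v, Bot (x - d1) (y + 1 - d2)) \<in> ?L \<or> (v, Bot (y + 1 - d2) (x - d1)) \<in> ?L"
    if "d1 \<le> 2" "d2 \<le> 2" for v d1 d2
    using has_bot_window_data[of d1 "K + 2" d2] that unfolding d_def by simp
  have "y + 1 - 2 = y - 1" "y + 1 - 1 = y" using x c y by auto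
  then have flags: "(La \<or> cs_inner_bot M \<or> cs_inner_bot R \<or> has_bot d Inner 0 2 \<or> has_bot d Inner 0 1 \<or>
        has_bot d Inner 1 1) = inner_bot F lt x y"
      "(cs_last_bot R \<or> has_bot d Last 1 1 \<or> has_bot d Last 0 1) = last_bot F lt x y"
    unfolding inner_bot_rec[OF x c y] last_bot_rec[OF x] La M_fields R_fields
    using bot[of 0 2] bot[of 0 1] bot[of 1 1] by auto
  show ?thesis
    unfolding site_step_def Let_def K_def[symmetric] cx cy new_d flags
    unfolding site_state_def Let_def K_def[symmetric] y[symmetric] M_fields(2) d_def
    by (simp add: squeezed_x_def)
qed

text \<open>A cell learns its (squeezed) column and the recent letters from its left neighbour; the
  input cell has column 1 and pushes the letter it reads onto its own list of recent letters.\<close>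

definition step_inner ::
  "'a horn_formula \<Rightarrow> 'a cell_state \<Rightarrow> 'a cell_state \<Rightarrow> 'a cell_state \<Rightarrow> 'a cell_state" where
  "step_inner F L M R = (case L of Quiet \<Rightarrow> Quiet
     | Active _ ccL lsL dL aL _ _ \<Rightarrow> site_step F (min (ccL + 1) (cap (max_offset F))) lsL dL aL M R)"

definition step_input :: "'a horn_formula \<Rightarrow> 'a \<Rightarrow> 'a cell_state \<Rightarrow> 'a cell_state \<Rightarrow> 'a cell_state" where
  "step_input F s M R = site_step F 1
     (s # (case M of Quiet \<Rightarrow> replicate (max_offset F) s | Active _ _ ls _ _ _ _ \<Rightarrow> take (max_offset F) ls))
     {} False M R"

definition expected_state :: "'a horn_formula \<Rightarrow> (nat \<Rightarrow> 'a) \<Rightarrow> nat \<Rightarrow> nat \<Rightarrow> 'a cell_state" where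
  "expected_state F lt c t = (if t < c then Quiet else site_state F lt (t - c + 1) c)"

lemma recent_letters_Suc: "recent_letters lt K (Suc t) = lt (Suc t) # take K (recent_letters lt K t)"
proof (rule nth_equalityI)
  show "length (recent_letters lt K (Suc t)) = length (lt (Suc t) # take K (recent_letters lt K t))"
    unfolding recent_letters_def by simp
next
  fix i assume i: "i < length (recent_letters lt K (Suc t))"
  then have iK: "i < K + 1" unfolding recent_letters_def by simp
  show "recent_letters lt K (Suc t) ! i = (lt (Suc t) # take K (recent_letters lt K t)) ! i"
  proof (cases i)
    case 0 then show ?thesis unfolding recent_letters_def by (simp del: upt_Suc)
  next
    case (Suc j)
    then have j: "j < K" using iK by simp
    have "recent_letters lt K (Suc t) ! i = lt (max 1 (Suc t - i))" unfolding recent_letters_def using iK by (simp del: upt_Suc)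
    moreover have "(lt (Suc t) # take K (recent_letters lt K t)) ! i = lt (max 1 (t - j))"
      using Suc j unfolding recent_letters_def by (simp del: upt_Suc)
    ultimately show ?thesis using Suc by simp
  qed
qed

lemma recent_letters_0: "recent_letters lt K 0 = replicate (K + 1) (lt 1)"
  unfolding recent_letters_def by (simp add: map_replicate_const del: upt_Suc)

lemma expected_state_prev:
  "c \<le> Suc t \<Longrightarrow>
    expected_state F lt (c + j) t = (if Suc t - c \<le> j then Quiet else site_state F lt (Suc t - c - j) (c + j))"
  by (auto simp: expected_state_def Suc_diff_le)

lemma step_inner_expected_state:
  assumes c: "2 \<le> c"
  shows "step_inner F (expected_state F lt (c - 1) t) (expected_state F lt c t) (expected_state F lt (c + 1) t) = expected_state F lt c (Suc t)"
proof (cases "Suc t < c")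
  case True
  then show ?thesis unfolding expected_state_def step_inner_def by auto
next
  case False
  define x where "x = Suc t - c + 1"
  have x: "1 \<le> x" unfolding x_def by simp
  have c1: "1 \<le> c" using c by simp
  have L: "expected_state F lt (c - 1) t = site_state F lt x (c - 1)"
    using False c unfolding expected_state_def x_def by auto
  have M: "expected_state F lt c t = (if x \<le> 1 then Quiet else site_state F lt (x - 1) c)"
    using expected_state_prev[of c t F lt 0] False unfolding x_def by simp
  have R: "expected_state F lt (c + 1) t = (if x \<le> 2 then Quiet else site_state F lt (x - 2) (c + 1))"
    using expected_state_prev[of c t F lt 1] False unfolding x_def by simp
  have yL: "x + 2 * (c - 1) - 2 = (x + 2 * c - 2) - 2" using c by simp
  have mc: "min (Suc (min (c - Suc 0) (cap (max_offset F)))) (cap (max_offset F)) = min c (cap (max_offset F))" using c by (auto simp: min_def)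
  have "step_inner F (expected_state F lt (c - 1) t) (expected_state F lt c t) (expected_state F lt (c + 1) t) =
        site_step F (min c (cap (max_offset F))) (recent_letters lt (max_offset F) x) (window_data F (max_offset F + 2) lt x ((x + 2 * c - 2) - 2))
          (inner_bot F lt x ((x + 2 * c - 2) - 2)) (expected_state F lt c t) (expected_state F lt (c + 1) t)"
    unfolding L step_inner_def site_state_def Let_def yL by (simp add: mc)
  also have "\<dots> = site_state F lt x c"
    by (rule site_step_correct[OF x c1 refl]) (use c M R in auto)
  also have "\<dots> = expected_state F lt c (Suc t)" using False unfolding expected_state_def x_def by simp
  finally show ?thesis .
qed

lemma step_input_expected_state:
  shows "step_input F (lt (Suc t)) (expected_state F lt 1 t) (expected_state F lt 2 t) = expected_state F lt 1 (Suc t)"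
proof -
  define x where "x = Suc t"
  have x: "1 \<le> x" unfolding x_def by simp
  have M: "expected_state F lt 1 t = (if x \<le> 1 then Quiet else site_state F lt (x - 1) 1)"
    using expected_state_prev[of 1 t F lt 0] unfolding x_def by simp
  have R: "expected_state F lt 2 t = (if x \<le> 2 then Quiet else site_state F lt (x - 2) 2)"
    using expected_state_prev[of 1 t F lt 1] unfolding x_def by (simp add: numeral_2_eq_2)
  have ls: "lt (Suc t) # (case expected_state F lt 1 t of Quiet \<Rightarrow> replicate (max_offset F) (lt (Suc t))
        | Active _ _ ls _ _ _ _ \<Rightarrow> take (max_offset F) ls) = recent_letters lt (max_offset F) x"
  proof (cases t)
    case 0
    have "take (max_offset F) (recent_letters lt (max_offset F) 0) = replicate (max_offset F) (lt 1)"
      by (simp add: recent_letters_0 take_replicate del: replicate_Suc)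
    then show ?thesis unfolding x_def expected_state_def using recent_letters_Suc[of lt "max_offset F" 0] 0 by simp
  next
    case (Suc t') then show ?thesis unfolding x_def expected_state_def site_state_def Let_def using recent_letters_Suc[of lt "max_offset F" t] by simp
  qed
  have B: "cap (max_offset F) \<ge> 1" using cap_ge[of "max_offset F"] by simp
  have "step_input F (lt (Suc t)) (expected_state F lt 1 t) (expected_state F lt 2 t) =
        site_step F (min 1 (cap (max_offset F))) (recent_letters lt (max_offset F) x) {} False (expected_state F lt 1 t) (expected_state F lt 2 t)"
    unfolding step_input_def ls using B by simp
  also have "\<dots> = site_state F lt x 1"
    by (rule site_step_correct[OF x _ refl]) (use M R in \<open>auto simp: numeral_2_eq_2\<close>)
  also have "\<dots> = expected_state F lt 1 (Suc t)" unfolding expected_state_def x_def by simp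
  finally show ?thesis .
qed

lemma UNIV_view: "(UNIV :: view set) = {Inner, Last}"
  by (auto intro: view.exhaust)

lemma finite_rel_window: "finite RN \<Longrightarrow> finite (rel_window RN D)"
proof -
  assume fRN: "finite RN"
  let ?A = "(\<lambda>(v, S, ob, d1, d2). (v, RAtom S ob d1 d2)) ` ((UNIV :: view set) \<times> RN \<times> (UNIV :: bool set) \<times> {..D} \<times> {..D})"
  let ?B = "(\<lambda>(v, ob, d1, d2). (v, RBot ob d1 d2)) ` ((UNIV :: view set) \<times> (UNIV :: bool set) \<times> {..D} \<times> {..D})"
  have "rel_window RN D \<subseteq> ?A \<union> ?B"
  proof
    fix r assume r: "r \<in> rel_window RN D"
    obtain v h where rv: "r = (v, h)" by (cases r)
    show "r \<in> ?A \<union> ?B"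
    proof (cases h)
      case (RAtom S ob d1 d2)
      then have "(v, S, ob, d1, d2) \<in> (UNIV :: view set) \<times> RN \<times> (UNIV :: bool set) \<times> {..D} \<times> {..D}"
        using r rv unfolding rel_window_def by auto
      then have "r \<in> ?A" using rv RAtom by (auto intro: image_eqI[where x = "(v, S, ob, d1, d2)"])
      then show ?thesis by blast
    next
      case (RBot ob d1 d2)
      then have "(v, ob, d1, d2) \<in> (UNIV :: view set) \<times> (UNIV :: bool set) \<times> {..D} \<times> {..D}"
        using r rv unfolding rel_window_def by auto
      then have "r \<in> ?B" using rv RBot by (auto intro: image_eqI[where x = "(v, ob, d1, d2)"])
      then show ?thesis by blast
    qed
  qed
  moreover have "finite (?A \<union> ?B)" using fRN by (simp add: UNIV_view)
  ultimately show ?thesis by (rule finite_subset)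
qed

definition state_space :: "'a horn_formula \<Rightarrow> ('a::finite) cell_state set" where
  "state_space F = insert Quiet {Active cx cc ls d a r z | cx cc ls d a r z.
     cx \<le> cap (max_offset F) \<and> cc \<le> cap (max_offset F) \<and> length ls = max_offset F + 1 \<and>
     d \<subseteq> rel_window (rel_names F) (max_offset F + 2)}"

lemma finite_state_space: "finite (state_space (F :: ('a::finite) horn_formula))"
proof -
  let ?B = "cap (max_offset F)"
  let ?S = "{..?B} \<times> {..?B} \<times> {ls :: 'a list. set ls \<subseteq> UNIV \<and> length ls = max_offset F + 1} \<times> Pow (rel_window (rel_names F) (max_offset F + 2))
      \<times> (UNIV :: bool set) \<times> (UNIV :: bool set) \<times> (UNIV :: bool set)"
  have "state_space F \<subseteq> insert Quiet ((\<lambda>(cx, cc, ls, d, a, r, z). Active cx cc ls d a r z) ` ?S)"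
  proof
    fix s assume "s \<in> state_space F"
    then consider "s = Quiet" | cx cc ls d a r z where "s = Active cx cc ls d a r z" "cx \<le> ?B" "cc \<le> ?B"
        "length ls = max_offset F + 1" "d \<subseteq> rel_window (rel_names F) (max_offset F + 2)"
      unfolding state_space_def by blast
    then show "s \<in> insert Quiet ((\<lambda>(cx, cc, ls, d, a, r, z). Active cx cc ls d a r z) ` ?S)"
    proof cases
      case 1 then show ?thesis by simp
    next
      case (2 cx cc ls d a r z)
      then have "(cx, cc, ls, d, a, r, z) \<in> ?S" by simp
      then show ?thesis using 2(1) by (auto intro: image_eqI[where x = "(cx, cc, ls, d, a, r, z)"])
    qed
  qed
  moreover have "finite ?S"
  proof (intro finite_cartesian_product)
    show "finite {ls :: 'a list. set ls \<subseteq> UNIV \<and> length ls = max_offset F + 1}"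
      using finite_lists_length_eq[of "UNIV :: 'a set"] by simp
    show "finite (Pow (rel_window (rel_names F) (max_offset F + 2)))" using finite_rel_window[OF finite_rel_names] by simp
  qed auto
  ultimately show ?thesis by (meson finite_imageI finite_insert finite_subset)
qed

lemma countable_state_space: "countable (state_space (F :: ('a::finite) horn_formula))"
  using finite_state_space by (rule countable_finite)

text \<open>States are coded by natural numbers through an enumeration of the finite state space; the
  border state gets a fresh code, and whatever lies outside the state space is read as \<open>Quiet\<close>.\<close>

definition state_code :: "('a::finite) horn_formula \<Rightarrow> 'a cell_state \<Rightarrow> nat" where
  "state_code F = to_nat_on (state_space F)"

definition state_decode :: "('a::finite) horn_formula \<Rightarrow> nat \<Rightarrow> 'a cell_state" where
  "state_decode F p = (if p \<in> state_code F ` state_space F then from_nat_into (state_space F) p else Quiet)"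

definition clamp_state :: "('a::finite) horn_formula \<Rightarrow> 'a cell_state \<Rightarrow> 'a cell_state" where
  "clamp_state F s = (if s \<in> state_space F then s else Quiet)"

definition horn_ia :: "('a::finite) horn_formula \<Rightarrow> 'a iarray" where
  "horn_ia F = \<lparr>Qs = state_code F ` state_space F,
     Qacc = state_code F ` {s \<in> state_space F. cs_accept s},
     qlam = state_code F Quiet,
     qsharp = Suc (Max (state_code F ` state_space F)),
     dlt = (\<lambda>p q r. state_code F (clamp_state F (step_inner F (state_decode F p) (state_decode F q) (state_decode F r)))),
     dlt_in = (\<lambda>s p q r. state_code F (clamp_state F (step_input F s (state_decode F q) (state_decode F r))))\<rparr>"

lemma Quiet_in_state_space: "Quiet \<in> state_space F"
  unfolding state_space_def by simp

lemma clamp_state_in: "clamp_state F s \<in> state_space F"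
  unfolding clamp_state_def using Quiet_in_state_space by auto

lemma state_decode_code: "s \<in> state_space F \<Longrightarrow> state_decode F (state_code F s) = s"
  unfolding state_decode_def state_code_def using from_nat_into_to_nat_on[OF countable_state_space[of F]] by auto

lemma state_code_eq_iff: "s \<in> state_space F \<Longrightarrow> s' \<in> state_space F \<Longrightarrow> (state_code F s = state_code F s') = (s = s')"
  unfolding state_code_def using inj_on_to_nat_on[OF countable_state_space[of F]] by (meson inj_on_eq_iff)

lemma state_decode_outside: "p \<notin> state_code F ` state_space F \<Longrightarrow> state_decode F p = Quiet"
  unfolding state_decode_def by simp

lemma border_code_notin: "Suc (Max (state_code F ` state_space F)) \<notin> state_code F ` state_space F"
proof
  assume a: "Suc (Max (state_code F ` state_space F)) \<in> state_code F ` state_space F"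
  have "finite (state_code F ` state_space F)" using finite_state_space[of F] by (rule finite_imageI)
  then have "Suc (Max (state_code F ` state_space F)) \<le> Max (state_code F ` state_space F)" using a by (rule Max_ge)
  then show False by simp
qed

lemma step_inner_Quiet: "step_inner F Quiet M R = Quiet"
  unfolding step_inner_def by simp

lemma ia_wf_horn_ia: "ia_wf (horn_ia (F :: ('a::finite) horn_formula))"
proof -
  have dl: "state_decode F (state_code F Quiet) = Quiet" using state_decode_code[OF Quiet_in_state_space] .
  have ds: "state_decode F (Suc (Max (state_code F ` state_space F))) = Quiet" using state_decode_outside[OF border_code_notin] .
  show ?thesis
    unfolding ia_wf_def horn_ia_def
    using finite_state_space[of F] border_code_notin[of F] clamp_state_in[of F] Quiet_in_state_space[of F] dl ds
    by (auto simp: step_inner_Quiet clamp_state_def)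
qed

lemma site_state_in: "site_state F lt x c \<in> state_space F"
  unfolding site_state_def state_space_def Let_def recent_letters_def using window_data_subset[of F "max_offset F + 2" lt x "x + 2 * c - 2"] by auto

lemma expected_state_in: "expected_state F lt c t \<in> state_space F"
  unfolding expected_state_def using site_state_in Quiet_in_state_space by auto

lemma state_decode_cfg_horn_ia:
  fixes F :: "('a::finite) horn_formula"
  assumes "t \<le> length w" "1 \<le> c" "c + t \<le> length w + 1"
  shows "state_decode F (cfg (horn_ia F) w t c) = expected_state F (letter_at w) c t"
  using assms
proof (induction t arbitrary: c)
  case 0
  then show ?case
    using state_decode_code[OF Quiet_in_state_space] state_decode_outside[OF border_code_notin]
    by (auto simp: horn_ia_def expected_state_def)
next
  case (Suc t)
  have decode_step: "state_decode F (state_code F (clamp_state F s)) = clamp_state F s" for s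
    using state_decode_code[OF clamp_state_in] .
  have clamp: "clamp_state F (expected_state F lt c t) = expected_state F lt c t" for lt c t
    using expected_state_in[of F lt c t] unfolding clamp_state_def by simp
  have "w \<noteq> []" using Suc.prems by auto
  show ?case
  proof (cases "c = 1")
    case True
    moreover have "w ! t = letter_at w (Suc t)" by (simp add: letter_at_def)
    ultimately have "state_decode F (cfg (horn_ia F) w (Suc t) c) = clamp_state F
        (step_input F (letter_at w (Suc t)) (expected_state F (letter_at w) 1 t) (expected_state F (letter_at w) 2 t))"
      using Suc \<open>w \<noteq> []\<close> by (simp add: horn_ia_def decode_step)
    then show ?thesis using True by (simp only: step_input_expected_state clamp)
  next
    case False
    then have "state_decode F (cfg (horn_ia F) w (Suc t) c) = clamp_state F (step_inner F
        (expected_state F (letter_at w) (c - 1) t) (expected_state F (letter_at w) c t) (expected_state F (letter_at w) (c + 1) t))"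
      using Suc by (simp add: horn_ia_def decode_step)
    moreover have "2 \<le> c" using False Suc.prems by simp
    ultimately show ?thesis by (simp only: step_inner_expected_state clamp)
  qed
qed

lemma cfg_horn_ia:
  fixes F :: "('a::finite) horn_formula"
  assumes "1 \<le> c" "c \<le> length w" "c + t \<le> length w + 1"
  shows "cfg (horn_ia F) w t c = state_code F (expected_state F (letter_at w) c t)"
proof -
  have "cfg (horn_ia F) w t c \<in> state_code F ` state_space F"
    using cfg_in_Qs[OF ia_wf_horn_ia assms(1,2)] by (simp add: horn_ia_def)
  then obtain s where "s \<in> state_space F" "cfg (horn_ia F) w t c = state_code F s" by blast
  moreover have "state_decode F (cfg (horn_ia F) w t c) = expected_state F (letter_at w) c t"
    by (rule state_decode_cfg_horn_ia) (use assms in auto)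
  ultimately show ?thesis using state_decode_code by metis
qed

lemma horn_ia_accepts_iff:
  fixes F :: "('a::finite) horn_formula"
  assumes "w \<noteq> []"
  shows "ia_accepts_rt (horn_ia F) w \<longleftrightarrow> horn_models w F"
proof -
  let ?n = "length w"
  have n: "1 \<le> ?n" using assms by (cases w) auto
  have "cfg (horn_ia F) w ?n 1 = state_code F (site_state F (letter_at w) ?n 1)"
    using cfg_horn_ia[of 1 w ?n F] n assms by (simp add: expected_state_def)
  then have "ia_accepts_rt (horn_ia F) w \<longleftrightarrow> cs_accept (site_state F (letter_at w) ?n 1)"
    unfolding ia_accepts_rt_def using site_state_in[of F "letter_at w" ?n 1] state_code_eq_iff[of _ F]
    by (auto simp: horn_ia_def)
  also have "\<dots> \<longleftrightarrow> \<not> derives_bot ?n (least_model F (letter_at w))"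
    unfolding flags_iff_derives_bot[symmetric] site_state_def Let_def by simp
  also have "\<dots> \<longleftrightarrow> horn_models w F" using horn_models_iff by blast
  finally show ?thesis .
qed

theorem pred_dio_ESO_HORN_subset_RealTime_IA: "pred_dio_ESO_HORN \<subseteq> (RealTime_IA :: ('a::finite) list set set)"
proof
  fix L :: "'a list set" assume "L \<in> pred_dio_ESO_HORN"
  then obtain F :: "'a horn_formula" where L: "L = {w. w \<noteq> [] \<and> horn_models w F}"
    unfolding pred_dio_ESO_HORN_def by blast
  have "[] \<notin> L" using L by simp
  moreover have "ia_wf (horn_ia F) \<and> (\<forall>w. w \<noteq> [] \<longrightarrow> (w \<in> L \<longleftrightarrow> ia_accepts_rt (horn_ia F) w))"
    using ia_wf_horn_ia horn_ia_accepts_iff L by auto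
  ultimately show "L \<in> RealTime_IA" unfolding RealTime_IA_def by blast
qed

theorem theorem2:
  shows "(RealTime_IA :: ('a::finite) list set set) = pred_dio_ESO_HORN"
  using RealTime_IA_subset_pred_dio_ESO_HORN pred_dio_ESO_HORN_subset_RealTime_IA by (rule equalityI)

end
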